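(* Let $\mathcal{H}$ be an $n$-dimensional complex Hilbert space and let $\mathcal{G}=\{U_1,\dots,U_m\}$ be a finite group of $m$ unitary matrices on $\mathcal{H}$ with $U_1=I$. Let $\rho=\phi\phi^*$ be a density operator on $\mathcal{H}$ (with $\phi$ a factor matrix), and let $\rho_i=U_i\rho U_i^*$, $i=1,\dots,m$, be a geometrically uniform (GU) state set with equal prior probabilities $1/m$, whose eigenvectors collectively span $\mathcal{H}$. Let $\phi_i=U_i\phi$ and let $\Phi$ be the matrix with block columns $\phi_1,\dots,\phi_m$. Then the least-squares measurement (LSM) is given by the operators $\Sigma_i=\mu_i\mu_i^*$ with $\mu_i=U_i\mu$, where $\mu=(\Phi\Phi^* )^{-1/2}\phi$. Moreover: (1) the LSM operators are GU with generating group $\mathcal{G}$, i.e. $\Sigma_i=U_i\Sigma_1U_i^*$ for all $i$; (2) the probability of correctly detecting each state using the LSM is the same, i.e. $\operatorname{tr}(\rho_i\Sigma_i)$ does not depend on $i$; (3) if $\mu^*\phi=\phi^*(\Phi\Phi^* )^{-1/2}\phi=\alpha I$ for some constant $\alpha$, then the LSM minimizes the probability of a detection error; in particular, if $\phi$ is a vector (so that every $\rho_i$ has rank one), the LSM minimizes the probability of a detection error. Finally, for an arbitrary generator $\phi$, there is an optimal measurement (one minimizing the probability of a detection error) which is GU with generating group $\mathcal{G}$: namely $\Pi_i=U_i\Pi U_i^*$, where $\Pi$ is a Hermitian operator maximizing $\operatorname{tr}(\rho\Pi)$ subject to $\Pi\ge 0$ and $\sum_{i=1}^m U_i\Pi 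U_i^*=I$.
   Context: A density operator is a positive semidefinite Hermitian operator of trace one; a factor of $\rho$ is any matrix $\phi$ with $\rho=\phi\phi^*$. A measurement is a collection of positive semidefinite Hermitian operators $\Pi_1,\dots,\Pi_m$ on $\mathcal{H}$ with $\sum_i\Pi_i=I$; with equal priors the probability of correct detection is $P_d=\frac1m\sum_i\operatorname{tr}(\rho_i\Pi_i)$, and the probability of a detection error is $1-P_d$. For general factors $\phi_i$ of $\rho_i$ and priors $p_i$, the least-squares measurement consists of $\Sigma_i=\mu_i\mu_i^*$ with $\mu_i=(\Psi\Psi^* )^{-1/2}\psi_i$, $\psi_i=\sqrt{p_i}\phi_i$, $\Psi$ the matrix of block columns $\psi_i$; the operators $\Sigma_i$ do not depend on the choice of factors. $(\cdot)^{-1/2}$ denotes the inverse of the positive Hermitian square root. $I$ in $\alpha I$ is the identity of size equal to the number of columns of $\phi$. *)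

theory Defs
  imports "Jordan_Normal_Form.Schur_Decomposition" "Jordan_Normal_Form.VS_Connect"
begin

definition trace_mat :: "complex mat \<Rightarrow> complex" where
  "trace_mat A = (\<Sum>i<dim_row A. A $$ (i,i))"

definition hermitian_mat :: "complex mat \<Rightarrow> bool" where
  "hermitian_mat A \<longleftrightarrow> square_mat A \<and> mat_adjoint A = A"

definition psd_mat :: "complex mat \<Rightarrow> bool" where
  "psd_mat A \<longleftrightarrow> hermitian_mat A \<and>
     (\<forall>v \<in> carrier_vec (dim_row A). 0 \<le> Re (conjugate v \<bullet> (A *\<^sub>v v)))"

definition unitary_mat :: "nat \<Rightarrow> complex mat \<Rightarrow> bool" where
  "unitary_mat n U \<longleftrightarrow> U \<in> carrier_mat n n \<and> mat_adjoint U * U = 1\<^sub>m n"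

definition mat_inv :: "complex mat \<Rightarrow> complex mat" where
  "mat_inv A = (THE B. B \<in> carrier_mat (dim_row A) (dim_row A) \<and>
                      A * B = 1\<^sub>m (dim_row A) \<and> B * A = 1\<^sub>m (dim_row A))"

definition psd_sqrt :: "complex mat \<Rightarrow> complex mat" where
  "psd_sqrt A = (THE B. B \<in> carrier_mat (dim_row A) (dim_row A) \<and> psd_mat B \<and> B * B = A)"

definition inv_sqrt :: "complex mat \<Rightarrow> complex mat" where
  "inv_sqrt A = mat_inv (psd_sqrt A)"

text \<open>the matrix whose block columns are the given n-row matrices (in order)\<close>
definition block_cols :: "nat \<Rightarrow> complex mat list \<Rightarrow> complex mat" where
  "block_cols n As = foldr (\<lambda>A B. four_block_mat A B (0\<^sub>m 0 (dim_col A)) (0\<^sub>m 0 (dim_col B)))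
                        As (0\<^sub>m n 0)"

definition msum :: "nat \<Rightarrow> complex mat list \<Rightarrow> complex mat" where
  "msum n Ms = foldr (+) Ms (0\<^sub>m n n)"

definition is_measurement :: "nat \<Rightarrow> complex mat list \<Rightarrow> bool" where
  "is_measurement n Ps \<longleftrightarrow> (\<forall>P \<in> set Ps. P \<in> carrier_mat n n \<and> psd_mat P) \<and> msum n Ps = 1\<^sub>m n"

definition detect_prob :: "real list \<Rightarrow> complex mat list \<Rightarrow> complex mat list \<Rightarrow> real" where
  "detect_prob ps rhos Ps = (\<Sum>i<length rhos. ps ! i * Re (trace_mat (rhos ! i * Ps ! i)))"

definition equal_priors :: "nat \<Rightarrow> real list" where
  "equal_priors m = replicate m (1 / real m)"

definition optimal_measurement :: "nat \<Rightarrow> real list \<Rightarrow> complex mat list \<Rightarrow> complex mat list \<Rightarrow> bool" where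
  "optimal_measurement n ps rhos Ps \<longleftrightarrow>
     length Ps = length rhos \<and> is_measurement n Ps \<and>
     (\<forall>Qs. length Qs = length rhos \<and> is_measurement n Qs \<longrightarrow>
           detect_prob ps rhos Qs \<le> detect_prob ps rhos Ps)"

definition lsm :: "nat \<Rightarrow> real list \<Rightarrow> complex mat list \<Rightarrow> complex mat list" where
  "lsm n ps phis =
     (let psis = map2 (\<lambda>p phi. complex_of_real (sqrt p) \<cdot>\<^sub>m phi) ps phis;
          Psi = block_cols n psis;
          S = inv_sqrt (Psi * mat_adjoint Psi)
      in map (\<lambda>psi. (S * psi) * mat_adjoint (S * psi)) psis)"

definition vspan :: "nat \<Rightarrow> complex vec set \<Rightarrow> complex vec set" where
  "vspan n S = LinearCombinations.module.span class_ring (module_vec TYPE(complex) n) S"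

definition eigvecs_nz :: "nat \<Rightarrow> complex mat \<Rightarrow> complex vec set" where
  "eigvecs_nz n A = {v \<in> carrier_vec n. v \<noteq> 0\<^sub>v n \<and> (\<exists>l. l \<noteq> 0 \<and> A *\<^sub>v v = l \<cdot>\<^sub>v v)}"

definition GU_feasible :: "nat \<Rightarrow> complex mat list \<Rightarrow> complex mat \<Rightarrow> bool" where
  "GU_feasible n Us P \<longleftrightarrow> P \<in> carrier_mat n n \<and> hermitian_mat P \<and> psd_mat P \<and>
      msum n (map (\<lambda>U. U * P * mat_adjoint U) Us) = 1\<^sub>m n"

definition GU_maximizer :: "nat \<Rightarrow> complex mat list \<Rightarrow> complex mat \<Rightarrow> complex mat \<Rightarrow> bool" where
  "GU_maximizer n Us rho P \<longleftrightarrow> GU_feasible n Us P \<and>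
      (\<forall>Q. GU_feasible n Us Q \<longrightarrow> Re (trace_mat (rho * Q)) \<le> Re (trace_mat (rho * P)))"

end

theory Submission
  imports Defs "HOL-Analysis.Function_Topology"
begin

text \<open>
  Let \<open>G = \<Phi> \<Phi>\<^sup>* = \<Sum>\<^sub>i U\<^sub>i \<rho> U\<^sub>i\<^sup>*\<close>. Since the \<open>U\<^sub>i\<close> form a group, \<open>U G U\<^sup>* = G\<close> for every
  \<open>U \<in> \<G>\<close>; by uniqueness of the positive square root the same holds for \<open>S = G\<^bsup>1/2\<^esup>\<close> and
  \<open>T = G\<^bsup>-1/2\<^esup>\<close> (which exists because the eigenvectors of the \<open>\<rho>\<^sub>i\<close> span, so \<open>G\<close> is
  positive definite). Hence \<open>T U\<^sub>i \<phi> = U\<^sub>i T \<phi>\<close>, which gives the GU structure of the LSM and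
  the constant detection probabilities.

  If \<open>\<mu>\<^sup>* \<phi> = \<alpha> I\<close>, then \<open>\<alpha> \<ge> 0\<close> and \<open>X = \<alpha> S\<close> dominates every \<open>\<rho>\<^sub>i\<close>, so for any measurement
  \<open>tr (\<rho>\<^sub>i Q\<^sub>i) \<le> tr (X Q\<^sub>i)\<close>; summing gives the bound \<open>tr X / m = \<alpha>\<^sup>2 r\<close>, which the LSM attains.

  Finally, averaging an arbitrary measurement \<open>Q\<close> over the group,
  \<open>\<Pi> = (1/m) \<Sum>\<^sub>i U\<^sub>i\<^sup>* Q\<^sub>i U\<^sub>i\<close>, gives a feasible point of the GU problem with the same detection
  probability, so the GU measurement generated by a maximizer (which exists since the feasible
  set is compact) is optimal.
\<close>

lemma mat_adjoint_dim[simp]: "dim_row (mat_adjoint A) = dim_col A" "dim_col (mat_adjoint A) = dim_row A"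
  unfolding mat_adjoint_def by auto

lemma index_mat_adjoint[simp]: "i < dim_col A \<Longrightarrow> j < dim_row A \<Longrightarrow> mat_adjoint A $$ (i,j) = cnj (A $$ (j,i))"
  unfolding mat_adjoint_def by (simp add: mat_of_rows_index)

lemma mat_adjoint_carrier[simp]: "A \<in> carrier_mat a b \<Longrightarrow> mat_adjoint A \<in> carrier_mat b a"
  using carrier_matD[of A a b] by (intro carrier_matI) simp_all

lemma mat_adjoint_mat_adjoint[simp]: "mat_adjoint (mat_adjoint A) = (A :: complex mat)"
  by (rule eq_matI, auto)

lemma mat_adjoint_mult: assumes "A \<in> carrier_mat a b" "B \<in> carrier_mat b c"
  shows "mat_adjoint (A * B) = mat_adjoint B * mat_adjoint (A :: complex mat)"
  by (rule eq_matI, insert assms, auto simp: scalar_prod_def sum_conjugate[symmetric] ac_simps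
     intro!: sum.cong)

lemma mat_adjoint_one[simp]: "mat_adjoint (1\<^sub>m n) = (1\<^sub>m n :: complex mat)"
  by (rule eq_matI, auto)

lemma mat_adjoint_smult[simp]: "mat_adjoint (c \<cdot>\<^sub>m A) = cnj c \<cdot>\<^sub>m mat_adjoint (A :: complex mat)"
  by (rule eq_matI, auto)

lemma mat_adjoint_minus: "A \<in> carrier_mat a b \<Longrightarrow> B \<in> carrier_mat a b \<Longrightarrow>
  mat_adjoint (A - B) = mat_adjoint A - mat_adjoint (B :: complex mat)"
  by (rule eq_matI, auto)

lemma conjugate_sprod_sum: "x \<in> carrier_vec n \<Longrightarrow> y \<in> carrier_vec n \<Longrightarrow>
   conjugate x \<bullet> y = (\<Sum>i<n. cnj (x $ i) * (y :: complex vec) $ i)"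
  by (auto simp: scalar_prod_def lessThan_atLeast0 intro!: sum.cong)

lemma index_mult_mat_vec_sum: "A \<in> carrier_mat n m \<Longrightarrow> y \<in> carrier_vec m \<Longrightarrow> i < n \<Longrightarrow>
   (A *\<^sub>v y) $ i = (\<Sum>k<m. A $$ (i,k) * (y :: complex vec) $ k)"
  by (auto simp: scalar_prod_def lessThan_atLeast0 intro!: sum.cong)

lemma index_mult_mat_sum: "A \<in> carrier_mat a b \<Longrightarrow> B \<in> carrier_mat b c \<Longrightarrow> i < a \<Longrightarrow> j < c \<Longrightarrow>
   (A * B) $$ (i,j) = (\<Sum>k<b. A $$ (i,k) * (B :: complex mat) $$ (k,j))"
  by (auto simp: scalar_prod_def lessThan_atLeast0 intro!: sum.cong)

lemma cnj_conjugate_sprod: "x \<in> carrier_vec n \<Longrightarrow> y \<in> carrier_vec n \<Longrightarrow>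
   cnj (conjugate x \<bullet> y) = conjugate y \<bullet> (x :: complex vec)"
  by (simp add: conjugate_sprod_sum cnj_sum ac_simps)

lemma conjugate_sprod_self: "v \<in> carrier_vec n \<Longrightarrow> conjugate v \<bullet> v = of_real (\<Sum>i<n. (cmod ((v :: complex vec) $ i))\<^sup>2)"
proof -
  assume v: "v \<in> carrier_vec n"
  have z: "\<And>z::complex. cnj z * z = of_real ((cmod z)^2)" by (metis complex_norm_square mult.commute)
  show ?thesis unfolding conjugate_sprod_sum[OF v v] z of_real_sum ..
qed

lemma conjugate_sprod_self_eq_0: assumes v: "(v :: complex vec) \<in> carrier_vec n"
  shows "conjugate v \<bullet> v = 0 \<longleftrightarrow> v = 0\<^sub>v n"
proof
  assume h: "conjugate v \<bullet> v = 0"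
  have "complex_of_real (\<Sum>i<n. (cmod (v $ i))\<^sup>2) = 0" by (metis h conjugate_sprod_self[OF v])
  then have "(\<Sum>i<n. (cmod (v $ i))\<^sup>2) = 0" by (simp only: of_real_eq_0_iff)
  then have "\<forall>i\<in>{..<n}. (cmod (v $ i))\<^sup>2 = 0" by (subst (asm) sum_nonneg_eq_0_iff) auto
  then show "v = 0\<^sub>v n" using v by (intro eq_vecI) auto
qed (insert v, auto simp: scalar_prod_def)

lemma mat_adjoint_mult_vec_carrier: "B \<in> carrier_mat a b \<Longrightarrow> mat_adjoint B *\<^sub>v v \<in> carrier_vec b"
  using carrier_matD[of B a b] by (intro carrier_vecI) simp

lemma mult_mat_vec_carrier_dim: "B \<in> carrier_mat a b \<Longrightarrow> B *\<^sub>v v \<in> carrier_vec a"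
  using carrier_matD[of B a b] by (intro carrier_vecI) simp

lemma sprod_mat_adjoint: assumes A: "A \<in> carrier_mat a b" and x: "x \<in> carrier_vec a" and y: "y \<in> carrier_vec b"
  shows "conjugate x \<bullet> (A *\<^sub>v y) = conjugate (mat_adjoint A *\<^sub>v x) \<bullet> (y :: complex vec)"
proof -
  have "conjugate x \<bullet> (A *\<^sub>v y) = (\<Sum>i<a. cnj (x $ i) * (\<Sum>k<b. A $$ (i,k) * y $ k))"
    using A x y by (auto simp: scalar_prod_def lessThan_atLeast0 intro!: sum.cong)
  also have "\<dots> = (\<Sum>k<b. (\<Sum>i<a. cnj (x $ i) * A $$ (i,k)) * y $ k)"
    by (simp add: sum_distrib_left sum_distrib_right ac_simps sum.swap[of _ "{..<a}"])
  also have "\<dots> = conjugate (mat_adjoint A *\<^sub>v x) \<bullet> y"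
    using A x y by (auto simp: scalar_prod_def lessThan_atLeast0 cnj_sum ac_simps intro!: sum.cong)
  finally show ?thesis .
qed

lemma trace_mat_carrier: "A \<in> carrier_mat n n \<Longrightarrow> trace_mat A = (\<Sum>i<n. A $$ (i,i))"
  unfolding trace_mat_def by auto

lemma trace_mat_comm: assumes "A \<in> carrier_mat a b" "B \<in> carrier_mat b a"
  shows "trace_mat (A * B) = trace_mat (B * (A :: complex mat))"
proof -
  have "trace_mat (A * B) = (\<Sum>i<a. \<Sum>k<b. A $$ (i,k) * B $$ (k,i))"
    using assms unfolding trace_mat_def by (auto simp: scalar_prod_def lessThan_atLeast0 intro!: sum.cong)
  also have "\<dots> = (\<Sum>k<b. \<Sum>i<a. B $$ (k,i) * A $$ (i,k))"
    by (subst sum.swap, simp add: ac_simps)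
  also have "\<dots> = trace_mat (B * A)"
    using assms unfolding trace_mat_def by (auto simp: scalar_prod_def lessThan_atLeast0 intro!: sum.cong)
  finally show ?thesis .
qed

lemma trace_mat_smult: "A \<in> carrier_mat n n \<Longrightarrow> trace_mat (c \<cdot>\<^sub>m A) = c * trace_mat A"
  unfolding trace_mat_def by (auto simp: sum_distrib_left)

lemma trace_mat_one: "trace_mat (1\<^sub>m n) = of_nat n"
  unfolding trace_mat_def by auto

lemma one_smult_mat[simp]: "(1::complex) \<cdot>\<^sub>m A = A"
  by (rule eq_matI) auto

lemma smult_smult_mat: "a \<cdot>\<^sub>m (b \<cdot>\<^sub>m A) = (a * b) \<cdot>\<^sub>m (A :: complex mat)"
  by (rule eq_matI, auto)

definition mat_sum :: "nat \<Rightarrow> ('i \<Rightarrow> complex mat) \<Rightarrow> 'i set \<Rightarrow> complex mat" where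
  "mat_sum n F K = mat n n (\<lambda>(i,j). \<Sum>k\<in>K. F k $$ (i,j))"

lemma mat_sum_carrier[simp]: "mat_sum n F K \<in> carrier_mat n n"
  and mat_sum_dims[simp]: "dim_row (mat_sum n F K) = n" "dim_col (mat_sum n F K) = n"
  unfolding mat_sum_def by auto

lemma mat_sum_index[simp]: "i < n \<Longrightarrow> j < n \<Longrightarrow> mat_sum n F K $$ (i,j) = (\<Sum>k\<in>K. F k $$ (i,j))"
  unfolding mat_sum_def by auto

lemma msum_eq_mat_sum: "(\<forall>M\<in>set Ms. M \<in> carrier_mat n n) \<Longrightarrow> msum n Ms = mat_sum n (\<lambda>k. Ms ! k) {..<length Ms}"
proof (induct Ms)
  case Nil
  then show ?case by (auto simp: msum_def intro!: eq_matI)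
next
  case (Cons M Ms)
  then have IH: "msum n Ms = mat_sum n (\<lambda>k. Ms ! k) {..<length Ms}" by auto
  have "msum n (M # Ms) = M + msum n Ms" unfolding msum_def by simp
  also have "\<dots> = mat_sum n (\<lambda>k. (M # Ms) ! k) {..<length (M # Ms)}"
    unfolding IH using Cons(2) by (intro eq_matI, auto simp del: sum.lessThan_Suc simp: sum.lessThan_Suc_shift)
  finally show ?case .
qed

lemma mat_sum_cong: "(\<And>k. k \<in> K \<Longrightarrow> F k = G k) \<Longrightarrow> mat_sum n F K = mat_sum n G K"
  unfolding mat_sum_def by (auto intro!: eq_matI sum.cong)

lemma mat_sum_reindex: "inj_on g K \<Longrightarrow> mat_sum n F (g ` K) = mat_sum n (\<lambda>k. F (g k)) K"
  unfolding mat_sum_def by (auto intro!: eq_matI simp: sum.reindex)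

lemma mat_sum_const: assumes "A \<in> carrier_mat n n"
  shows "mat_sum n (\<lambda>k. A) K = of_nat (card K) \<cdot>\<^sub>m A"
  using assms unfolding mat_sum_def by (auto intro!: eq_matI)

lemma mat_sum_mult_left: assumes A: "A \<in> carrier_mat n n" and F: "\<And>k. k \<in> K \<Longrightarrow> F k \<in> carrier_mat n n"
  and K: "finite K"
  shows "A * mat_sum n F K = mat_sum n (\<lambda>k. A * F k) K"
proof (rule eq_matI)
  have Fd[simp]: "k \<in> K \<Longrightarrow> dim_row (F k) = n" "k \<in> K \<Longrightarrow> dim_col (F k) = n" for k using F[of k] by auto
  fix i j assume ij: "i < dim_row (mat_sum n (\<lambda>k. A * F k) K)" "j < dim_col (mat_sum n (\<lambda>k. A * F k) K)"
  have "(A * mat_sum n F K) $$ (i,j) = (\<Sum>l<n. A $$ (i,l) * (\<Sum>k\<in>K. F k $$ (l,j)))"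
    using A ij by (auto simp: scalar_prod_def lessThan_atLeast0 intro!: sum.cong)
  also have "\<dots> = (\<Sum>k\<in>K. \<Sum>l<n. A $$ (i,l) * F k $$ (l,j))"
    by (simp add: sum_distrib_left sum.swap[of _ K])
  also have "\<dots> = mat_sum n (\<lambda>k. A * F k) K $$ (i,j)"
    using A ij F by (auto simp: scalar_prod_def lessThan_atLeast0 intro!: sum.cong)
  finally show "(A * mat_sum n F K) $$ (i,j) = mat_sum n (\<lambda>k. A * F k) K $$ (i,j)" .
qed (insert A, auto)

lemma mat_sum_mult_right: assumes A: "A \<in> carrier_mat n n" and F: "\<And>k. k \<in> K \<Longrightarrow> F k \<in> carrier_mat n n"
  and K: "finite K"
  shows "mat_sum n F K * A = mat_sum n (\<lambda>k. F k * A) K"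
proof (rule eq_matI)
  have Fd[simp]: "k \<in> K \<Longrightarrow> dim_row (F k) = n" "k \<in> K \<Longrightarrow> dim_col (F k) = n" for k using F[of k] by auto
  fix i j assume ij: "i < dim_row (mat_sum n (\<lambda>k. F k * A) K)" "j < dim_col (mat_sum n (\<lambda>k. F k * A) K)"
  have "(mat_sum n F K * A) $$ (i,j) = (\<Sum>l<n. (\<Sum>k\<in>K. F k $$ (i,l)) * A $$ (l,j))"
    using A ij by (auto simp: scalar_prod_def lessThan_atLeast0 intro!: sum.cong)
  also have "\<dots> = (\<Sum>k\<in>K. \<Sum>l<n. F k $$ (i,l) * A $$ (l,j))"
    by (simp add: sum_distrib_right sum.swap[of _ K])
  also have "\<dots> = mat_sum n (\<lambda>k. F k * A) K $$ (i,j)"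
    using A ij F by (auto simp: scalar_prod_def lessThan_atLeast0 intro!: sum.cong)
  finally show "(mat_sum n F K * A) $$ (i,j) = mat_sum n (\<lambda>k. F k * A) K $$ (i,j)" .
qed (insert A, auto)

lemma mat_sum_smult: assumes F: "\<And>k. k \<in> K \<Longrightarrow> F k \<in> carrier_mat n n"
  shows "c \<cdot>\<^sub>m mat_sum n F K = mat_sum n (\<lambda>k. c \<cdot>\<^sub>m F k) K"
proof -
  have Fd[simp]: "k \<in> K \<Longrightarrow> dim_row (F k) = n" "k \<in> K \<Longrightarrow> dim_col (F k) = n" for k using F[of k] by auto
  show ?thesis unfolding mat_sum_def by (auto intro!: eq_matI sum.cong simp: sum_distrib_left)
qed

lemma mat_adjoint_mat_sum: assumes F: "\<And>k. k \<in> K \<Longrightarrow> F k \<in> carrier_mat n n"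
  shows "mat_adjoint (mat_sum n F K) = mat_sum n (\<lambda>k. mat_adjoint (F k)) K"
proof -
  have Fd[simp]: "k \<in> K \<Longrightarrow> dim_row (F k) = n" "k \<in> K \<Longrightarrow> dim_col (F k) = n" for k using F[of k] by auto
  show ?thesis by (rule eq_matI, auto simp: cnj_sum intro!: sum.cong)
qed

lemma trace_mat_sum: assumes F: "\<And>k. k \<in> K \<Longrightarrow> F k \<in> carrier_mat n n"
  shows "trace_mat (mat_sum n F K) = (\<Sum>k\<in>K. trace_mat (F k))"
  unfolding trace_mat_def using F by (auto simp: sum.swap[of _ K] intro!: sum.cong)

lemma quadratic_form_mat_sum: assumes F: "\<And>k. k \<in> K \<Longrightarrow> F k \<in> carrier_mat n n" and v: "v \<in> carrier_vec n"
  and K: "finite K"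
  shows "conjugate v \<bullet> (mat_sum n F K *\<^sub>v v) = (\<Sum>k\<in>K. conjugate v \<bullet> (F k *\<^sub>v v))"
proof -
  have Fd[simp]: "k \<in> K \<Longrightarrow> dim_row (F k) = n" "k \<in> K \<Longrightarrow> dim_col (F k) = n" for k using F[of k] by auto
  have "conjugate v \<bullet> (mat_sum n F K *\<^sub>v v) = (\<Sum>i<n. cnj (v $ i) * (\<Sum>j<n. (\<Sum>k\<in>K. F k $$ (i,j)) * v $ j))"
    using v by (auto simp: scalar_prod_def lessThan_atLeast0 intro!: sum.cong)
  also have "\<dots> = (\<Sum>k\<in>K. (\<Sum>i<n. cnj (v $ i) * (\<Sum>j<n. F k $$ (i,j) * v $ j)))"
    by (simp add: sum_distrib_left sum_distrib_right sum.swap[of _ K] ac_simps)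
  also have "\<dots> = (\<Sum>k\<in>K. conjugate v \<bullet> (F k *\<^sub>v v))"
    using v F by (auto simp: scalar_prod_def lessThan_atLeast0 intro!: sum.cong)
  finally show ?thesis .
qed

lemma mat_sum_swap: "mat_sum n (\<lambda>i. mat_sum n (\<lambda>j. H i j) J) I = mat_sum n (\<lambda>j. mat_sum n (\<lambda>i. H i j) I) J"
  unfolding mat_sum_def by (rule eq_matI) (auto simp: sum.swap[of _ I])

lemma hermitian_matI: "A \<in> carrier_mat n n \<Longrightarrow> mat_adjoint A = A \<Longrightarrow> hermitian_mat A"
  unfolding hermitian_mat_def by auto

lemma hermitian_matD: "hermitian_mat A \<Longrightarrow> mat_adjoint A = A"
  unfolding hermitian_mat_def by auto

lemma psd_matI: "A \<in> carrier_mat n n \<Longrightarrow> mat_adjoint A = A \<Longrightarrow>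
  (\<And>v. v \<in> carrier_vec n \<Longrightarrow> 0 \<le> Re (conjugate v \<bullet> (A *\<^sub>v v))) \<Longrightarrow> psd_mat A"
  unfolding psd_mat_def hermitian_mat_def by auto

lemma psd_matD: "psd_mat A \<Longrightarrow> A \<in> carrier_mat n n \<Longrightarrow> v \<in> carrier_vec n \<Longrightarrow> 0 \<le> Re (conjugate v \<bullet> (A *\<^sub>v v))"
  unfolding psd_mat_def by auto

lemma psd_mat_hermitian: "psd_mat A \<Longrightarrow> hermitian_mat A"
  unfolding psd_mat_def by auto

lemma cnj_quadratic_form_hermitian: assumes A: "A \<in> carrier_mat n n" and h: "mat_adjoint A = A" and v: "v \<in> carrier_vec n"
  shows "cnj (conjugate v \<bullet> (A *\<^sub>v v)) = conjugate v \<bullet> (A *\<^sub>v v)"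
proof -
  have "conjugate v \<bullet> (A *\<^sub>v v) = conjugate (A *\<^sub>v v) \<bullet> v" using sprod_mat_adjoint[OF A v v] h by simp
  also have "\<dots> = cnj (conjugate v \<bullet> (A *\<^sub>v v))" using cnj_conjugate_sprod[of v n "A *\<^sub>v v"] A v by simp
  finally show ?thesis by simp
qed

lemma hermitian_eigenvalue_real: assumes A: "A \<in> carrier_mat n n" and h: "mat_adjoint A = A" and v: "v \<in> carrier_vec n"
  and v0: "v \<noteq> 0\<^sub>v n" and e: "A *\<^sub>v v = e \<cdot>\<^sub>v v"
  shows "cnj e = e"
proof -
  have q: "conjugate v \<bullet> (A *\<^sub>v v) = e * (conjugate v \<bullet> v)" using e v by simp
  have nz: "conjugate v \<bullet> v \<noteq> 0" using conjugate_sprod_self_eq_0[OF v] v0 by simp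
  have r: "cnj (conjugate v \<bullet> v) = conjugate v \<bullet> v" using cnj_conjugate_sprod[OF v v] .
  have "cnj e * (conjugate v \<bullet> v) = e * (conjugate v \<bullet> v)"
    using cnj_quadratic_form_hermitian[OF A h v] unfolding q by (simp add: r)
  then show ?thesis using nz by simp
qed

lemma psd_eigenvalue_nonneg: assumes A: "psd_mat A" "A \<in> carrier_mat n n" and v: "v \<in> carrier_vec n"
  and v0: "v \<noteq> 0\<^sub>v n" and e: "A *\<^sub>v v = e \<cdot>\<^sub>v v"
  shows "e = complex_of_real (Re e) \<and> 0 \<le> Re e"
proof -
  have h: "mat_adjoint A = A" using A psd_mat_hermitian hermitian_matD by auto
  have ce: "cnj e = e" by (rule hermitian_eigenvalue_real[OF A(2) h v v0 e])
  then have er: "e = complex_of_real (Re e)" by (metis complex_cnj_cancel_iff complex_is_Real_iff Reals_cnj_iff of_real_Re)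
  have q: "conjugate v \<bullet> (A *\<^sub>v v) = e * (conjugate v \<bullet> v)" using e v by simp
  obtain s where s: "conjugate v \<bullet> v = complex_of_real s" and s0: "s > 0"
  proof -
    have "conjugate v \<bullet> v \<noteq> 0" using conjugate_sprod_self_eq_0[OF v] v0 by simp
    then show ?thesis using that[of "\<Sum>i<n. (cmod (v $ i))\<^sup>2"] conjugate_sprod_self[OF v]
      by (metis less_eq_real_def of_real_0 sum_nonneg zero_le_power2)
  qed
  have "0 \<le> Re (e * complex_of_real s)" using psd_matD[OF A v] q s by simp
  then have "0 \<le> Re e * s" by simp
  then have "0 \<le> Re e" using s0 by (simp add: zero_le_mult_iff)
  with er show ?thesis by simp
qed

lemma psd_mat_gram: assumes B: "B \<in> carrier_mat n r" shows "psd_mat (B * mat_adjoint B)"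
proof (rule psd_matI)
  show "B * mat_adjoint B \<in> carrier_mat n n" using B by auto
  show "mat_adjoint (B * mat_adjoint B) = B * mat_adjoint B" using B by (simp add: mat_adjoint_mult[of B n r _ n])
  fix v :: "complex vec" assume v: "v \<in> carrier_vec n"
  have "conjugate v \<bullet> (B * mat_adjoint B *\<^sub>v v) = conjugate v \<bullet> (B *\<^sub>v (mat_adjoint B *\<^sub>v v))"
    using B v by (simp add: assoc_mult_mat_vec[of _ n r _ n])
  also have "\<dots> = conjugate (mat_adjoint B *\<^sub>v v) \<bullet> (mat_adjoint B *\<^sub>v v)"
  proof -
    have c: "mat_adjoint B *\<^sub>v v \<in> carrier_vec r" using B by (rule mat_adjoint_mult_vec_carrier)
    show ?thesis using sprod_mat_adjoint[OF B v c] by simp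
  qed
  also have "\<dots> = of_real (\<Sum>i<r. (cmod ((mat_adjoint B *\<^sub>v v) $ i))\<^sup>2)"
  proof -
    have c: "mat_adjoint B *\<^sub>v v \<in> carrier_vec r" using B by (rule mat_adjoint_mult_vec_carrier)
    show ?thesis by (rule conjugate_sprod_self[OF c])
  qed
  finally show "0 \<le> Re (conjugate v \<bullet> (B * mat_adjoint B *\<^sub>v v))" by (simp add: sum_nonneg)
qed

lemma psd_mat_conj: assumes A: "psd_mat A" "A \<in> carrier_mat n n" and U: "U \<in> carrier_mat n n"
  shows "psd_mat (U * A * mat_adjoint U)"
proof (rule psd_matI)
  show "U * A * mat_adjoint U \<in> carrier_mat n n" using A U by auto
  have h: "mat_adjoint A = A" using A psd_mat_hermitian hermitian_matD by auto
  show "mat_adjoint (U * A * mat_adjoint U) = U * A * mat_adjoint U"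
    using A U h by (simp add: mat_adjoint_mult[of _ n n _ n] assoc_mult_mat[of _ n n _ n _ n])
  fix v :: "complex vec" assume v: "v \<in> carrier_vec n"
  have aU: "mat_adjoint U \<in> carrier_mat n n" using U by simp
  have c: "mat_adjoint U *\<^sub>v v \<in> carrier_vec n" using U by (rule mat_adjoint_mult_vec_carrier)
  have "U * A * mat_adjoint U *\<^sub>v v = U * A *\<^sub>v (mat_adjoint U *\<^sub>v v)"
    using A U v aU by (simp add: assoc_mult_mat_vec[of _ n n _ n])
  also have "\<dots> = U *\<^sub>v (A *\<^sub>v (mat_adjoint U *\<^sub>v v))"
    using A U c by (simp add: assoc_mult_mat_vec[of _ n n _ n])
  finally have "conjugate v \<bullet> (U * A * mat_adjoint U *\<^sub>v v) = conjugate v \<bullet> (U *\<^sub>v (A *\<^sub>v (mat_adjoint U *\<^sub>v v)))"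
    by simp
  also have "\<dots> = conjugate (mat_adjoint U *\<^sub>v v) \<bullet> (A *\<^sub>v (mat_adjoint U *\<^sub>v v))"
  proof -
    have c2: "A *\<^sub>v (mat_adjoint U *\<^sub>v v) \<in> carrier_vec n" using A(2) by (rule mult_mat_vec_carrier_dim)
    show ?thesis using sprod_mat_adjoint[OF U v c2] by simp
  qed
  finally show "0 \<le> Re (conjugate v \<bullet> (U * A * mat_adjoint U *\<^sub>v v))"
    using psd_matD[OF A(1) A(2) c] by simp
qed

lemma psd_mat_sum: assumes F: "\<And>k. k \<in> K \<Longrightarrow> F k \<in> carrier_mat n n \<and> psd_mat (F k)" and K: "finite K"
  shows "psd_mat (mat_sum n F K)"
proof (rule psd_matI)
  show "mat_sum n F K \<in> carrier_mat n n" by simp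
  show "mat_adjoint (mat_sum n F K) = mat_sum n F K"
    using F by (subst mat_adjoint_mat_sum, auto intro!: mat_sum_cong dest: psd_mat_hermitian hermitian_matD)
  fix v :: "complex vec" assume v: "v \<in> carrier_vec n"
  show "0 \<le> Re (conjugate v \<bullet> (mat_sum n F K *\<^sub>v v))"
    using F v K by (subst quadratic_form_mat_sum, auto simp: Re_sum intro!: sum_nonneg psd_matD)
qed

lemma psd_mat_smult: assumes A: "psd_mat A" "A \<in> carrier_mat n n" and c: "0 \<le> c"
  shows "psd_mat (complex_of_real c \<cdot>\<^sub>m A)"
proof (rule psd_matI)
  show "complex_of_real c \<cdot>\<^sub>m A \<in> carrier_mat n n" using A by auto
  show "mat_adjoint (complex_of_real c \<cdot>\<^sub>m A) = complex_of_real c \<cdot>\<^sub>m A"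
    using hermitian_matD[OF psd_mat_hermitian[OF A(1)]] by simp
  fix v :: "complex vec" assume v: "v \<in> carrier_vec n"
  have "conjugate v \<bullet> (complex_of_real c \<cdot>\<^sub>m A *\<^sub>v v) = complex_of_real c * (conjugate v \<bullet> (A *\<^sub>v v))"
  proof -
    have "complex_of_real c \<cdot>\<^sub>m A *\<^sub>v v = complex_of_real c \<cdot>\<^sub>v (A *\<^sub>v v)"
      by (rule eq_vecI, insert A v, auto simp: scalar_prod_def sum_distrib_left ac_simps)
    then show ?thesis using A v by simp
  qed
  then show "0 \<le> Re (conjugate v \<bullet> (complex_of_real c \<cdot>\<^sub>m A *\<^sub>v v))"
    using psd_matD[OF A v] c by simp
qed

lemma orthogonal_eigvecs_nz:
  assumes R: "R \<in> carrier_mat n n" "mat_adjoint R = R" and x: "x \<in> carrier_vec n"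
    and Rx: "R *\<^sub>v x = 0\<^sub>v n" and e: "e \<in> eigvecs_nz n R"
  shows "conjugate x \<bullet> e = 0"
proof -
  from e obtain l where ec: "e \<in> carrier_vec n" and l0: "l \<noteq> 0" and el: "R *\<^sub>v e = l \<cdot>\<^sub>v e"
    unfolding eigvecs_nz_def by auto
  have "l * (conjugate x \<bullet> e) = conjugate x \<bullet> (R *\<^sub>v e)" using el ec x by simp
  also have "\<dots> = 0" using sprod_mat_adjoint[OF R(1) x ec] ec unfolding R(2) Rx by simp
  finally show ?thesis using l0 by simp
qed

definition orthonormal :: "nat \<Rightarrow> complex vec list \<Rightarrow> bool" where
  "orthonormal n vs \<longleftrightarrow> (\<forall>i<length vs. vs ! i \<in> carrier_vec n) \<and>
     (\<forall>i<length vs. \<forall>j<length vs. conjugate (vs ! i) \<bullet> (vs ! j) = (if i = j then 1 else 0))"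

lemma orthonormalD: "orthonormal n vs \<Longrightarrow> i < length vs \<Longrightarrow> vs ! i \<in> carrier_vec n"
  "orthonormal n vs \<Longrightarrow> i < length vs \<Longrightarrow> j < length vs \<Longrightarrow> conjugate (vs ! i) \<bullet> (vs ! j) = (if i = j then 1 else 0)"
  unfolding orthonormal_def by auto

lemma orthonormal_nonzero: "orthonormal n vs \<Longrightarrow> i < length vs \<Longrightarrow> vs ! i \<noteq> 0\<^sub>v n"
  using orthonormalD(2)[of n vs i i] by auto

lemma orthonormal_sum: assumes o: "orthonormal n vs" and i: "i < length vs" and j: "j < length vs"
  shows "(\<Sum>c<n. cnj (vs ! i $ c) * vs ! j $ c) = (if i = j then 1 else 0)"
  using orthonormalD(2)[OF o i j] conjugate_sprod_sum[OF orthonormalD(1)[OF o i] orthonormalD(1)[OF o j]] by simp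

definition spectral_sum :: "nat \<Rightarrow> complex vec list \<Rightarrow> (nat \<Rightarrow> complex) \<Rightarrow> complex mat" where
  "spectral_sum n vs f = mat n n (\<lambda>(a,b). \<Sum>i<length vs. f i * (vs ! i $ a) * cnj (vs ! i $ b))"

lemma spectral_sum_carrier[simp]: "spectral_sum n vs f \<in> carrier_mat n n" and spectral_sum_dims[simp]: "dim_row (spectral_sum n vs f) = n" "dim_col (spectral_sum n vs f) = n"
  unfolding spectral_sum_def by auto

lemma index_spectral_sum: "a < n \<Longrightarrow> b < n \<Longrightarrow> spectral_sum n vs f $$ (a,b) = (\<Sum>i<length vs. f i * (vs ! i $ a) * cnj (vs ! i $ b))"
  unfolding spectral_sum_def by auto

lemma spectral_sum_cong: "(\<And>i. i < length vs \<Longrightarrow> f i = g i) \<Longrightarrow> spectral_sum n vs f = spectral_sum n vs g"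
  unfolding spectral_sum_def by (intro eq_matI, auto intro!: sum.cong)

lemma mat_adjoint_spectral_sum: "mat_adjoint (spectral_sum n vs f) = spectral_sum n vs (\<lambda>i. cnj (f i))"
  by (rule eq_matI, auto simp: index_spectral_sum cnj_sum ac_simps)

lemma spectral_sum_mult: assumes o: "orthonormal n vs"
  shows "spectral_sum n vs f * spectral_sum n vs g = spectral_sum n vs (\<lambda>i. f i * g i)"
proof (rule eq_matI)
  fix a b assume ab: "a < dim_row (spectral_sum n vs (\<lambda>i. f i * g i))" "b < dim_col (spectral_sum n vs (\<lambda>i. f i * g i))"
  then have a: "a < n" and b: "b < n" by auto
  let ?k = "length vs"
  let ?x = "\<lambda>i c. vs ! i $ c"
  have "(spectral_sum n vs f * spectral_sum n vs g) $$ (a,b) = (\<Sum>c<n. spectral_sum n vs f $$ (a,c) * spectral_sum n vs g $$ (c,b))"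
    by (rule index_mult_mat_sum[of _ n n _ n], insert a b, auto)
  also have "\<dots> = (\<Sum>c<n. (\<Sum>i<?k. f i * ?x i a * cnj (?x i c)) * (\<Sum>j<?k. g j * ?x j c * cnj (?x j b)))"
    using a b by (intro sum.cong, auto simp: index_spectral_sum)
  also have "\<dots> = (\<Sum>c<n. \<Sum>i<?k. \<Sum>j<?k. (f i * g j * ?x i a * cnj (?x j b)) * (cnj (?x i c) * ?x j c))"
    by (simp add: sum_product ac_simps)
  also have "\<dots> = (\<Sum>i<?k. \<Sum>j<?k. \<Sum>c<n. (f i * g j * ?x i a * cnj (?x j b)) * (cnj (?x i c) * ?x j c))"
    by (subst sum.swap, subst (2) sum.swap, rule refl)
  also have "\<dots> = (\<Sum>i<?k. \<Sum>j<?k. (f i * g j * ?x i a * cnj (?x j b)) * (if i = j then 1 else 0))"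
    by (intro sum.cong refl, subst sum_distrib_left[symmetric], subst orthonormal_sum[OF o], auto)
  also have "\<dots> = (\<Sum>i<?k. f i * g i * ?x i a * cnj (?x i b))"
    by (intro sum.cong refl, simp add: if_distrib sum.delta cong: if_cong)
  also have "\<dots> = spectral_sum n vs (\<lambda>i. f i * g i) $$ (a,b)" using a b by (simp add: index_spectral_sum)
  finally show "(spectral_sum n vs f * spectral_sum n vs g) $$ (a,b) = spectral_sum n vs (\<lambda>i. f i * g i) $$ (a,b)" .
qed auto

lemma index_spectral_sum_mult_vec: assumes o: "orthonormal n vs" and w: "w \<in> carrier_vec n" and a: "a < n"
  shows "(spectral_sum n vs f *\<^sub>v w) $ a = (\<Sum>i<length vs. f i * vs ! i $ a * (conjugate (vs ! i) \<bullet> w))"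
proof -
  let ?k = "length vs"
  have "(spectral_sum n vs f *\<^sub>v w) $ a = (\<Sum>c<n. (\<Sum>i<?k. f i * (vs ! i $ a) * cnj (vs ! i $ c)) * w $ c)"
    using a w by (subst index_mult_mat_vec_sum[of _ n n], auto simp: index_spectral_sum intro!: sum.cong)
  also have "\<dots> = (\<Sum>i<?k. \<Sum>c<n. f i * (vs ! i $ a) * (cnj (vs ! i $ c) * w $ c))"
    unfolding sum_distrib_right by (subst sum.swap, intro sum.cong refl, simp add: ac_simps)
  also have "\<dots> = (\<Sum>i<length vs. f i * vs ! i $ a * (conjugate (vs ! i) \<bullet> w))"
    using o w by (intro sum.cong refl, subst conjugate_sprod_sum[of _ n], auto simp: orthonormalD sum_distrib_left)
  finally show ?thesis .
qed

lemma spectral_sum_mult_vec_member: assumes o: "orthonormal n vs" and j: "j < length vs"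
  shows "spectral_sum n vs f *\<^sub>v vs ! j = f j \<cdot>\<^sub>v vs ! j"
proof (rule eq_vecI)
  have vj: "vs ! j \<in> carrier_vec n" using orthonormalD(1)[OF o j] .
  fix a assume "a < dim_vec (f j \<cdot>\<^sub>v vs ! j)"
  then have a: "a < n" using vj by auto
  have "(spectral_sum n vs f *\<^sub>v vs ! j) $ a = (\<Sum>i<length vs. f i * vs ! i $ a * (if i = j then 1 else 0))"
    using index_spectral_sum_mult_vec[OF o vj a] orthonormalD(2)[OF o _ j] by (auto intro!: sum.cong)
  also have "\<dots> = f j * vs ! j $ a" using j by (simp add: if_distrib sum.delta cong: if_cong)
  finally show "(spectral_sum n vs f *\<^sub>v vs ! j) $ a = (f j \<cdot>\<^sub>v vs ! j) $ a" using a vj by simp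
qed (insert orthonormalD(1)[OF o j], auto)

lemma spectral_sum_mult_vec_orthogonal: assumes o: "orthonormal n vs" and w: "w \<in> carrier_vec n"
  and orth: "\<And>i. i < length vs \<Longrightarrow> conjugate (vs ! i) \<bullet> w = 0"
  shows "spectral_sum n vs f *\<^sub>v w = 0\<^sub>v n"
proof (rule eq_vecI)
  fix a assume "a < dim_vec (0\<^sub>v n :: complex vec)"
  then have a: "a < n" by simp
  show "(spectral_sum n vs f *\<^sub>v w) $ a = 0\<^sub>v n $ a" using index_spectral_sum_mult_vec[OF o w a] orth a by simp
qed simp

lemma mult_spectral_sum_eigen: assumes B: "B \<in> carrier_mat n n" and o: "orthonormal n vs"
  and eig: "\<And>i. i < length vs \<Longrightarrow> B *\<^sub>v vs ! i = \<mu> i \<cdot>\<^sub>v vs ! i"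
  shows "B * spectral_sum n vs f = spectral_sum n vs (\<lambda>i. \<mu> i * f i)"
proof (rule eq_matI)
  fix a b assume ab: "a < dim_row (spectral_sum n vs (\<lambda>i. \<mu> i * f i))" "b < dim_col (spectral_sum n vs (\<lambda>i. \<mu> i * f i))"
  then have a: "a < n" and b: "b < n" by auto
  let ?k = "length vs"
  have e: "(\<Sum>c<n. B $$ (a,c) * vs ! i $ c) = \<mu> i * vs ! i $ a" if i: "i < ?k" for i
  proof -
    have vi: "vs ! i \<in> carrier_vec n" using orthonormalD(1)[OF o i] .
    have "(B *\<^sub>v vs ! i) $ a = (\<Sum>c<n. B $$ (a,c) * vs ! i $ c)" by (rule index_mult_mat_vec_sum[OF B vi a])
    then show ?thesis using eig[OF i] a vi by simp
  qed
  have "(B * spectral_sum n vs f) $$ (a,b) = (\<Sum>c<n. B $$ (a,c) * (\<Sum>i<?k. f i * (vs ! i $ c) * cnj (vs ! i $ b)))"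
    using a b B by (subst index_mult_mat_sum[of _ n n _ n], auto simp: index_spectral_sum)
  also have "\<dots> = (\<Sum>i<?k. (\<Sum>c<n. B $$ (a,c) * vs ! i $ c) * (f i * cnj (vs ! i $ b)))"
    by (simp add: sum_distrib_left sum_distrib_right sum.swap[of _ "{..<n}"] ac_simps)
  also have "\<dots> = (\<Sum>i<?k. \<mu> i * f i * vs ! i $ a * cnj (vs ! i $ b))"
    by (intro sum.cong refl, simp add: e)
  also have "\<dots> = spectral_sum n vs (\<lambda>i. \<mu> i * f i) $$ (a,b)" using a b by (simp add: index_spectral_sum)
  finally show "(B * spectral_sum n vs f) $$ (a,b) = spectral_sum n vs (\<lambda>i. \<mu> i * f i) $$ (a,b)" .
qed (insert B, auto)

lemma orthonormal_completeness: assumes o: "orthonormal n vs" and l: "length vs = n" and a: "a < n" and b: "b < n"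
  shows "(\<Sum>i<n. vs ! i $ a * cnj (vs ! i $ b)) = (if a = b then 1 else 0)"
proof -
  define U where "U = mat n n (\<lambda>(a,i). vs ! i $ a)"
  have U: "U \<in> carrier_mat n n" unfolding U_def by auto
  have aU: "mat_adjoint U \<in> carrier_mat n n" using U by simp
  have "mat_adjoint U * U = 1\<^sub>m n"
  proof (rule eq_matI)
    fix i j assume ij: "i < dim_row (1\<^sub>m n)" "j < dim_col (1\<^sub>m n)"
    then have i: "i < n" and j: "j < n" by auto
    have "(mat_adjoint U * U) $$ (i,j) = (\<Sum>c<n. mat_adjoint U $$ (i,c) * U $$ (c,j))"
      by (rule index_mult_mat_sum[OF aU U i j])
    also have "\<dots> = (\<Sum>c<n. cnj (vs ! i $ c) * vs ! j $ c)"
      using i j by (intro sum.cong refl, simp add: U_def)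
    also have "\<dots> = 1\<^sub>m n $$ (i,j)" using orthonormal_sum[OF o, of i j] i j l by simp
    finally show "(mat_adjoint U * U) $$ (i,j) = 1\<^sub>m n $$ (i,j)" .
  qed (insert U, auto)
  then have UU: "U * mat_adjoint U = 1\<^sub>m n" by (rule mat_mult_left_right_inverse[OF aU U])
  have "(U * mat_adjoint U) $$ (a,b) = (\<Sum>c<n. U $$ (a,c) * mat_adjoint U $$ (c,b))"
    by (rule index_mult_mat_sum[OF U aU a b])
  also have "\<dots> = (\<Sum>i<n. vs ! i $ a * cnj (vs ! i $ b))"
    using a b by (intro sum.cong refl, simp add: U_def)
  finally show ?thesis using UU a b by simp
qed

lemma spectral_sum_one: assumes o: "orthonormal n vs" and l: "length vs = n"
  shows "spectral_sum n vs (\<lambda>i. 1) = 1\<^sub>m n"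
  by (rule eq_matI, insert orthonormal_completeness[OF o l], auto simp: index_spectral_sum l)

lemma mat_eq_spectral_sum: assumes B: "B \<in> carrier_mat n n" and o: "orthonormal n vs" and l: "length vs = n"
  and eig: "\<And>i. i < n \<Longrightarrow> B *\<^sub>v vs ! i = \<mu> i \<cdot>\<^sub>v vs ! i"
  shows "B = spectral_sum n vs \<mu>"
proof -
  have "B = B * spectral_sum n vs (\<lambda>i. 1)" using spectral_sum_one[OF o l] B by simp
  also have "\<dots> = spectral_sum n vs (\<lambda>i. \<mu> i * 1)" by (rule mult_spectral_sum_eigen[OF B o], insert eig l, auto)
  finally show ?thesis by simp
qed

lemma quadratic_form_spectral_sum: assumes o: "orthonormal n vs" and x: "x \<in> carrier_vec n"
  shows "conjugate x \<bullet> (spectral_sum n vs f *\<^sub>v x) = (\<Sum>i<length vs. f i * of_real ((cmod (conjugate (vs ! i) \<bullet> x))\<^sup>2))"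
proof -
  let ?k = "length vs"
  have fx: "spectral_sum n vs f *\<^sub>v x \<in> carrier_vec n" by (rule mult_mat_vec_carrier_dim[OF spectral_sum_carrier])
  have "conjugate x \<bullet> (spectral_sum n vs f *\<^sub>v x) = (\<Sum>a<n. cnj (x $ a) * (\<Sum>i<?k. f i * vs ! i $ a * (conjugate (vs ! i) \<bullet> x)))"
    using conjugate_sprod_sum[OF x fx] index_spectral_sum_mult_vec[OF o x] by simp
  also have "\<dots> = (\<Sum>i<?k. f i * (\<Sum>a<n. cnj (x $ a) * vs ! i $ a) * (conjugate (vs ! i) \<bullet> x))"
    by (simp add: sum_distrib_left sum_distrib_right sum.swap[of _ "{..<n}"] ac_simps)
  also have "\<dots> = (\<Sum>i<?k. f i * of_real ((cmod (conjugate (vs ! i) \<bullet> x))\<^sup>2))"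
  proof (intro sum.cong refl)
    fix i assume "i \<in> {..<?k}"
    then have vi: "vs ! i \<in> carrier_vec n" using orthonormalD(1)[OF o] by auto
    have "(\<Sum>a<n. cnj (x $ a) * vs ! i $ a) = cnj (conjugate (vs ! i) \<bullet> x)"
      using cnj_conjugate_sprod[OF vi x] conjugate_sprod_sum[OF x vi] by simp
    moreover have "cnj (conjugate (vs ! i) \<bullet> x) * (conjugate (vs ! i) \<bullet> x) = of_real ((cmod (conjugate (vs ! i) \<bullet> x))\<^sup>2)"
      by (metis complex_norm_square mult.commute)
    ultimately show "f i * (\<Sum>a<n. cnj (x $ a) * vs ! i $ a) * (conjugate (vs ! i) \<bullet> x) = f i * of_real ((cmod (conjugate (vs ! i) \<bullet> x))\<^sup>2)"
      by (simp only: mult.assoc)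
  qed
  finally show ?thesis .
qed

lemma psd_spectral_sum: assumes o: "orthonormal n vs" and f: "\<And>i. i < length vs \<Longrightarrow> f i = complex_of_real (g i) \<and> 0 \<le> g i"
  shows "psd_mat (spectral_sum n vs f)"
proof (rule psd_matI)
  show "spectral_sum n vs f \<in> carrier_mat n n" by simp
  show "mat_adjoint (spectral_sum n vs f) = spectral_sum n vs f"
    unfolding mat_adjoint_spectral_sum by (rule eq_matI, auto simp: index_spectral_sum f intro!: sum.cong)
  fix v :: "complex vec" assume v: "v \<in> carrier_vec n"
  show "0 \<le> Re (conjugate v \<bullet> (spectral_sum n vs f *\<^sub>v v))"
    unfolding quadratic_form_spectral_sum[OF o v] Re_sum using f by (auto intro!: sum_nonneg)
qed

lemma trace_spectral_sum: assumes o: "orthonormal n vs"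
  shows "trace_mat (spectral_sum n vs f) = (\<Sum>i<length vs. f i)"
proof -
  have "trace_mat (spectral_sum n vs f) = (\<Sum>a<n. \<Sum>i<length vs. f i * (vs ! i $ a) * cnj (vs ! i $ a))"
    by (simp add: trace_mat_carrier[OF spectral_sum_carrier] index_spectral_sum)
  also have "\<dots> = (\<Sum>i<length vs. f i * (\<Sum>a<n. cnj (vs ! i $ a) * vs ! i $ a))"
    by (subst sum.swap) (simp add: sum_distrib_left ac_simps)
  also have "\<dots> = (\<Sum>i<length vs. f i)"
    using orthonormal_sum[OF o] by simp
  finally show ?thesis .
qed
section \<open>The spectral theorem for Hermitian matrices\<close>

lemma trace_mat_similar:
  assumes P: "P \<in> carrier_mat n n" and T: "T \<in> carrier_mat n n" and Q: "Q \<in> carrier_mat n n"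
    and QP: "Q * P = 1\<^sub>m n"
  shows "trace_mat (P * T * Q) = trace_mat (T :: complex mat)"
proof -
  have "trace_mat (P * T * Q) = trace_mat (Q * (P * T))"
    using P T Q by (intro trace_mat_comm[of _ n n]) auto
  also have "Q * (P * T) = T"
    using assoc_mult_mat[OF Q P T] QP T by simp
  finally show ?thesis .
qed

lemma trace_mat_square_upper_triangular:
  assumes T: "T \<in> carrier_mat n n" and ut: "upper_triangular T"
  shows "trace_mat (T * T) = (\<Sum>i<n. T $$ (i,i) * T $$ (i,i))"
proof -
  have "trace_mat (T * T) = (\<Sum>i<n. \<Sum>k<n. T $$ (i,k) * T $$ (k,i))"
    unfolding trace_mat_carrier[OF mult_carrier_mat[OF T T]]
    by (intro sum.cong refl, rule index_mult_mat_sum[OF T T]) auto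
  also have "\<dots> = (\<Sum>i<n. \<Sum>k<n. if k = i then T $$ (i,i) * T $$ (i,i) else 0)"
  proof (intro sum.cong refl)
    fix i k assume "i \<in> {..<n}" "k \<in> {..<n}"
    then show "T $$ (i,k) * T $$ (k,i) = (if k = i then T $$ (i,i) * T $$ (i,i) else 0)"
      using ut T by (cases k i rule: linorder_cases) (auto simp: upper_triangular_def)
  qed
  finally show ?thesis by simp
qed

lemma hermitian_trace_square_eq_0:
  assumes B: "B \<in> carrier_mat n n" and h: "mat_adjoint B = B" and tr: "trace_mat (B * B) = 0"
  shows "B = 0\<^sub>m n n"
proof -
  have "trace_mat (B * B) = (\<Sum>i<n. \<Sum>k<n. B $$ (i,k) * B $$ (k,i))"
    unfolding trace_mat_carrier[OF mult_carrier_mat[OF B B]]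
    by (intro sum.cong refl, rule index_mult_mat_sum[OF B B]) auto
  also have "\<dots> = (\<Sum>i<n. \<Sum>k<n. of_real ((cmod (B $$ (i,k)))\<^sup>2))"
  proof (intro sum.cong refl)
    fix i k assume "i \<in> {..<n}" "k \<in> {..<n}"
    then have "B $$ (k,i) = cnj (B $$ (i,k))"
      using h B by (metis index_mat_adjoint carrier_matD lessThan_iff)
    then show "B $$ (i,k) * B $$ (k,i) = of_real ((cmod (B $$ (i,k)))\<^sup>2)"
      by (metis complex_norm_square)
  qed
  also have "\<dots> = of_real (\<Sum>i<n. \<Sum>k<n. (cmod (B $$ (i,k)))\<^sup>2)"
    by (simp only: of_real_sum)
  finally have "(\<Sum>i<n. \<Sum>k<n. (cmod (B $$ (i,k)))\<^sup>2) = 0"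
    using tr by (metis of_real_eq_0_iff)
  then have "\<forall>i<n. \<forall>k<n. (cmod (B $$ (i,k)))\<^sup>2 = 0"
    by (simp add: sum_nonneg_eq_0_iff sum_nonneg)
  then show ?thesis using B by (intro eq_matI) auto
qed

text \<open>A Schur decomposition \<open>B = P T Q\<close> of a Hermitian \<open>B\<close> all of whose eigenvalues vanish
  would give \<open>tr (B\<^sup>2) = tr (T\<^sup>2) = 0\<close>.\<close>

lemma hermitian_nonzero_eigenvalue:
  assumes B: "(B :: complex mat) \<in> carrier_mat n n" and h: "mat_adjoint B = B" and nz: "B \<noteq> 0\<^sub>m n n"
  shows "\<exists>e v. e \<noteq> 0 \<and> v \<in> carrier_vec n \<and> v \<noteq> 0\<^sub>v n \<and> B *\<^sub>v v = e \<cdot>\<^sub>v v"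
proof (rule ccontr)
  assume no: "\<not> ?thesis"
  obtain es where cp: "char_poly B = (\<Prod>a\<leftarrow>es. [:- a, 1:])"
    using char_poly_factorized[OF B] by blast
  obtain T P Q where sd: "schur_decomposition B es = (T,P,Q)"
    by (cases "schur_decomposition B es") auto
  from schur_decomposition[OF B cp sd] have sim: "similar_mat_wit B T P Q"
    and ut: "upper_triangular T" and dg: "diag_mat T = es" by auto
  from sim B have T: "T \<in> carrier_mat n n" and P: "P \<in> carrier_mat n n" and Q: "Q \<in> carrier_mat n n"
    and QP: "Q * P = 1\<^sub>m n"
    unfolding similar_mat_wit_def Let_def by auto
  have "e = 0" if "e \<in> set es" for e
  proof -
    have "poly (char_poly B) e = 0"
      unfolding cp using that by (induct es) auto
    then obtain v where "eigenvector B v e"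
      using eigenvalue_root_char_poly[OF B] unfolding eigenvalue_def by auto
    then show "e = 0" using no B unfolding eigenvector_def by auto
  qed
  then have "T $$ (i,i) = 0" if "i < n" for i
    using that T unfolding dg[symmetric] diag_mat_def by auto
  then have "trace_mat (T * T) = 0"
    by (simp add: trace_mat_square_upper_triangular[OF T ut])
  moreover have "B * B = P * (T * T) * Q"
    using similar_mat_wit_pow_id[OF sim, of 2] B T by (simp add: numeral_2_eq_2)
  ultimately have "trace_mat (B * B) = 0"
    using trace_mat_similar[OF P _ Q QP, of "T * T"] T by simp
  with hermitian_trace_square_eq_0[OF B h] nz show False by simp
qed

lemma orthogonal_vector_exists:
  assumes o: "orthonormal n vs" and k: "length vs < n"
  shows "\<exists>w \<in> carrier_vec n. w \<noteq> 0\<^sub>v n \<and> (\<forall>i<length vs. conjugate (vs ! i) \<bullet> w = 0)"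
proof -
  let ?P = "spectral_sum n vs (\<lambda>i. 1)"
  have "trace_mat ?P \<noteq> trace_mat (1\<^sub>m n)"
    using k by (simp add: trace_spectral_sum[OF o] trace_mat_one)
  have "\<exists>j<n. ?P *\<^sub>v unit_vec n j \<noteq> unit_vec n j"
  proof (rule ccontr)
    assume "\<not> (\<exists>j<n. ?P *\<^sub>v unit_vec n j \<noteq> unit_vec n j)"
    then have "?P $$ (i,j) = 1\<^sub>m n $$ (i,j)" if "i < n" "j < n" for i j
      using arg_cong[of _ _ "\<lambda>v. v $ i", of "?P *\<^sub>v unit_vec n j"] that by simp
    then have "?P = 1\<^sub>m n" by (intro eq_matI) auto
    with \<open>trace_mat ?P \<noteq> trace_mat (1\<^sub>m n)\<close> show False by simp
  qed
  then obtain j where j: "j < n" and Pj: "?P *\<^sub>v unit_vec n j \<noteq> unit_vec n j" by blast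
  define w where "w = unit_vec n j - ?P *\<^sub>v unit_vec n j"
  have w: "w \<in> carrier_vec n"
    unfolding w_def using mult_mat_vec_carrier_dim[OF spectral_sum_carrier] by simp
  have "conjugate (vs ! i) \<bullet> w = 0" if i: "i < length vs" for i
  proof -
    have vi: "vs ! i \<in> carrier_vec n" using orthonormalD(1)[OF o i] .
    have "conjugate (vs ! i) \<bullet> (?P *\<^sub>v unit_vec n j) = conjugate (vs ! i) \<bullet> unit_vec n j"
      using sprod_mat_adjoint[OF spectral_sum_carrier vi unit_vec_carrier]
        spectral_sum_mult_vec_member[OF o i] vi
      by (simp add: mat_adjoint_spectral_sum)
    moreover have "conjugate (vs ! i) \<bullet> w =
        conjugate (vs ! i) \<bullet> unit_vec n j - conjugate (vs ! i) \<bullet> (?P *\<^sub>v unit_vec n j)"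
      unfolding w_def using vi mult_mat_vec_carrier_dim[OF spectral_sum_carrier]
      by (intro scalar_prod_minus_distrib) auto
    ultimately show ?thesis by simp
  qed
  moreover have "w \<noteq> 0\<^sub>v n"
  proof
    assume w0: "w = 0\<^sub>v n"
    have "?P *\<^sub>v unit_vec n j = unit_vec n j"
    proof (rule eq_vecI)
      fix i assume "i < dim_vec (unit_vec n j)"
      then have i: "i < n" by simp
      have "w $ i = 0" using w0 i by simp
      then show "(?P *\<^sub>v unit_vec n j) $ i = unit_vec n j $ i"
        unfolding w_def using i by simp
    qed simp
    with Pj show False ..
  qed
  ultimately show ?thesis using w by blast
qed

lemma orthonormal_snoc:
  assumes o: "orthonormal n vs" and w: "w \<in> carrier_vec n" and wn: "conjugate w \<bullet> w = 1"
    and orth: "\<forall>i<length vs. conjugate (vs ! i) \<bullet> w = 0"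
  shows "orthonormal n (vs @ [w])"
proof -
  have nth: "(vs @ [w]) ! i = (if i < length vs then vs ! i else w)" if "i < Suc (length vs)" for i
    using that by (auto simp: nth_append)
  have "conjugate w \<bullet> vs ! i = 0" if "i < length vs" for i
    using cnj_conjugate_sprod[OF orthonormalD(1)[OF o] w, of i] orth that by simp
  then show ?thesis
    unfolding orthonormal_def
    using nth w wn orth orthonormalD[OF o] by (auto simp del: length_append_singleton)
qed

lemma exists_normalizing_scalar:
  assumes w: "(w :: complex vec) \<in> carrier_vec n" and w0: "w \<noteq> 0\<^sub>v n"
  shows "\<exists>c. c \<noteq> 0 \<and> conjugate (c \<cdot>\<^sub>v w) \<bullet> (c \<cdot>\<^sub>v w) = 1"
proof -
  define s where "s = (\<Sum>i<n. (cmod (w $ i))\<^sup>2)"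
  have ws: "conjugate w \<bullet> w = of_real s" unfolding s_def by (rule conjugate_sprod_self[OF w])
  have "s \<noteq> 0" using conjugate_sprod_self_eq_0[OF w] w0 ws by auto
  then have s0: "s > 0" unfolding s_def by (metis less_eq_real_def sum_nonneg zero_le_power2)
  define c where "c = complex_of_real (1 / sqrt s)"
  have "conjugate (c \<cdot>\<^sub>v w) \<bullet> (c \<cdot>\<^sub>v w) = (cnj c * c) * (conjugate w \<bullet> w)"
    using w by (simp add: conjugate_smult_vec ac_simps)
  also have "cnj c * c = complex_of_real (1 / s)"
    unfolding c_def using s0 by (simp flip: of_real_mult)
  finally have "conjugate (c \<cdot>\<^sub>v w) \<bullet> (c \<cdot>\<^sub>v w) = 1"
    unfolding ws using s0 by (simp flip: of_real_mult)
  moreover have "c \<noteq> 0" unfolding c_def using s0 by simp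
  ultimately show ?thesis by blast
qed

text \<open>The induction step: \<open>B = A - \<Sum>\<^sub>i \<lambda>\<^sub>i v\<^sub>i v\<^sub>i\<^sup>*\<close> is Hermitian and kills the \<open>v\<^sub>i\<close>, so an
  eigenvector of \<open>B\<close> for a nonzero eigenvalue is orthogonal to them and an eigenvector of \<open>A\<close>.
  If \<open>B = 0\<close>, every vector orthogonal to the \<open>v\<^sub>i\<close> is in the kernel of \<open>A\<close>.\<close>

lemma hermitian_orthogonal_eigenvector:
  assumes A: "(A :: complex mat) \<in> carrier_mat n n" and h: "mat_adjoint A = A"
    and o: "orthonormal n vs" and k: "length vs < n"
    and eig: "\<And>i. i < length vs \<Longrightarrow> A *\<^sub>v vs ! i = complex_of_real (lam i) \<cdot>\<^sub>v vs ! i"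
  shows "\<exists>w e. w \<in> carrier_vec n \<and> w \<noteq> 0\<^sub>v n \<and> (\<forall>i<length vs. conjugate (vs ! i) \<bullet> w = 0)
     \<and> A *\<^sub>v w = e \<cdot>\<^sub>v w"
proof -
  define L where "L = spectral_sum n vs (\<lambda>i. complex_of_real (lam i))"
  have L: "L \<in> carrier_mat n n" unfolding L_def by simp
  define B where "B = A - L"
  have Bc: "B \<in> carrier_mat n n" unfolding B_def using L by (rule minus_carrier_mat)
  have hB: "mat_adjoint B = B"
    unfolding B_def L_def using mat_adjoint_minus[OF A L[unfolded L_def]] h
    by (simp add: mat_adjoint_spectral_sum)
  have Bv: "B *\<^sub>v vs ! j = 0\<^sub>v n" if j: "j < length vs" for j
  proof -
    have vj: "vs ! j \<in> carrier_vec n" using orthonormalD(1)[OF o j] .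
    have "B *\<^sub>v vs ! j = A *\<^sub>v vs ! j - L *\<^sub>v vs ! j" unfolding B_def
      by (rule minus_mult_distrib_mat_vec[OF A L vj])
    then show ?thesis
      using eig[OF j] spectral_sum_mult_vec_member[OF o j] vj unfolding L_def by simp
  qed
  have AB: "A *\<^sub>v w = B *\<^sub>v w" if w: "w \<in> carrier_vec n"
    and orth: "\<And>i. i < length vs \<Longrightarrow> conjugate (vs ! i) \<bullet> w = 0" for w
  proof -
    have "L *\<^sub>v w = 0\<^sub>v n" unfolding L_def by (rule spectral_sum_mult_vec_orthogonal[OF o w orth])
    then show ?thesis unfolding B_def using minus_mult_distrib_mat_vec[OF A L w] A w by simp
  qed
  show ?thesis
  proof (cases "B = 0\<^sub>m n n")
    case False
    from hermitian_nonzero_eigenvalue[OF Bc hB False] obtain e w where e: "e \<noteq> 0"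
      and w: "w \<in> carrier_vec n" and w0: "w \<noteq> 0\<^sub>v n" and Bw: "B *\<^sub>v w = e \<cdot>\<^sub>v w" by auto
    have orth: "conjugate (vs ! i) \<bullet> w = 0" if i: "i < length vs" for i
      using orthogonal_eigvecs_nz[OF Bc hB orthonormalD(1)[OF o i] Bv[OF i]] e w w0 Bw
      unfolding eigvecs_nz_def by blast
    have "A *\<^sub>v w = e \<cdot>\<^sub>v w" using AB[OF w orth] Bw by simp
    with w w0 orth show ?thesis by blast
  next
    case True
    obtain w where w: "w \<in> carrier_vec n" and w0: "w \<noteq> 0\<^sub>v n"
      and orth: "\<And>i. i < length vs \<Longrightarrow> conjugate (vs ! i) \<bullet> w = 0"
      using orthogonal_vector_exists[OF o k] by blast
    have "A *\<^sub>v w = 0 \<cdot>\<^sub>v w" using AB[OF w orth] True w by auto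
    then show ?thesis using w w0 orth by blast
  qed
qed

lemma hermitian_orthonormal_eigenvectors:
  assumes A: "(A :: complex mat) \<in> carrier_mat n n" and h: "mat_adjoint A = A" and k: "k \<le> n"
  shows "\<exists>vs lam. orthonormal n vs \<and> length vs = k \<and>
     (\<forall>i<k. A *\<^sub>v vs ! i = complex_of_real (lam i) \<cdot>\<^sub>v vs ! i)"
  using k
proof (induct k)
  case 0
  show ?case by (rule exI[of _ "[]"], auto simp: orthonormal_def)
next
  case (Suc k)
  then obtain vs lam where o: "orthonormal n vs" and l: "length vs = k"
    and eig: "\<forall>i<k. A *\<^sub>v vs ! i = complex_of_real (lam i) \<cdot>\<^sub>v vs ! i" by auto
  obtain w0 e where w0: "w0 \<in> carrier_vec n" "w0 \<noteq> 0\<^sub>v n"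
    and orth0: "\<forall>i<k. conjugate (vs ! i) \<bullet> w0 = 0" and e: "A *\<^sub>v w0 = e \<cdot>\<^sub>v w0"
    using hermitian_orthogonal_eigenvector[OF A h o, of lam] Suc(2) l eig by auto
  obtain c where c: "c \<noteq> 0" and wn: "conjugate (c \<cdot>\<^sub>v w0) \<bullet> (c \<cdot>\<^sub>v w0) = 1"
    using exists_normalizing_scalar[OF w0] by blast
  define w where "w = c \<cdot>\<^sub>v w0"
  have w: "w \<in> carrier_vec n" unfolding w_def using w0 by simp
  have orth: "\<forall>i<k. conjugate (vs ! i) \<bullet> w = 0"
    unfolding w_def using orth0 w0 orthonormalD(1)[OF o] l by simp
  have "cnj e = e" by (rule hermitian_eigenvalue_real[OF A h w0 e])
  then have "e = complex_of_real (Re e)" by (metis Reals_cnj_iff complex_is_Real_iff of_real_Re)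
  moreover have "A *\<^sub>v w = e \<cdot>\<^sub>v w"
    unfolding w_def mult_mat_vec[OF A w0(1)] e by (rule eq_vecI) (use w0 in auto)
  ultimately have ew: "A *\<^sub>v w = complex_of_real (Re e) \<cdot>\<^sub>v w" by simp
  let ?vs = "vs @ [w]"
  have nth: "?vs ! i = (if i < k then vs ! i else w)" if "i < Suc k" for i
    using that l by (auto simp: nth_append)
  have "orthonormal n ?vs"
    using orthonormal_snoc[OF o w] orth wn l unfolding w_def by auto
  moreover have "\<forall>i<Suc k. A *\<^sub>v ?vs ! i = complex_of_real ((lam(k := Re e)) i) \<cdot>\<^sub>v ?vs ! i"
    using eig ew nth by auto
  ultimately show ?case using l by (intro exI[of _ ?vs] exI[of _ "lam(k := Re e)"]) auto
qed

lemma hermitian_spectral: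
  assumes A: "(A :: complex mat) \<in> carrier_mat n n" and h: "mat_adjoint A = A"
  shows "\<exists>vs lam. orthonormal n vs \<and> length vs = n \<and>
     (\<forall>i<n. A *\<^sub>v vs ! i = complex_of_real (lam i) \<cdot>\<^sub>v vs ! i)"
  using hermitian_orthonormal_eigenvectors[OF A h order.refl] .
section \<open>Positive square roots\<close>

lemma psd_eigenvector_of_square:
  assumes C: "C \<in> carrier_mat n n" "psd_mat C" and v: "v \<in> carrier_vec n" and mu: "0 \<le> \<mu>"
    and e: "C *\<^sub>v (C *\<^sub>v v) = complex_of_real (\<mu>\<^sup>2) \<cdot>\<^sub>v v"
  shows "C *\<^sub>v v = complex_of_real \<mu> \<cdot>\<^sub>v v"
proof -
  let ?m = "complex_of_real \<mu>"
  have Cv: "C *\<^sub>v v \<in> carrier_vec n" using C(1) by (rule mult_mat_vec_carrier_dim)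
  define u where "u = C *\<^sub>v v - ?m \<cdot>\<^sub>v v"
  have u: "u \<in> carrier_vec n" unfolding u_def using Cv v by simp
  have Cu: "C *\<^sub>v u = (- ?m) \<cdot>\<^sub>v u"
  proof -
    have "C *\<^sub>v u = C *\<^sub>v (C *\<^sub>v v) - ?m \<cdot>\<^sub>v (C *\<^sub>v v)"
      unfolding u_def using mult_minus_distrib_mat_vec[OF C(1) Cv, of "?m \<cdot>\<^sub>v v"]
        mult_mat_vec[OF C(1) v] v by simp
    also have "\<dots> = (?m * ?m) \<cdot>\<^sub>v v - ?m \<cdot>\<^sub>v (C *\<^sub>v v)"
      unfolding e by (simp add: power2_eq_square)
    also have "\<dots> = (- ?m) \<cdot>\<^sub>v u"
      unfolding u_def using v Cv carrier_matD[OF C(1)] by (intro eq_vecI) (auto simp: algebra_simps)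
    finally show ?thesis .
  qed
  have "u = 0\<^sub>v n"
  proof (rule ccontr)
    assume "u \<noteq> 0\<^sub>v n"
    from psd_eigenvalue_nonneg[OF C(2) C(1) u this Cu] mu have "\<mu> = 0" by simp
    have "conjugate (C *\<^sub>v v) \<bullet> (C *\<^sub>v v) = conjugate v \<bullet> (C *\<^sub>v (C *\<^sub>v v))"
      using sprod_mat_adjoint[OF C(1) v Cv] psd_mat_hermitian[OF C(2)] by (simp add: hermitian_matD)
    also have "\<dots> = 0" unfolding e \<open>\<mu> = 0\<close> using v by simp
    finally have "C *\<^sub>v v = 0\<^sub>v n" using conjugate_sprod_self_eq_0[OF Cv] by simp
    then have "u = 0\<^sub>v n" unfolding u_def \<open>\<mu> = 0\<close> using v by auto
    with \<open>u \<noteq> 0\<^sub>v n\<close> show False ..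
  qed
  show ?thesis
  proof (rule eq_vecI)
    fix i assume "i < dim_vec (?m \<cdot>\<^sub>v v)"
    then have i: "i < n" using v by simp
    have "u $ i = 0" using \<open>u = 0\<^sub>v n\<close> i by simp
    then show "(C *\<^sub>v v) $ i = (?m \<cdot>\<^sub>v v) $ i" unfolding u_def using i v Cv by simp
  qed (use C(1) v in simp)
qed

lemma psd_spectral:
  assumes A: "A \<in> carrier_mat n n" "psd_mat A"
  shows "\<exists>vs lam. orthonormal n vs \<and> length vs = n \<and> (\<forall>i<n. 0 \<le> lam i) \<and>
    (\<forall>i<n. A *\<^sub>v vs ! i = complex_of_real (lam i) \<cdot>\<^sub>v vs ! i)"
proof -
  have h: "mat_adjoint A = A" using A(2) by (simp add: psd_mat_hermitian hermitian_matD)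
  obtain vs lam where o: "orthonormal n vs" and l: "length vs = n"
    and eig: "\<forall>i<n. A *\<^sub>v vs ! i = complex_of_real (lam i) \<cdot>\<^sub>v vs ! i"
    using hermitian_spectral[OF A(1) h] by blast
  have "0 \<le> lam i" if i: "i < n" for i
    using psd_eigenvalue_nonneg[OF A(2) A(1) orthonormalD(1)[OF o] orthonormal_nonzero[OF o]
        eig[rule_format, OF i]] i l by simp
  then show ?thesis using o l eig by blast
qed

lemma psd_sqrt_unique_spectral:
  assumes o: "orthonormal n vs" and l: "length vs = n"
    and lam: "\<And>i. i < n \<Longrightarrow> 0 \<le> lam i"
    and eig: "\<And>i. i < n \<Longrightarrow> A *\<^sub>v vs ! i = complex_of_real (lam i) \<cdot>\<^sub>v vs ! i"
    and B: "B \<in> carrier_mat n n" "psd_mat B" "B * B = A"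
  shows "B = spectral_sum n vs (\<lambda>i. complex_of_real (sqrt (lam i)))"
proof (rule mat_eq_spectral_sum[OF B(1) o l])
  fix i assume i: "i < n"
  have vi: "vs ! i \<in> carrier_vec n" using orthonormalD(1)[OF o] i l by auto
  have "B *\<^sub>v (B *\<^sub>v vs ! i) = (B * B) *\<^sub>v vs ! i" using B(1) vi by simp
  also have "\<dots> = complex_of_real ((sqrt (lam i))\<^sup>2) \<cdot>\<^sub>v vs ! i" using B(3) eig[OF i] lam[OF i] by simp
  finally show "B *\<^sub>v vs ! i = complex_of_real (sqrt (lam i)) \<cdot>\<^sub>v vs ! i"
    by (rule psd_eigenvector_of_square[OF B(1) B(2) vi real_sqrt_ge_zero[OF lam[OF i]]])
qed

lemma spectral_sum_sqrt_mult_self: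
  assumes A: "A \<in> carrier_mat n n" and o: "orthonormal n vs" and l: "length vs = n"
    and lam: "\<And>i. i < n \<Longrightarrow> 0 \<le> lam i"
    and eig: "\<And>i. i < n \<Longrightarrow> A *\<^sub>v vs ! i = complex_of_real (lam i) \<cdot>\<^sub>v vs ! i"
  shows "spectral_sum n vs (\<lambda>i. complex_of_real (sqrt (lam i))) *
    spectral_sum n vs (\<lambda>i. complex_of_real (sqrt (lam i))) = A"
proof -
  have "spectral_sum n vs (\<lambda>i. complex_of_real (sqrt (lam i))) *
      spectral_sum n vs (\<lambda>i. complex_of_real (sqrt (lam i))) =
      spectral_sum n vs (\<lambda>i. complex_of_real (sqrt (lam i)) * complex_of_real (sqrt (lam i)))"
    by (rule spectral_sum_mult[OF o])
  also have "\<dots> = spectral_sum n vs (\<lambda>i. complex_of_real (lam i))"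
    using lam l by (intro spectral_sum_cong) (simp flip: of_real_mult)
  also have "\<dots> = A" using mat_eq_spectral_sum[OF A o l eig] by simp
  finally show ?thesis .
qed

lemma psd_sqrt_eq_spectral_sum:
  assumes A: "A \<in> carrier_mat n n" and o: "orthonormal n vs" and l: "length vs = n"
    and lam: "\<And>i. i < n \<Longrightarrow> 0 \<le> lam i"
    and eig: "\<And>i. i < n \<Longrightarrow> A *\<^sub>v vs ! i = complex_of_real (lam i) \<cdot>\<^sub>v vs ! i"
  shows "psd_sqrt A = spectral_sum n vs (\<lambda>i. complex_of_real (sqrt (lam i)))"
  unfolding psd_sqrt_def
proof (rule the_equality)
  show "spectral_sum n vs (\<lambda>i. complex_of_real (sqrt (lam i))) \<in> carrier_mat (dim_row A) (dim_row A) \<and>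
      psd_mat (spectral_sum n vs (\<lambda>i. complex_of_real (sqrt (lam i)))) \<and>
      spectral_sum n vs (\<lambda>i. complex_of_real (sqrt (lam i))) *
      spectral_sum n vs (\<lambda>i. complex_of_real (sqrt (lam i))) = A"
    using A lam l spectral_sum_sqrt_mult_self[OF A o l lam eig]
      psd_spectral_sum[OF o, of _ "\<lambda>i. sqrt (lam i)"]
    by auto
qed (use A psd_sqrt_unique_spectral[OF o l lam eig] in auto)

lemma psd_sqrt_spec:
  assumes A: "A \<in> carrier_mat n n" "psd_mat A"
  shows "psd_sqrt A \<in> carrier_mat n n \<and> psd_mat (psd_sqrt A) \<and> psd_sqrt A * psd_sqrt A = A \<and>
    (\<forall>B. B \<in> carrier_mat n n \<and> psd_mat B \<and> B * B = A \<longrightarrow> B = psd_sqrt A)"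
proof -
  obtain vs lam where o: "orthonormal n vs" and l: "length vs = n" and lam: "\<forall>i<n. 0 \<le> lam i"
    and eig: "\<forall>i<n. A *\<^sub>v vs ! i = complex_of_real (lam i) \<cdot>\<^sub>v vs ! i"
    using psd_spectral[OF A] by blast
  then have S: "psd_sqrt A = spectral_sum n vs (\<lambda>i. complex_of_real (sqrt (lam i)))"
    using psd_sqrt_eq_spectral_sum[OF A(1) o l] by blast
  have "psd_mat (psd_sqrt A)"
    unfolding S using lam l by (intro psd_spectral_sum[OF o, of _ "\<lambda>i. sqrt (lam i)"]) auto
  moreover have "psd_sqrt A * psd_sqrt A = A"
    unfolding S using spectral_sum_sqrt_mult_self[OF A(1) o l] lam eig by blast
  moreover have "B = psd_sqrt A" if "B \<in> carrier_mat n n" "psd_mat B" "B * B = A" for B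
    unfolding S using psd_sqrt_unique_spectral[OF o l _ _ that] lam eig by blast
  ultimately show ?thesis unfolding S by auto
qed

lemma mat_inv_eqI: assumes S: "S \<in> carrier_mat n n" and T: "T \<in> carrier_mat n n"
  and ST: "S * T = 1\<^sub>m n" and TS: "T * S = 1\<^sub>m n"
  shows "mat_inv S = T"
proof -
  have dr: "dim_row S = n" using S by simp
  have uniq: "B = T" if B: "B \<in> carrier_mat n n" "S * B = 1\<^sub>m n" "B * S = 1\<^sub>m n" for B
  proof -
    have "B = B * (S * T)" using ST B by simp
    also have "\<dots> = (B * S) * T" using assoc_mult_mat[OF B(1) S T] by simp
    also have "\<dots> = T" using B T by simp
    finally show ?thesis .
  qed
  show ?thesis unfolding mat_inv_def dr
  proof (rule the_equality)
    show "T \<in> carrier_mat n n \<and> S * T = 1\<^sub>m n \<and> T * S = 1\<^sub>m n" using T ST TS by simp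
  next
    fix B assume "B \<in> carrier_mat n n \<and> S * B = 1\<^sub>m n \<and> B * S = 1\<^sub>m n"
    then show "B = T" using uniq by blast
  qed
qed

lemma inv_sqrt_spec:
  assumes A: "A \<in> carrier_mat n n" "psd_mat A"
    and inj: "\<And>v. v \<in> carrier_vec n \<Longrightarrow> A *\<^sub>v v = 0\<^sub>v n \<Longrightarrow> v = 0\<^sub>v n"
  shows "inv_sqrt A \<in> carrier_mat n n \<and> psd_mat (inv_sqrt A) \<and>
    inv_sqrt A * psd_sqrt A = 1\<^sub>m n \<and> psd_sqrt A * inv_sqrt A = 1\<^sub>m n"
proof -
  obtain vs lam where o: "orthonormal n vs" and l: "length vs = n" and lam: "\<forall>i<n. 0 \<le> lam i"
    and eig: "\<forall>i<n. A *\<^sub>v vs ! i = complex_of_real (lam i) \<cdot>\<^sub>v vs ! i"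
    using psd_spectral[OF A] by blast
  have lam0: "lam i \<noteq> 0" if i: "i < n" for i
  proof
    assume "lam i = 0"
    then have "A *\<^sub>v vs ! i = 0\<^sub>v n" using eig i orthonormalD(1)[OF o, of i] l by auto
    then show False using inj orthonormalD(1)[OF o, of i] orthonormal_nonzero[OF o, of i] i l by auto
  qed
  define S where "S = spectral_sum n vs (\<lambda>i. complex_of_real (sqrt (lam i)))"
  define T where "T = spectral_sum n vs (\<lambda>i. complex_of_real (1 / sqrt (lam i)))"
  have S: "psd_sqrt A = S"
    unfolding S_def using psd_sqrt_eq_spectral_sum[OF A(1) o l] lam eig by blast
  have ST: "S * T = 1\<^sub>m n" and TS: "T * S = 1\<^sub>m n"
    unfolding S_def T_def spectral_sum_mult[OF o] spectral_sum_one[OF o l, symmetric]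
    using lam0 lam l by (auto intro!: spectral_sum_cong simp flip: of_real_mult)
  have "inv_sqrt A = T"
    unfolding inv_sqrt_def S by (rule mat_inv_eqI[OF _ _ ST TS]) (auto simp: S_def T_def)
  moreover have "psd_mat T"
    unfolding T_def using lam l by (intro psd_spectral_sum[OF o, of _ "\<lambda>i. 1 / sqrt (lam i)"]) auto
  ultimately show ?thesis using ST TS S by (simp add: T_def)
qed

lemma psd_sqrt_smult:
  assumes A: "A \<in> carrier_mat n n" "psd_mat A" and c: "0 \<le> c"
  shows "psd_sqrt (complex_of_real c \<cdot>\<^sub>m A) = complex_of_real (sqrt c) \<cdot>\<^sub>m psd_sqrt A"
proof -
  obtain Sc Sp SS where S: "psd_sqrt A \<in> carrier_mat n n" "psd_mat (psd_sqrt A)" "psd_sqrt A * psd_sqrt A = A"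
    using psd_sqrt_spec[OF A] by blast
  have cA: "complex_of_real c \<cdot>\<^sub>m A \<in> carrier_mat n n" "psd_mat (complex_of_real c \<cdot>\<^sub>m A)"
    using A psd_mat_smult[OF A(2) A(1) c] by auto
  let ?B = "complex_of_real (sqrt c) \<cdot>\<^sub>m psd_sqrt A"
  have Bc: "?B \<in> carrier_mat n n" using S by simp
  have Bp: "psd_mat ?B" by (rule psd_mat_smult[OF S(2) S(1)], simp add: c)
  have "?B * ?B = complex_of_real (sqrt c) \<cdot>\<^sub>m (complex_of_real (sqrt c) \<cdot>\<^sub>m (psd_sqrt A * psd_sqrt A))"
    using S by (simp add: mult_smult_assoc_mat[of _ n n _ n] mult_smult_distrib[of _ n n _ n])
  also have "\<dots> = complex_of_real c \<cdot>\<^sub>m A" unfolding S(3) smult_smult_mat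
    using c by (simp flip: of_real_mult)
  finally have "?B * ?B = complex_of_real c \<cdot>\<^sub>m A" .
  then show ?thesis using psd_sqrt_spec[OF cA] Bc Bp by metis
qed

lemma psd_sqrt_unitary_conj:
  assumes A: "A \<in> carrier_mat n n" "psd_mat A" and U: "U \<in> carrier_mat n n"
  and UU: "mat_adjoint U * U = 1\<^sub>m n" and UA: "U * A * mat_adjoint U = A"
  shows "U * psd_sqrt A * mat_adjoint U = psd_sqrt A"
proof -
  obtain S: "psd_sqrt A \<in> carrier_mat n n" "psd_mat (psd_sqrt A)" "psd_sqrt A * psd_sqrt A = A"
    using psd_sqrt_spec[OF A] by blast
  let ?S = "psd_sqrt A"
  let ?B = "U * ?S * mat_adjoint U"
  have aU: "mat_adjoint U \<in> carrier_mat n n" using U by simp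
  have Bc: "?B \<in> carrier_mat n n" using mult_carrier_mat[OF mult_carrier_mat[OF U S(1)] aU] .
  have Bp: "psd_mat ?B" by (rule psd_mat_conj[OF S(2) S(1) U])
  have mult_carrier_mat_square: "\<And>X Y. X \<in> carrier_mat n n \<Longrightarrow> Y \<in> carrier_mat n n \<Longrightarrow> X * Y \<in> carrier_mat n n" by simp
  have UUX: "mat_adjoint U * (U * X) = X" if X: "X \<in> carrier_mat n n" for X
    using assoc_mult_mat[OF aU U X] UU X by simp
  have SSX: "?S * (?S * X) = A * X" if X: "X \<in> carrier_mat n n" for X
    using assoc_mult_mat[OF S(1) S(1) X] S(3) by simp
  have "?B * ?B = U * (A * mat_adjoint U)"
    using U S aU by (simp add: assoc_mult_mat[of _ n n _ n _ n] mult_carrier_mat_square UUX SSX)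
  also have "\<dots> = U * A * mat_adjoint U" using assoc_mult_mat[OF U A(1) aU] by simp
  also have "\<dots> = A" by (rule UA)
  finally show ?thesis using psd_sqrt_spec[OF A] Bc Bp by metis
qed


lemma smult_mult_mat_vec: assumes A: "A \<in> carrier_mat a b" and v: "v \<in> carrier_vec b"
  shows "(c \<cdot>\<^sub>m A) *\<^sub>v v = c \<cdot>\<^sub>v (A *\<^sub>v (v :: complex vec))"
  by (rule eq_vecI, insert A v, auto simp: scalar_prod_def sum_distrib_left ac_simps)

lemma smult_one_mat_vec: assumes v: "v \<in> carrier_vec b"
  shows "(c \<cdot>\<^sub>m 1\<^sub>m b) *\<^sub>v v = c \<cdot>\<^sub>v (v :: complex vec)"
  using smult_mult_mat_vec[OF one_carrier_mat v] v by simp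

lemma quadratic_form_diff: assumes A: "A \<in> carrier_mat n n" and v: "v \<in> carrier_vec n" and w: "w \<in> carrier_vec n"
  shows "conjugate (v - c \<cdot>\<^sub>v w) \<bullet> (A *\<^sub>v (v - c \<cdot>\<^sub>v w)) =
    conjugate v \<bullet> (A *\<^sub>v v) - c * (conjugate v \<bullet> (A *\<^sub>v w)) - cnj c * (conjugate w \<bullet> (A *\<^sub>v v))
    + cnj c * c * (conjugate w \<bullet> (A *\<^sub>v (w :: complex vec)))"
proof -
  have z: "v - c \<cdot>\<^sub>v w \<in> carrier_vec n" using v w by simp
  have Az: "A *\<^sub>v (v - c \<cdot>\<^sub>v w) \<in> carrier_vec n" using A by (rule mult_mat_vec_carrier_dim)
  have Av: "A *\<^sub>v v \<in> carrier_vec n" using A by (rule mult_mat_vec_carrier_dim)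
  have Aw: "A *\<^sub>v w \<in> carrier_vec n" using A by (rule mult_mat_vec_carrier_dim)
  have e1: "(A *\<^sub>v (v - c \<cdot>\<^sub>v w)) $ i = (A *\<^sub>v v) $ i - c * (A *\<^sub>v w) $ i" if i: "i < n" for i
    unfolding index_mult_mat_vec_sum[OF A z i] index_mult_mat_vec_sum[OF A v i] index_mult_mat_vec_sum[OF A w i]
    using v w by (simp add: sum_subtractf sum_distrib_left algebra_simps)
  have "conjugate (v - c \<cdot>\<^sub>v w) \<bullet> (A *\<^sub>v (v - c \<cdot>\<^sub>v w)) =
     (\<Sum>i<n. (cnj (v $ i) - cnj c * cnj (w $ i)) * ((A *\<^sub>v v) $ i - c * (A *\<^sub>v w) $ i))"
    unfolding conjugate_sprod_sum[OF z Az] using v w e1 by (intro sum.cong refl) simp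
  also have "\<dots> = (\<Sum>i<n. cnj (v $ i) * (A *\<^sub>v v) $ i) - c * (\<Sum>i<n. cnj (v $ i) * (A *\<^sub>v w) $ i)
     - cnj c * (\<Sum>i<n. cnj (w $ i) * (A *\<^sub>v v) $ i) + cnj c * c * (\<Sum>i<n. cnj (w $ i) * (A *\<^sub>v w) $ i)"
    by (simp add: algebra_simps sum.distrib sum_subtractf sum_distrib_left)
  also have "\<dots> = conjugate v \<bullet> (A *\<^sub>v v) - c * (conjugate v \<bullet> (A *\<^sub>v w)) - cnj c * (conjugate w \<bullet> (A *\<^sub>v v))
    + cnj c * c * (conjugate w \<bullet> (A *\<^sub>v w))"
    unfolding conjugate_sprod_sum[OF v Av] conjugate_sprod_sum[OF v Aw] conjugate_sprod_sum[OF w Av] conjugate_sprod_sum[OF w Aw] ..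
  finally show ?thesis .
qed

lemma quadratic_form_smult_minus: assumes A: "A \<in> carrier_mat n n" and B: "B \<in> carrier_mat n n" and x: "x \<in> carrier_vec n"
  shows "conjugate x \<bullet> ((c \<cdot>\<^sub>m A - B) *\<^sub>v x) = c * (conjugate x \<bullet> (A *\<^sub>v x)) - conjugate x \<bullet> (B *\<^sub>v (x :: complex vec))"
proof -
  have C: "c \<cdot>\<^sub>m A - B \<in> carrier_mat n n" using B by (rule minus_carrier_mat)
  have c1: "(c \<cdot>\<^sub>m A - B) *\<^sub>v x \<in> carrier_vec n" using C by (rule mult_mat_vec_carrier_dim)
  have c2: "A *\<^sub>v x \<in> carrier_vec n" using A by (rule mult_mat_vec_carrier_dim)
  have c3: "B *\<^sub>v x \<in> carrier_vec n" using B by (rule mult_mat_vec_carrier_dim)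
  have e: "((c \<cdot>\<^sub>m A - B) *\<^sub>v x) $ i = c * (A *\<^sub>v x) $ i - (B *\<^sub>v x) $ i" if i: "i < n" for i
    unfolding index_mult_mat_vec_sum[OF C x i] index_mult_mat_vec_sum[OF A x i] index_mult_mat_vec_sum[OF B x i]
    using A B i by (simp add: sum_subtractf sum_distrib_left algebra_simps)
  show ?thesis unfolding conjugate_sprod_sum[OF x c1] conjugate_sprod_sum[OF x c2] conjugate_sprod_sum[OF x c3]
    by (simp add: e sum_subtractf sum_distrib_left algebra_simps)
qed

lemma quadratic_form_conj: assumes U: "U \<in> carrier_mat n n" and A: "A \<in> carrier_mat n n" and x: "x \<in> carrier_vec n"
  shows "conjugate x \<bullet> ((U * A * mat_adjoint U) *\<^sub>v x) = conjugate (mat_adjoint U *\<^sub>v x) \<bullet> (A *\<^sub>v (mat_adjoint U *\<^sub>v (x :: complex vec)))"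
proof -
  have aU: "mat_adjoint U \<in> carrier_mat n n" using U by simp
  have c: "mat_adjoint U *\<^sub>v x \<in> carrier_vec n" using U by (rule mat_adjoint_mult_vec_carrier)
  have c2: "A *\<^sub>v (mat_adjoint U *\<^sub>v x) \<in> carrier_vec n" using A by (rule mult_mat_vec_carrier_dim)
  have "(U * A * mat_adjoint U) *\<^sub>v x = U *\<^sub>v (A *\<^sub>v (mat_adjoint U *\<^sub>v x))"
    using assoc_mult_mat_vec[OF mult_carrier_mat[OF U A] aU x] assoc_mult_mat_vec[OF U A c] by simp
  then show ?thesis using sprod_mat_adjoint[OF U x c2] by simp
qed

lemma trace_mat_smult_minus_mult: assumes A: "A \<in> carrier_mat n n" and B: "B \<in> carrier_mat n n" and Q: "Q \<in> carrier_mat n n"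
  shows "trace_mat ((c \<cdot>\<^sub>m A - B) * Q) = c * trace_mat (A * Q) - trace_mat (B * (Q :: complex mat))"
proof -
  have C: "c \<cdot>\<^sub>m A - B \<in> carrier_mat n n" using B by (rule minus_carrier_mat)
  have "trace_mat ((c \<cdot>\<^sub>m A - B) * Q) = (\<Sum>i<n. \<Sum>k<n. (c * A $$ (i,k) - B $$ (i,k)) * Q $$ (k,i))"
    unfolding trace_mat_carrier[OF mult_carrier_mat[OF C Q]]
    by (intro sum.cong refl, subst index_mult_mat_sum[OF C Q], insert A B, auto)
  also have "\<dots> = c * (\<Sum>i<n. \<Sum>k<n. A $$ (i,k) * Q $$ (k,i)) - (\<Sum>i<n. \<Sum>k<n. B $$ (i,k) * Q $$ (k,i))"
    by (simp add: sum_subtractf sum_distrib_left algebra_simps)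
  also have "\<dots> = c * trace_mat (A * Q) - trace_mat (B * Q)"
    unfolding trace_mat_carrier[OF mult_carrier_mat[OF A Q]] trace_mat_carrier[OF mult_carrier_mat[OF B Q]]
    by (simp add: index_mult_mat_sum[OF A Q] index_mult_mat_sum[OF B Q])
  finally show ?thesis .
qed

lemma trace_mat_adjoint_mult:
  assumes R: "R \<in> carrier_mat n n" and P: "P \<in> carrier_mat n n"
  shows "trace_mat (mat_adjoint R * (P * R)) = (\<Sum>i<n. conjugate (col R i) \<bullet> (P *\<^sub>v col R i))"
proof -
  have "(mat_adjoint R * (P * R)) $$ (i,i) = conjugate (col R i) \<bullet> (P *\<^sub>v col R i)" if i: "i < n" for i
  proof -
    have "(mat_adjoint R * (P * R)) $$ (i,i) = (\<Sum>a<n. cnj (R $$ (a,i)) * (P * R) $$ (a,i))"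
      using R P i by (subst index_mult_mat_sum[of _ n n _ n]) auto
    also have "\<dots> = conjugate (col R i) \<bullet> (P *\<^sub>v col R i)"
      using R P i by (subst conjugate_sprod_sum[of _ n]) auto
    finally show ?thesis .
  qed
  then show ?thesis
    using R P unfolding trace_mat_carrier[OF mult_carrier_mat[OF mat_adjoint_carrier[OF R] mult_carrier_mat[OF P R]]]
    by (intro sum.cong) auto
qed

lemma trace_mult_psd_nonneg:
  assumes P: "P \<in> carrier_mat n n" "psd_mat P" and Q: "Q \<in> carrier_mat n n" "psd_mat Q"
  shows "0 \<le> Re (trace_mat (P * Q))"
proof -
  obtain R where R: "R \<in> carrier_mat n n" "psd_mat R" "R * R = Q"
    using psd_sqrt_spec[OF Q] by blast
  have "trace_mat (P * Q) = trace_mat ((P * R) * R)"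
    unfolding R(3)[symmetric] using assoc_mult_mat[OF P(1) R(1) R(1)] by simp
  also have "\<dots> = trace_mat (mat_adjoint R * (P * R))"
    using trace_mat_comm[of "P * R" n n R] P R psd_mat_hermitian[OF R(2)] by (simp add: hermitian_matD)
  also have "\<dots> = (\<Sum>i<n. conjugate (col R i) \<bullet> (P *\<^sub>v col R i))"
    by (rule trace_mat_adjoint_mult[OF R(1) P(1)])
  finally show ?thesis
    using psd_matD[OF P(2) P(1)] R(1) by (auto simp: Re_sum intro!: sum_nonneg)
qed

lemma nonneg_quadratic_le: fixes a av b :: real
  assumes h: "\<And>t. 0 \<le> av - 2 * t * b + t^2 * a * b" and a: "0 \<le> a" and b: "0 \<le> b"
  shows "b \<le> a * av"
proof (cases "a = 0")
  case True
  show ?thesis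
  proof (rule ccontr)
    assume "\<not> b \<le> a * av"
    then have b0: "b > 0" using True by simp
    have "0 \<le> av - 2 * ((av + 1) / (2 * b)) * b" using h[of "(av + 1) / (2 * b)"] True by simp
    also have "\<dots> = -1" using b0 by (simp add: field_simps)
    finally show False by simp
  qed
next
  case False
  then have a0: "a > 0" using a by simp
  have "0 \<le> av - 2 * (1 / a) * b + (1 / a)^2 * a * b" by (rule h)
  also have "\<dots> = av - b / a" using a0 by (simp add: field_simps power2_eq_square)
  finally have "b / a \<le> av" by simp
  then show ?thesis using a0 by (simp add: field_simps)
qed

lemma mat_sum_measurement: "is_measurement n Qs \<Longrightarrow> mat_sum n (\<lambda>k. Qs ! k) {..<length Qs} = 1\<^sub>m n"
  unfolding is_measurement_def using msum_eq_mat_sum[of Qs n] by auto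

lemma measurement_nth: "is_measurement n Qs \<Longrightarrow> k < length Qs \<Longrightarrow> Qs ! k \<in> carrier_mat n n \<and> psd_mat (Qs ! k)"
  unfolding is_measurement_def by auto

lemma detect_prob_equal_priors: "length rhos = m \<Longrightarrow>
  detect_prob (equal_priors m) rhos Qs = (\<Sum>i<m. Re (trace_mat (rhos ! i * Qs ! i)) / real m)"
  unfolding detect_prob_def equal_priors_def by (intro sum.cong refl) auto

lemma detect_prob_le_dual:
  assumes X: "X \<in> carrier_mat n n" and len: "length rhos = m"
    and rho_carrier: "\<And>k. k < m \<Longrightarrow> rhos ! k \<in> carrier_mat n n"
    and dom: "\<And>k. k < m \<Longrightarrow> psd_mat (complex_of_real a \<cdot>\<^sub>m X - rhos ! k)"
    and Q: "is_measurement n Qs" and lQ: "length Qs = m"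
  shows "detect_prob (equal_priors m) rhos Qs \<le> a * Re (trace_mat X) / real m"
proof -
  have Qk: "Qs ! k \<in> carrier_mat n n \<and> psd_mat (Qs ! k)" if "k < m" for k
    using measurement_nth[OF Q] that lQ by simp
  have each: "Re (trace_mat (rhos ! k * Qs ! k)) \<le> a * Re (trace_mat (X * Qs ! k))" if k: "k < m" for k
  proof -
    have Dc: "complex_of_real a \<cdot>\<^sub>m X - rhos ! k \<in> carrier_mat n n" using rho_carrier[OF k] by (rule minus_carrier_mat)
    have "0 \<le> Re (trace_mat ((complex_of_real a \<cdot>\<^sub>m X - rhos ! k) * Qs ! k))"
      by (rule trace_mult_psd_nonneg[OF Dc dom[OF k]], insert Qk[OF k], auto)
    also have "trace_mat ((complex_of_real a \<cdot>\<^sub>m X - rhos ! k) * Qs ! k) =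
      complex_of_real a * trace_mat (X * Qs ! k) - trace_mat (rhos ! k * Qs ! k)"
      by (rule trace_mat_smult_minus_mult[OF X rho_carrier[OF k]], insert Qk[OF k], auto)
    finally show ?thesis by simp
  qed
  have sumX: "(\<Sum>k<m. trace_mat (X * Qs ! k)) = trace_mat X"
  proof -
    have "X * mat_sum n (\<lambda>k. Qs ! k) {..<m} = mat_sum n (\<lambda>k. X * Qs ! k) {..<m}"
      by (rule mat_sum_mult_left[OF X], insert Qk, auto)
    moreover have "mat_sum n (\<lambda>k. Qs ! k) {..<m} = 1\<^sub>m n" using mat_sum_measurement[OF Q] lQ by simp
    ultimately have "mat_sum n (\<lambda>k. X * Qs ! k) {..<m} = X" using X by simp
    then have "trace_mat X = trace_mat (mat_sum n (\<lambda>k. X * Qs ! k) {..<m})" by simp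
    also have "\<dots> = (\<Sum>k<m. trace_mat (X * Qs ! k))"
      by (rule trace_mat_sum, insert Qk X, auto)
    finally show ?thesis by simp
  qed
  have "detect_prob (equal_priors m) rhos Qs = (\<Sum>k<m. Re (trace_mat (rhos ! k * Qs ! k)) / real m)"
    by (rule detect_prob_equal_priors, simp add: len)
  also have "\<dots> \<le> (\<Sum>k<m. a * Re (trace_mat (X * Qs ! k)) / real m)"
    by (rule sum_mono, insert each, auto simp: divide_right_mono)
  also have "\<dots> = a * Re (\<Sum>k<m. trace_mat (X * Qs ! k)) / real m"
    by (simp add: Re_sum sum_divide_distrib[symmetric] sum_distrib_left)
  finally show ?thesis unfolding sumX .
qed

lemma sum_lessThan_add_split: "(\<Sum>k<a+(b::nat). g k) = (\<Sum>k<a. g k) + (\<Sum>k<b. g (a+k))"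
  by (induct b) (simp_all add: add.assoc)

lemma four_block_mat_mult_adjoint:
  assumes A: "A \<in> carrier_mat n a" and B: "B \<in> carrier_mat n b"
  defines "M \<equiv> four_block_mat A B (0\<^sub>m 0 a) (0\<^sub>m 0 b)"
  shows "M * mat_adjoint M = A * mat_adjoint A + B * mat_adjoint (B :: complex mat)"
proof (rule eq_matI)
  have M: "M \<in> carrier_mat n (a + b)" unfolding M_def using A B by auto
  fix i j assume "i < dim_row (A * mat_adjoint A + B * mat_adjoint B)"
    "j < dim_col (A * mat_adjoint A + B * mat_adjoint B)"
  then have i: "i < n" and j: "j < n" using A B by auto
  have "(M * mat_adjoint M) $$ (i,j) = (\<Sum>k<a + b. M $$ (i,k) * cnj (M $$ (j,k)))"
    using M i j by (subst index_mult_mat_sum[OF M _ i j]) auto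
  also have "\<dots> = (\<Sum>k<a. A $$ (i,k) * cnj (A $$ (j,k))) + (\<Sum>k<b. B $$ (i,k) * cnj (B $$ (j,k)))"
    unfolding sum_lessThan_add_split M_def using A B i j by simp
  also have "\<dots> = (A * mat_adjoint A) $$ (i,j) + (B * mat_adjoint B) $$ (i,j)"
    unfolding index_mult_mat_sum[OF A mat_adjoint_carrier[OF A] i j]
      index_mult_mat_sum[OF B mat_adjoint_carrier[OF B] i j]
    using A B i j by simp
  also have "\<dots> = (A * mat_adjoint A + B * mat_adjoint B) $$ (i,j)"
    using A B i j by simp
  finally show "(M * mat_adjoint M) $$ (i,j) = (A * mat_adjoint A + B * mat_adjoint B) $$ (i,j)" .
qed (use A B in \<open>auto simp: M_def\<close>)

lemma block_cols_mult_adjoint: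
  assumes "\<forall>A\<in>set As. dim_row A = n"
  shows "block_cols n As \<in> carrier_mat n (sum_list (map dim_col As)) \<and>
    block_cols n As * mat_adjoint (block_cols n As) =
    mat_sum n (\<lambda>k. As ! k * mat_adjoint (As ! k)) {..<length As}"
  using assms
proof (induct As)
  case Nil
  show ?case unfolding block_cols_def by (auto intro!: eq_matI simp: scalar_prod_def)
next
  case (Cons A As)
  let ?B = "block_cols n As"
  have IH: "?B \<in> carrier_mat n (sum_list (map dim_col As))"
    "?B * mat_adjoint ?B = mat_sum n (\<lambda>k. As ! k * mat_adjoint (As ! k)) {..<length As}"
    using Cons by auto
  have A: "A \<in> carrier_mat n (dim_col A)" using Cons(2) by (intro carrier_matI) auto
  have "block_cols n (A # As) = four_block_mat A ?B (0\<^sub>m 0 (dim_col A)) (0\<^sub>m 0 (dim_col ?B))"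
    unfolding block_cols_def by simp
  also have "dim_col ?B = sum_list (map dim_col As)" using IH(1) by simp
  finally have M: "block_cols n (A # As) =
      four_block_mat A ?B (0\<^sub>m 0 (dim_col A)) (0\<^sub>m 0 (sum_list (map dim_col As)))" .
  have C: "block_cols n (A # As) \<in> carrier_mat n (sum_list (map dim_col (A # As)))"
    using four_block_carrier_mat[OF A zero_carrier_mat[of 0 "sum_list (map dim_col As)"]]
    unfolding M by simp
  have "block_cols n (A # As) * mat_adjoint (block_cols n (A # As)) =
      A * mat_adjoint A + ?B * mat_adjoint ?B"
    unfolding M by (rule four_block_mat_mult_adjoint[OF A IH(1)])
  also have "\<dots> = mat_sum n (\<lambda>k. (A # As) ! k * mat_adjoint ((A # As) ! k)) {..<length (A # As)}"
  proof (rule eq_matI)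
    fix i j assume "i < dim_row (mat_sum n (\<lambda>k. (A # As) ! k * mat_adjoint ((A # As) ! k)) {..<length (A # As)})"
      "j < dim_col (mat_sum n (\<lambda>k. (A # As) ! k * mat_adjoint ((A # As) ! k)) {..<length (A # As)})"
    then have i: "i < n" and j: "j < n" by auto
    show "(A * mat_adjoint A + ?B * mat_adjoint ?B) $$ (i,j) =
        mat_sum n (\<lambda>k. (A # As) ! k * mat_adjoint ((A # As) ! k)) {..<length (A # As)} $$ (i,j)"
      unfolding IH(2) using i j A by (simp del: sum.lessThan_Suc add: sum.lessThan_Suc_shift)
  qed (use A IH(1) in auto)
  finally show ?case using C by blast
qed

section \<open>Finite groups of unitary matrices\<close>

lemma mult_carrier_mat_square: "X \<in> carrier_mat n n \<Longrightarrow> Y \<in> carrier_mat n n \<Longrightarrow> X * Y \<in> carrier_mat n n"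
  by simp

lemma mat_adjoint_mult_square:
  "U \<in> carrier_mat n n \<Longrightarrow> V \<in> carrier_mat n n \<Longrightarrow> mat_adjoint (U * V) = mat_adjoint V * mat_adjoint (U :: complex mat)"
  by (rule mat_adjoint_mult[of _ n n _ n])

lemma conj_carrier_mat:
  "V \<in> carrier_mat n n \<Longrightarrow> A \<in> carrier_mat n n \<Longrightarrow> V * A * mat_adjoint V \<in> carrier_mat n n"
  by (meson mat_adjoint_carrier mult_carrier_mat_square)

locale unitary_group =
  fixes n m :: nat and Us :: "complex mat list"
  assumes len: "length Us = m" and m_pos: "0 < m"
    and dist: "distinct Us"
    and unit: "\<forall>U \<in> set Us. unitary_mat n U"
    and first: "Us ! 0 = 1\<^sub>m n"
    and mult_closed: "\<forall>U \<in> set Us. \<forall>V \<in> set Us. U * V \<in> set Us"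
    and inv_closed: "\<forall>U \<in> set Us. mat_adjoint U \<in> set Us"
begin

lemma Us_carrier: "U \<in> set Us \<Longrightarrow> U \<in> carrier_mat n n"
  using unit unfolding unitary_mat_def by auto

lemma adjoint_Us_carrier: "U \<in> set Us \<Longrightarrow> mat_adjoint U \<in> carrier_mat n n"
  using Us_carrier by simp

lemma adjoint_mult_Us: "U \<in> set Us \<Longrightarrow> mat_adjoint U * U = 1\<^sub>m n"
  using unit unfolding unitary_mat_def by auto

lemma mult_adjoint_Us: "U \<in> set Us \<Longrightarrow> U * mat_adjoint U = 1\<^sub>m n"
  using mat_mult_left_right_inverse[OF adjoint_Us_carrier Us_carrier adjoint_mult_Us] by simp

lemma nth_mem_Us: "k < m \<Longrightarrow> Us ! k \<in> set Us"
  using len by simp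

lemma set_Us_conv_nth: "set Us = (\<lambda>k. Us ! k) ` {..<m}"
  using len by (auto simp: set_conv_nth)

lemma inj_on_nth_Us: "inj_on (\<lambda>k. Us ! k) {..<m}"
  using inj_on_nth[OF dist] len by auto

lemma mat_sum_reindex_Us: "mat_sum n (\<lambda>k. F (Us ! k)) {..<m} = mat_sum n F (set Us)"
  unfolding set_Us_conv_nth by (subst mat_sum_reindex[OF inj_on_nth_Us]) simp

lemma bij_betw_mult_right_Us: assumes W: "W \<in> set Us" shows "bij_betw (\<lambda>V. V * W) (set Us) (set Us)"
proof -
  have inj: "inj_on (\<lambda>V. V * W) (set Us)"
  proof (rule inj_onI)
    fix V1 V2 assume V1: "V1 \<in> set Us" and V2: "V2 \<in> set Us" and eq: "V1 * W = V2 * W"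
    have "V1 = V1 * W * mat_adjoint W" using assoc_mult_mat[OF Us_carrier[OF V1] Us_carrier[OF W] adjoint_Us_carrier[OF W]]
      mult_adjoint_Us[OF W] Us_carrier[OF V1] by simp
    also have "\<dots> = V2 * W * mat_adjoint W" using eq by simp
    also have "\<dots> = V2" using assoc_mult_mat[OF Us_carrier[OF V2] Us_carrier[OF W] adjoint_Us_carrier[OF W]]
      mult_adjoint_Us[OF W] Us_carrier[OF V2] by simp
    finally show "V1 = V2" .
  qed
  have sub: "(\<lambda>V. V * W) ` set Us \<subseteq> set Us" using mult_closed W by auto
  show ?thesis unfolding bij_betw_def using inj endo_inj_surj[OF finite_set sub inj] by simp
qed

lemma bij_betw_mult_left_Us: assumes W: "W \<in> set Us" shows "bij_betw (\<lambda>V. W * V) (set Us) (set Us)"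
proof -
  have inj: "inj_on (\<lambda>V. W * V) (set Us)"
  proof (rule inj_onI)
    fix V1 V2 assume V1: "V1 \<in> set Us" and V2: "V2 \<in> set Us" and eq: "W * V1 = W * V2"
    have "V1 = mat_adjoint W * (W * V1)" using assoc_mult_mat[OF adjoint_Us_carrier[OF W] Us_carrier[OF W] Us_carrier[OF V1]]
      adjoint_mult_Us[OF W] Us_carrier[OF V1] by simp
    also have "\<dots> = mat_adjoint W * (W * V2)" using eq by simp
    also have "\<dots> = V2" using assoc_mult_mat[OF adjoint_Us_carrier[OF W] Us_carrier[OF W] Us_carrier[OF V2]]
      adjoint_mult_Us[OF W] Us_carrier[OF V2] by simp
    finally show "V1 = V2" .
  qed
  have sub: "(\<lambda>V. W * V) ` set Us \<subseteq> set Us" using mult_closed W by auto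
  show ?thesis unfolding bij_betw_def using inj endo_inj_surj[OF finite_set sub inj] by simp
qed

lemma mat_sum_shift_right_Us: assumes W: "W \<in> set Us" shows "mat_sum n (\<lambda>V. F (V * W)) (set Us) = mat_sum n F (set Us)"
proof -
  have inj: "inj_on (\<lambda>V. V * W) (set Us)" and im: "(\<lambda>V. V * W) ` set Us = set Us"
    using bij_betw_mult_right_Us[OF W] unfolding bij_betw_def by auto
  have "mat_sum n F (set Us) = mat_sum n F ((\<lambda>V. V * W) ` set Us)" using im by simp
  also have "\<dots> = mat_sum n (\<lambda>V. F (V * W)) (set Us)" by (rule mat_sum_reindex[OF inj])
  finally show ?thesis by simp
qed

lemma mat_sum_shift_left_Us: assumes W: "W \<in> set Us" shows "mat_sum n (\<lambda>V. F (W * V)) (set Us) = mat_sum n F (set Us)"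
proof -
  have inj: "inj_on (\<lambda>V. W * V) (set Us)" and im: "(\<lambda>V. W * V) ` set Us = set Us"
    using bij_betw_mult_left_Us[OF W] unfolding bij_betw_def by auto
  have "mat_sum n F (set Us) = mat_sum n F ((\<lambda>V. W * V) ` set Us)" using im by simp
  also have "\<dots> = mat_sum n (\<lambda>V. F (W * V)) (set Us)" by (rule mat_sum_reindex[OF inj])
  finally show ?thesis by simp
qed

lemma conj_mult_Us: assumes U: "U \<in> set Us" and X: "X \<in> carrier_mat n n" and Y: "Y \<in> carrier_mat n n"
  shows "U * X * mat_adjoint U * (U * Y * mat_adjoint U) = U * (X * Y) * mat_adjoint U"
proof -
  note c = Us_carrier[OF U] adjoint_Us_carrier[OF U] X Y
  have "U * X * mat_adjoint U * (U * Y * mat_adjoint U) = U * X * (mat_adjoint U * U) * Y * mat_adjoint U"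
    using c by (simp add: assoc_mult_mat[of _ n n _ n _ n] mult_carrier_mat_square)
  also have "\<dots> = U * (X * Y) * mat_adjoint U" unfolding adjoint_mult_Us[OF U]
    using c by (simp add: assoc_mult_mat[of _ n n _ n _ n] mult_carrier_mat_square)
  finally show ?thesis .
qed

lemma trace_conj_Us: assumes U: "U \<in> set Us" and X: "X \<in> carrier_mat n n"
  shows "trace_mat (U * X * mat_adjoint U) = trace_mat X"
proof -
  note c = Us_carrier[OF U] adjoint_Us_carrier[OF U] X
  have "trace_mat (U * X * mat_adjoint U) = trace_mat (mat_adjoint U * (U * X))"
    using c by (intro trace_mat_comm[of _ n n]) auto
  also have "mat_adjoint U * (U * X) = X"
    using assoc_mult_mat[OF c(2,1,3)] adjoint_mult_Us[OF U] X by simp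
  finally show ?thesis .
qed

lemma trace_conj_mult_Us: assumes U: "U \<in> set Us" and X: "X \<in> carrier_mat n n" and Y: "Y \<in> carrier_mat n n"
  shows "trace_mat (U * X * mat_adjoint U * (U * Y * mat_adjoint U)) = trace_mat (X * Y)"
  using conj_mult_Us[OF U X Y] trace_conj_Us[OF U, of "X * Y"] X Y by simp

lemma detect_prob_GU: assumes R: "R \<in> carrier_mat n n" and P: "P \<in> carrier_mat n n"
  shows "detect_prob (equal_priors m) (map (\<lambda>U. U * R * mat_adjoint U) Us) (map (\<lambda>U. U * P * mat_adjoint U) Us) =
    Re (trace_mat (R * P))"
proof -
  have "detect_prob (equal_priors m) (map (\<lambda>U. U * R * mat_adjoint U) Us) (map (\<lambda>U. U * P * mat_adjoint U) Us) =
      (\<Sum>k<m. Re (trace_mat (R * P)) / real m)"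
    using len trace_conj_mult_Us[OF nth_mem_Us R P] by (subst detect_prob_equal_priors) auto
  also have "\<dots> = Re (trace_mat (R * P))" using m_pos by simp
  finally show ?thesis .
qed

definition twirl :: "complex mat \<Rightarrow> complex mat" where
  "twirl X = mat_sum n (\<lambda>V. V * X * mat_adjoint V) (set Us)"

lemma twirl_carrier: "twirl X \<in> carrier_mat n n"
  unfolding twirl_def by simp

lemma mat_sum_nth_eq_twirl: "mat_sum n (\<lambda>k. Us ! k * X * mat_adjoint (Us ! k)) {..<m} = twirl X"
  unfolding twirl_def by (rule mat_sum_reindex_Us)

lemma mult_twirl: assumes A: "A \<in> carrier_mat n n" and X: "X \<in> carrier_mat n n"
  shows "A * twirl X = mat_sum n (\<lambda>V. A * (V * X * mat_adjoint V)) (set Us)"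
  unfolding twirl_def using A conj_carrier_mat[OF Us_carrier X] by (rule mat_sum_mult_left) auto

lemma msum_conj_eq_twirl: assumes X: "X \<in> carrier_mat n n"
  shows "msum n (map (\<lambda>U. U * X * mat_adjoint U) Us) = twirl X"
  using msum_eq_mat_sum[of "map (\<lambda>U. U * X * mat_adjoint U) Us" n] conj_carrier_mat[OF Us_carrier X] len
  by (auto simp: mat_sum_nth_eq_twirl[symmetric] intro!: mat_sum_cong)

lemma psd_twirl: assumes X: "X \<in> carrier_mat n n" "psd_mat X"
  shows "psd_mat (twirl X)"
  unfolding twirl_def
  using conj_carrier_mat[OF Us_carrier X(1)] psd_mat_conj[OF X(2) X(1) Us_carrier]
  by (intro psd_mat_sum) auto

lemma twirl_conj_left: assumes W: "W \<in> set Us" and X: "X \<in> carrier_mat n n"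
  shows "W * twirl X * mat_adjoint W = twirl X"
proof -
  have Wc: "W \<in> carrier_mat n n" and aW: "mat_adjoint W \<in> carrier_mat n n" using Us_carrier[OF W] by auto
  have Fc: "\<And>V. V \<in> set Us \<Longrightarrow> V * X * mat_adjoint V \<in> carrier_mat n n"
    using Us_carrier X conj_carrier_mat by blast
  have "W * twirl X = mat_sum n (\<lambda>V. W * (V * X * mat_adjoint V)) (set Us)"
    by (rule mult_twirl[OF Wc X])
  then have "W * twirl X * mat_adjoint W = mat_sum n (\<lambda>V. W * (V * X * mat_adjoint V) * mat_adjoint W) (set Us)"
    using mat_sum_mult_right[OF aW _ finite_set, where F="\<lambda>V. W * (V * X * mat_adjoint V)"]
      mult_carrier_mat_square[OF Wc Fc] by simp
  also have "\<dots> = mat_sum n (\<lambda>V. (W * V) * X * mat_adjoint (W * V)) (set Us)"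
    using Us_carrier adjoint_Us_carrier Wc aW X
    by (intro mat_sum_cong) (simp add: mat_adjoint_mult_square assoc_mult_mat[of _ n n _ n _ n] mult_carrier_mat_square)
  also have "\<dots> = twirl X" unfolding twirl_def by (rule mat_sum_shift_left_Us[OF W])
  finally show ?thesis .
qed

lemma twirl_conj_right: assumes W: "W \<in> set Us" and X: "X \<in> carrier_mat n n"
  shows "twirl (mat_adjoint W * X * W) = twirl X"
proof -
  have aW: "mat_adjoint W \<in> set Us" using inv_closed W by simp
  have "twirl (mat_adjoint W * X * W) = mat_sum n (\<lambda>V. (V * mat_adjoint W) * X * mat_adjoint (V * mat_adjoint W)) (set Us)"
    unfolding twirl_def
  proof (rule mat_sum_cong)
    fix V assume V: "V \<in> set Us"
    note c = Us_carrier[OF V] adjoint_Us_carrier[OF V] Us_carrier[OF W] adjoint_Us_carrier[OF W] X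
    have "mat_adjoint (V * mat_adjoint W) = W * mat_adjoint V"
      using mat_adjoint_mult_square[OF c(1) c(4)] by simp
    then show "V * (mat_adjoint W * X * W) * mat_adjoint V = (V * mat_adjoint W) * X * mat_adjoint (V * mat_adjoint W)"
      using c by (simp add: assoc_mult_mat[of _ n n _ n _ n] mult_carrier_mat_square)
  qed
  also have "\<dots> = twirl X" unfolding twirl_def by (rule mat_sum_shift_right_Us[OF aW, where F="\<lambda>V. V * X * mat_adjoint V"])
  finally show ?thesis .
qed

lemma twirl_mat_sum: assumes F: "\<And>k. k \<in> K \<Longrightarrow> F k \<in> carrier_mat n n" and K: "finite K"
  shows "twirl (mat_sum n F K) = mat_sum n (\<lambda>k. twirl (F k)) K"
proof -
  have "twirl (mat_sum n F K) = mat_sum n (\<lambda>V. mat_sum n (\<lambda>k. V * F k * mat_adjoint V) K) (set Us)"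
    unfolding twirl_def
  proof (rule mat_sum_cong)
    fix V assume V: "V \<in> set Us"
    note c = Us_carrier[OF V] adjoint_Us_carrier[OF V]
    have "V * mat_sum n F K = mat_sum n (\<lambda>k. V * F k) K" by (rule mat_sum_mult_left[OF c(1) F K])
    then have "V * mat_sum n F K * mat_adjoint V = mat_sum n (\<lambda>k. V * F k) K * mat_adjoint V" by simp
    also have "\<dots> = mat_sum n (\<lambda>k. V * F k * mat_adjoint V) K"
      by (rule mat_sum_mult_right[OF c(2) _ K], rule mult_carrier_mat_square[OF c(1) F])
    finally show "V * mat_sum n F K * mat_adjoint V = mat_sum n (\<lambda>k. V * F k * mat_adjoint V) K" .
  qed
  also have "\<dots> = mat_sum n (\<lambda>k. twirl (F k)) K" unfolding twirl_def by (rule mat_sum_swap)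
  finally show ?thesis .
qed

lemma twirl_smult: assumes X: "X \<in> carrier_mat n n" shows "twirl (c \<cdot>\<^sub>m X) = c \<cdot>\<^sub>m twirl X"
  unfolding twirl_def
proof (subst mat_sum_smult)
  show "\<And>V. V \<in> set Us \<Longrightarrow> V * X * mat_adjoint V \<in> carrier_mat n n" using Us_carrier X conj_carrier_mat by blast
  show "mat_sum n (\<lambda>V. V * (c \<cdot>\<^sub>m X) * mat_adjoint V) (set Us) = mat_sum n (\<lambda>k. c \<cdot>\<^sub>m (k * X * mat_adjoint k)) (set Us)"
  proof (rule mat_sum_cong)
    fix V assume V: "V \<in> set Us"
    note cc = Us_carrier[OF V] adjoint_Us_carrier[OF V] X
    show "V * (c \<cdot>\<^sub>m X) * mat_adjoint V = c \<cdot>\<^sub>m (V * X * mat_adjoint V)"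
      using cc by (simp add: mult_smult_distrib[of _ n n _ n] mult_smult_assoc_mat[of _ n n _ n] mult_carrier_mat_square)
  qed
qed

lemma trace_twirl: assumes X: "X \<in> carrier_mat n n"
  shows "trace_mat (twirl X) = of_nat m * trace_mat X"
proof -
  have "trace_mat (twirl X) = (\<Sum>V\<in>set Us. trace_mat X)"
    unfolding twirl_def using conj_carrier_mat[OF Us_carrier X] trace_conj_Us[OF _ X]
    by (subst trace_mat_sum) auto
  then show ?thesis using distinct_card[OF dist] len by simp
qed

lemma mult_twirl_commuting:
  assumes C: "C \<in> carrier_mat n n" and comm: "\<And>U. U \<in> set Us \<Longrightarrow> U * C = C * U"
    and X: "X \<in> carrier_mat n n"
  shows "C * twirl X = twirl (C * X)"
  unfolding mult_twirl[OF C X] unfolding twirl_def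
proof (rule mat_sum_cong)
  fix V assume V: "V \<in> set Us"
  note c = Us_carrier[OF V] adjoint_Us_carrier[OF V] C X
  have "C * (V * X * mat_adjoint V) = (C * V) * X * mat_adjoint V"
    using c by (simp add: assoc_mult_mat[of _ n n _ n _ n] mult_carrier_mat_square)
  also have "\<dots> = V * (C * X) * mat_adjoint V"
    unfolding comm[OF V, symmetric] using c by (simp add: assoc_mult_mat[of _ n n _ n _ n] mult_carrier_mat_square)
  finally show "C * (V * X * mat_adjoint V) = V * (C * X) * mat_adjoint V" .
qed

lemma twirl_mult_commuting:
  assumes C: "C \<in> carrier_mat n n" and comm: "\<And>U. U \<in> set Us \<Longrightarrow> U * C = C * U"
    and X: "X \<in> carrier_mat n n"
  shows "twirl X * C = twirl (X * C)"
proof -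
  have "twirl X * C = mat_sum n (\<lambda>V. V * X * mat_adjoint V * C) (set Us)"
    unfolding twirl_def using conj_carrier_mat[OF Us_carrier X] by (rule mat_sum_mult_right[OF C]) auto
  also have "\<dots> = twirl (X * C)"
    unfolding twirl_def
  proof (rule mat_sum_cong)
    fix V assume V: "V \<in> set Us"
    note c = Us_carrier[OF V] adjoint_Us_carrier[OF V] C X
    have "mat_adjoint V * C = C * mat_adjoint V" using comm inv_closed V by simp
    then show "V * X * mat_adjoint V * C = V * (X * C) * mat_adjoint V"
      using c by (simp add: assoc_mult_mat[of _ n n _ n _ n] mult_carrier_mat_square)
  qed
  finally show ?thesis .
qed

lemma twirl_one: "twirl (1\<^sub>m n) = of_nat m \<cdot>\<^sub>m 1\<^sub>m n"
proof -
  have "twirl (1\<^sub>m n) = mat_sum n (\<lambda>V. 1\<^sub>m n) (set Us)"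
    unfolding twirl_def
  proof (rule mat_sum_cong)
    fix V assume V: "V \<in> set Us"
    show "V * 1\<^sub>m n * mat_adjoint V = 1\<^sub>m n" using right_mult_one_mat[OF Us_carrier[OF V]] mult_adjoint_Us[OF V] by simp
  qed
  also have "\<dots> = of_nat m \<cdot>\<^sub>m 1\<^sub>m n" using mat_sum_const[OF one_carrier_mat, of n "set Us"] distinct_card[OF dist] len by simp
  finally show ?thesis .
qed
end

lemma gram_mult_left:
  assumes U: "U \<in> carrier_mat n n" and B: "(B :: complex mat) \<in> carrier_mat n r"
  shows "(U * B) * mat_adjoint (U * B) = U * (B * mat_adjoint B) * mat_adjoint U"
proof -
  have aB: "mat_adjoint B \<in> carrier_mat r n" using B by simp
  have "(U * B) * mat_adjoint (U * B) = (U * B) * (mat_adjoint B * mat_adjoint U)"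
    using mat_adjoint_mult[OF U B] by simp
  also have "\<dots> = U * (B * (mat_adjoint B * mat_adjoint U))"
    using assoc_mult_mat[OF U B, of "mat_adjoint B * mat_adjoint U" n] aB U by simp
  also have "B * (mat_adjoint B * mat_adjoint U) = (B * mat_adjoint B) * mat_adjoint U"
    using assoc_mult_mat[OF B aB, of "mat_adjoint U" n] U by simp
  also have "U * ((B * mat_adjoint B) * mat_adjoint U) = U * (B * mat_adjoint B) * mat_adjoint U"
    using assoc_mult_mat[OF U, of "B * mat_adjoint B" n "mat_adjoint U" n] B U by simp
  finally show ?thesis .
qed

lemma gram_quadratic_form:
  assumes B: "(B :: complex mat) \<in> carrier_mat n r" and x: "x \<in> carrier_vec n"
  shows "conjugate x \<bullet> (B * mat_adjoint B *\<^sub>v x) = conjugate (mat_adjoint B *\<^sub>v x) \<bullet> (mat_adjoint B *\<^sub>v x)"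
proof -
  have "B * mat_adjoint B *\<^sub>v x = B *\<^sub>v (mat_adjoint B *\<^sub>v x)"
    using B x by (simp add: assoc_mult_mat_vec[of _ n r _ n])
  then show ?thesis
    using sprod_mat_adjoint[OF B x mat_adjoint_mult_vec_carrier[OF B, of x]] by simp
qed

lemma gram_mult_vec_eq_0:
  assumes B: "(B :: complex mat) \<in> carrier_mat n r" and x: "x \<in> carrier_vec n"
    and q: "Re (conjugate x \<bullet> (B * mat_adjoint B *\<^sub>v x)) = 0"
  shows "B * mat_adjoint B *\<^sub>v x = 0\<^sub>v n"
proof -
  have y: "mat_adjoint B *\<^sub>v x \<in> carrier_vec r" by (rule mat_adjoint_mult_vec_carrier[OF B])
  have "mat_adjoint B *\<^sub>v x = 0\<^sub>v r"
    using q gram_quadratic_form[OF B x] conjugate_sprod_self[OF y] conjugate_sprod_self_eq_0[OF y]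
    by simp
  then show ?thesis
    using B x by (simp add: assoc_mult_mat_vec[of _ n r _ n]) (auto simp: scalar_prod_def)
qed

lemma sum_quadratic_forms_eq_0:
  assumes K: "finite K" and F: "\<And>k. k \<in> K \<Longrightarrow> F k \<in> carrier_mat n n \<and> psd_mat (F k)"
    and x: "x \<in> carrier_vec n" and s: "(\<Sum>k\<in>K. conjugate x \<bullet> (F k *\<^sub>v x)) = 0"
  shows "\<forall>k\<in>K. Re (conjugate x \<bullet> (F k *\<^sub>v x)) = 0"
proof -
  have "(\<Sum>k\<in>K. Re (conjugate x \<bullet> (F k *\<^sub>v x))) = 0" using s by (simp flip: Re_sum)
  then show ?thesis
    using K F x psd_matD by (subst (asm) sum_nonneg_eq_0_iff) blast+
qed

lemma orthogonal_vspan: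
  assumes x: "(x :: complex vec) \<in> carrier_vec n" and Sc: "S \<subseteq> carrier_vec n"
  and orth: "\<And>e. e \<in> S \<Longrightarrow> conjugate x \<bullet> e = 0"
  and y: "y \<in> vspan n S"
  shows "conjugate x \<bullet> y = 0"
proof -
  interpret vec_space "TYPE(complex)" n .
  from y obtain a A where yA: "y = lincomb a A" and fin: "finite A" and AS: "A \<subseteq> S"
    unfolding vspan_def span_def by blast
  have Ac: "A \<subseteq> carrier_vec n" using AS Sc by auto
  have yc: "y \<in> carrier_vec n" unfolding yA using lincomb_dim[OF fin Ac] by (intro carrier_vecI) simp
  have "conjugate x \<bullet> y = (\<Sum>i<n. cnj (x $ i) * (\<Sum>v\<in>A. a v * v $ i))"
    unfolding conjugate_sprod_sum[OF x yc] unfolding yA by (intro sum.cong refl) (simp add: lincomb_index[OF _ Ac])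
  also have "\<dots> = (\<Sum>v\<in>A. a v * (\<Sum>i<n. cnj (x $ i) * v $ i))"
    by (simp add: sum_distrib_left sum.swap[of _ A] ac_simps)
  also have "\<dots> = (\<Sum>v\<in>A. a v * (conjugate x \<bullet> v))"
    using Ac x by (intro sum.cong refl) (simp add: conjugate_sprod_sum subsetD)
  also have "\<dots> = 0" using AS orth by (intro sum.neutral) auto
  finally show ?thesis .
qed

locale gu_state_set = unitary_group +
  fixes r :: nat and phi :: "complex mat"
  assumes phi_dim: "phi \<in> carrier_mat n r"
    and tr: "trace_mat (phi * mat_adjoint phi) = 1"
    and spans: "vspan n (\<Union>i<m. eigvecs_nz n (map (\<lambda>U. U * (phi * mat_adjoint phi) * mat_adjoint U) Us ! i)) = carrier_vec n"
begin

abbreviation \<rho> :: "complex mat" where "\<rho> \<equiv> phi * mat_adjoint phi"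
abbreviation \<rho>s :: "complex mat list" where "\<rho>s \<equiv> map (\<lambda>U. U * \<rho> * mat_adjoint U) Us"
abbreviation \<phi>s :: "complex mat list" where "\<phi>s \<equiv> map (\<lambda>U. U * phi) Us"
abbreviation \<Phi> :: "complex mat" where "\<Phi> \<equiv> block_cols n \<phi>s"
abbreviation G :: "complex mat" where "G \<equiv> twirl \<rho>"
abbreviation S :: "complex mat" where "S \<equiv> psd_sqrt G"
abbreviation T :: "complex mat" where "T \<equiv> inv_sqrt G"

lemma rho_carrier: "\<rho> \<in> carrier_mat n n" using phi_dim by simp

lemma rho_psd: "psd_mat \<rho>" by (rule psd_mat_gram[OF phi_dim])

lemma G_carrier: "G \<in> carrier_mat n n" by (rule twirl_carrier)

lemma G_psd: "psd_mat G" by (rule psd_twirl[OF rho_carrier rho_psd])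

lemma G_conj: "W \<in> set Us \<Longrightarrow> W * G * mat_adjoint W = G"
  by (rule twirl_conj_left[OF _ rho_carrier])


lemma Phi_mult_adjoint: "\<Phi> * mat_adjoint \<Phi> = G"
proof -
  have "\<forall>A\<in>set \<phi>s. dim_row A = n" using Us_carrier by auto
  from block_cols_mult_adjoint[OF this]
  have "\<Phi> * mat_adjoint \<Phi> = mat_sum n (\<lambda>k. \<phi>s ! k * mat_adjoint (\<phi>s ! k)) {..<length \<phi>s}" by simp
  also have "\<dots> = mat_sum n (\<lambda>k. Us ! k * \<rho> * mat_adjoint (Us ! k)) {..<m}"
  proof -
    have l: "length \<phi>s = m" using len by simp
    show ?thesis unfolding l
    proof (rule mat_sum_cong)
      fix k assume "k \<in> {..<m}"
      then have k: "k < m" by simp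
      show "\<phi>s ! k * mat_adjoint (\<phi>s ! k) = Us ! k * \<rho> * mat_adjoint (Us ! k)"
        using k len gram_mult_left[OF Us_carrier[OF nth_mem_Us[OF k]] phi_dim] by simp
    qed
  qed
  also have "\<dots> = G" by (rule mat_sum_nth_eq_twirl)
  finally show ?thesis .
qed

lemma G_mult_vec_eq_0: assumes x: "x \<in> carrier_vec n" and Gx: "G *\<^sub>v x = 0\<^sub>v n" shows "x = 0\<^sub>v n"
proof -
  have gram: "V * \<rho> * mat_adjoint V = (V * phi) * mat_adjoint (V * phi)" if "V \<in> set Us" for V
    using gram_mult_left[OF Us_carrier[OF that] phi_dim] by simp
  have Vphi: "V * phi \<in> carrier_mat n r" if "V \<in> set Us" for V
    using Us_carrier[OF that] phi_dim by simp
  have "(\<Sum>V\<in>set Us. conjugate x \<bullet> ((V * \<rho> * mat_adjoint V) *\<^sub>v x)) = conjugate x \<bullet> (G *\<^sub>v x)"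
    unfolding twirl_def using conj_carrier_mat[OF Us_carrier rho_carrier] x
    by (intro quadratic_form_mat_sum[symmetric]) auto
  also have "\<dots> = 0" using Gx x by simp
  finally have zero: "\<forall>V\<in>set Us. Re (conjugate x \<bullet> ((V * \<rho> * mat_adjoint V) *\<^sub>v x)) = 0"
    using conj_carrier_mat[OF Us_carrier rho_carrier] psd_mat_conj[OF rho_psd rho_carrier Us_carrier] x
    by (intro sum_quadratic_forms_eq_0) auto
  have rx: "(V * \<rho> * mat_adjoint V) *\<^sub>v x = 0\<^sub>v n" if "V \<in> set Us" for V
  proof -
    from zero that have "Re (conjugate x \<bullet> ((V * \<rho> * mat_adjoint V) *\<^sub>v x)) = 0" by blast
    then show ?thesis unfolding gram[OF that] by (rule gram_mult_vec_eq_0[OF Vphi[OF that] x])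
  qed
  let ?E = "\<Union>i<m. eigvecs_nz n (\<rho>s ! i)"
  have orth: "conjugate x \<bullet> e = 0" if "e \<in> ?E" for e
  proof -
    from that obtain i where i: "i < m" and ei: "e \<in> eigvecs_nz n (Us ! i * \<rho> * mat_adjoint (Us ! i))"
      using len by auto
    show ?thesis
      using orthogonal_eigvecs_nz[OF conj_carrier_mat[OF Us_carrier[OF nth_mem_Us[OF i]] rho_carrier] _ x
          rx[OF nth_mem_Us[OF i]] ei]
        psd_mat_conj[OF rho_psd rho_carrier Us_carrier[OF nth_mem_Us[OF i]]]
      by (simp add: psd_mat_hermitian hermitian_matD)
  qed
  have "?E \<subseteq> carrier_vec n" unfolding eigvecs_nz_def by auto
  moreover have "x \<in> vspan n ?E" using spans x by simp
  ultimately have "conjugate x \<bullet> x = 0" using orthogonal_vspan[OF x _ orth] by blast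
  then show ?thesis using conjugate_sprod_self_eq_0[OF x] by simp
qed
end

section \<open>The least-squares measurement\<close>

context gu_state_set
begin

lemma S_carrier: "S \<in> carrier_mat n n" and S_psd: "psd_mat S" and SS: "S * S = G"
  and T_carrier: "T \<in> carrier_mat n n" and T_psd: "psd_mat T" and TS: "T * S = 1\<^sub>m n" and ST: "S * T = 1\<^sub>m n"
  using psd_sqrt_spec[OF G_carrier G_psd] inv_sqrt_spec[OF G_carrier G_psd G_mult_vec_eq_0] by auto

lemma S_herm: "mat_adjoint S = S" using S_psd by (simp add: psd_mat_hermitian hermitian_matD)
lemma T_herm: "mat_adjoint T = T" using T_psd by (simp add: psd_mat_hermitian hermitian_matD)

lemma S_conj: "U \<in> set Us \<Longrightarrow> U * S * mat_adjoint U = S"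
  by (rule psd_sqrt_unitary_conj[OF G_carrier G_psd Us_carrier adjoint_mult_Us G_conj])

lemma T_conj: assumes U: "U \<in> set Us" shows "U * T * mat_adjoint U = T"
proof -
  have c1: "U * S * mat_adjoint U \<in> carrier_mat n n" by (rule conj_carrier_mat[OF Us_carrier[OF U] S_carrier])
  have c2: "U * T * mat_adjoint U \<in> carrier_mat n n" by (rule conj_carrier_mat[OF Us_carrier[OF U] T_carrier])
  have "mat_inv (U * S * mat_adjoint U) = U * T * mat_adjoint U"
  proof (rule mat_inv_eqI[OF c1 c2])
    show "U * S * mat_adjoint U * (U * T * mat_adjoint U) = 1\<^sub>m n"
      unfolding conj_mult_Us[OF U S_carrier T_carrier] ST using mult_adjoint_Us[OF U] Us_carrier[OF U] by simp
    show "U * T * mat_adjoint U * (U * S * mat_adjoint U) = 1\<^sub>m n"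
      unfolding conj_mult_Us[OF U T_carrier S_carrier] TS using mult_adjoint_Us[OF U] Us_carrier[OF U] by simp
  qed
  then show ?thesis unfolding S_conj[OF U] inv_sqrt_def[symmetric] by simp
qed

lemma T_comm: assumes U: "U \<in> set Us" shows "U * T = T * U"
proof -
  note c = Us_carrier[OF U] adjoint_Us_carrier[OF U] T_carrier
  have "U * T = U * T * (mat_adjoint U * U)" using c adjoint_mult_Us[OF U] by simp
  also have "\<dots> = (U * T * mat_adjoint U) * U" using c by (simp add: assoc_mult_mat[of _ n n _ n _ n] mult_carrier_mat_square)
  also have "\<dots> = T * U" unfolding T_conj[OF U] ..
  finally show ?thesis .
qed

lemma T_mult_G: "T * G = S"
proof -
  have "T * G = T * (S * S)" using SS by simp
  also have "\<dots> = (T * S) * S" using assoc_mult_mat[OF T_carrier S_carrier S_carrier] by simp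
  finally show ?thesis unfolding TS using S_carrier by simp
qed

lemma T_G_T: "T * G * T = 1\<^sub>m n"
  unfolding T_mult_G by (rule ST)

definition sqrt_prior :: complex where
  "sqrt_prior = complex_of_real (sqrt (1 / real m))"

lemma weighted_phis_eq: "map2 (\<lambda>p phi. complex_of_real (sqrt p) \<cdot>\<^sub>m phi) (equal_priors m) \<phi>s = map (\<lambda>U. sqrt_prior \<cdot>\<^sub>m (U * phi)) Us"
  unfolding equal_priors_def sqrt_prior_def using len by (simp add: zip_replicate1)

lemma sqrt_prior_mult_cnj: "sqrt_prior * cnj sqrt_prior = complex_of_real (1 / real m)"
  unfolding sqrt_prior_def using m_pos by (simp flip: of_real_mult)

lemma Psi_mult_adjoint: "block_cols n (map (\<lambda>U. sqrt_prior \<cdot>\<^sub>m (U * phi)) Us) * mat_adjoint (block_cols n (map (\<lambda>U. sqrt_prior \<cdot>\<^sub>m (U * phi)) Us))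
  = complex_of_real (1 / real m) \<cdot>\<^sub>m G"
proof -
  let ?As = "map (\<lambda>U. sqrt_prior \<cdot>\<^sub>m (U * phi)) Us"
  have "\<forall>A\<in>set ?As. dim_row A = n" using Us_carrier by auto
  from block_cols_mult_adjoint[OF this]
  have "block_cols n ?As * mat_adjoint (block_cols n ?As) = mat_sum n (\<lambda>k. ?As ! k * mat_adjoint (?As ! k)) {..<length ?As}" by simp
  also have "\<dots> = mat_sum n (\<lambda>k. complex_of_real (1 / real m) \<cdot>\<^sub>m (Us ! k * \<rho> * mat_adjoint (Us ! k))) {..<m}"
  proof -
    have l: "length ?As = m" using len by simp
    show ?thesis unfolding l
    proof (rule mat_sum_cong)
      fix k assume "k \<in> {..<m}"
      then have k: "k < m" by simp
      have U: "Us ! k \<in> carrier_mat n n" by (rule Us_carrier[OF nth_mem_Us[OF k]])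
      have Up: "Us ! k * phi \<in> carrier_mat n r" using U phi_dim by simp
      have "(sqrt_prior \<cdot>\<^sub>m (Us ! k * phi)) * mat_adjoint (sqrt_prior \<cdot>\<^sub>m (Us ! k * phi)) =
          (sqrt_prior * cnj sqrt_prior) \<cdot>\<^sub>m ((Us ! k * phi) * mat_adjoint (Us ! k * phi))"
        using Up by (simp add: mult_smult_assoc_mat[of _ n r _ n] mult_smult_distrib[of _ n r _ n] smult_smult_mat ac_simps)
      then show "?As ! k * mat_adjoint (?As ! k) = complex_of_real (1 / real m) \<cdot>\<^sub>m (Us ! k * \<rho> * mat_adjoint (Us ! k))"
        using k len gram_mult_left[OF U phi_dim] sqrt_prior_mult_cnj by simp
    qed
  qed
  also have "\<dots> = complex_of_real (1 / real m) \<cdot>\<^sub>m mat_sum n (\<lambda>k. Us ! k * \<rho> * mat_adjoint (Us ! k)) {..<m}"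
    by (rule mat_sum_smult[symmetric], rule conj_carrier_mat[OF Us_carrier[OF nth_mem_Us] rho_carrier], simp)
  also have "mat_sum n (\<lambda>k. Us ! k * \<rho> * mat_adjoint (Us ! k)) {..<m} = G" by (rule mat_sum_nth_eq_twirl)
  finally show ?thesis .
qed

lemma inv_sqrt_scaled_G: "inv_sqrt (complex_of_real (1 / real m) \<cdot>\<^sub>m G) = complex_of_real (sqrt (real m)) \<cdot>\<^sub>m T"
proof -
  have ps: "psd_sqrt (complex_of_real (1 / real m) \<cdot>\<^sub>m G) = complex_of_real (sqrt (1 / real m)) \<cdot>\<^sub>m S"
    by (rule psd_sqrt_smult[OF G_carrier G_psd], simp)
  have one: "complex_of_real (sqrt (1 / real m)) * complex_of_real (sqrt (real m)) = 1"
    using m_pos by (simp flip: of_real_mult add: real_sqrt_mult[symmetric])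
  have one': "complex_of_real (sqrt (real m)) * complex_of_real (sqrt (1 / real m)) = 1"
    using one by (simp add: mult.commute)
  show ?thesis unfolding inv_sqrt_def[of "complex_of_real (1 / real m) \<cdot>\<^sub>m G"] ps
  proof (rule mat_inv_eqI)
    show "complex_of_real (sqrt (1 / real m)) \<cdot>\<^sub>m S * (complex_of_real (sqrt (real m)) \<cdot>\<^sub>m T) = 1\<^sub>m n"
      using S_carrier T_carrier ST one one'
      by (simp add: mult_smult_assoc_mat[of _ n n _ n] mult_smult_distrib[of _ n n _ n] smult_smult_mat)
    show "complex_of_real (sqrt (real m)) \<cdot>\<^sub>m T * (complex_of_real (sqrt (1 / real m)) \<cdot>\<^sub>m S) = 1\<^sub>m n"
      using S_carrier T_carrier TS one one'
      by (simp add: mult_smult_assoc_mat[of _ n n _ n] mult_smult_distrib[of _ n n _ n] smult_smult_mat)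
  qed (insert S_carrier T_carrier, auto)
qed

abbreviation LSM :: "complex mat list" where "LSM \<equiv> lsm n (equal_priors m) \<phi>s"

lemma LSM_len: "length LSM = m"
  unfolding lsm_def Let_def using len by (simp add: equal_priors_def)

lemma LSM_nth: assumes k: "k < m"
  shows "LSM ! k = (Us ! k * (T * phi)) * mat_adjoint (Us ! k * (T * phi))"
proof -
  let ?U = "Us ! k"
  have U: "?U \<in> set Us" by (rule nth_mem_Us[OF k])
  have Uc: "?U \<in> carrier_mat n n" by (rule Us_carrier[OF U])
  have Sd: "inv_sqrt (block_cols n (map (\<lambda>U. sqrt_prior \<cdot>\<^sub>m (U * phi)) Us) * mat_adjoint (block_cols n (map (\<lambda>U. sqrt_prior \<cdot>\<^sub>m (U * phi)) Us)))
     = complex_of_real (sqrt (real m)) \<cdot>\<^sub>m T" unfolding Psi_mult_adjoint by (rule inv_sqrt_scaled_G)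
  have one: "complex_of_real (sqrt (real m)) * sqrt_prior = 1"
    unfolding sqrt_prior_def using m_pos by (simp flip: of_real_mult add: real_sqrt_mult[symmetric])
  have one': "sqrt_prior * complex_of_real (sqrt (real m)) = 1" using one by (simp add: mult.commute)
  have Up: "?U * phi \<in> carrier_mat n r" using Uc phi_dim by simp
  have "(complex_of_real (sqrt (real m)) \<cdot>\<^sub>m T) * (sqrt_prior \<cdot>\<^sub>m (?U * phi)) = T * (?U * phi)"
    using T_carrier Up one one' by (simp add: mult_smult_assoc_mat[of _ n n _ r] mult_smult_distrib[of _ n n _ r] smult_smult_mat)
  also have "\<dots> = (T * ?U) * phi" using assoc_mult_mat[OF T_carrier Uc phi_dim] by simp
  also have "\<dots> = (?U * T) * phi" unfolding T_comm[OF U] ..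
  also have "\<dots> = ?U * (T * phi)" using assoc_mult_mat[OF Uc T_carrier phi_dim] by simp
  finally have e: "(complex_of_real (sqrt (real m)) \<cdot>\<^sub>m T) * (sqrt_prior \<cdot>\<^sub>m (?U * phi)) = ?U * (T * phi)" .
  show ?thesis unfolding lsm_def Let_def weighted_phis_eq Sd using k len e by simp
qed

abbreviation \<mu> :: "complex mat" where "\<mu> \<equiv> T * phi"
abbreviation LSM0 :: "complex mat" where "LSM0 \<equiv> \<mu> * mat_adjoint \<mu>"

lemma mu_carrier: "\<mu> \<in> carrier_mat n r" using T_carrier phi_dim by simp
lemma LSM0_carrier: "LSM0 \<in> carrier_mat n n" using mu_carrier by simp

lemma LSM_conj: assumes k: "k < m" shows "LSM ! k = Us ! k * LSM0 * mat_adjoint (Us ! k)"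
  unfolding LSM_nth[OF k] by (rule gram_mult_left[OF Us_carrier[OF nth_mem_Us[OF k]] mu_carrier])

lemma LSM_eq_GU: "LSM = map (\<lambda>U. U * LSM0 * mat_adjoint U) Us"
  using LSM_len len LSM_conj by (intro nth_equalityI) auto


lemma LSM_nth_0: "LSM ! 0 = LSM0"
  using LSM_conj[OF m_pos] first left_mult_one_mat[OF LSM0_carrier] right_mult_one_mat[OF LSM0_carrier] by simp

lemma trace_rhos_LSM: assumes k: "k < m"
  shows "trace_mat (\<rho>s ! k * LSM ! k) = trace_mat (\<rho> * LSM0)"
  using trace_conj_mult_Us[OF nth_mem_Us[OF k] rho_carrier LSM0_carrier] k len
  unfolding LSM_conj[OF k] by simp

end


section \<open>Optimality of the least-squares measurement\<close>

context gu_state_set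
begin

lemma r_pos: "0 < r"
proof (rule ccontr)
  assume "\<not> 0 < r"
  then have r0: "r = 0" by simp
  have "\<rho> = 0\<^sub>m n n"
  proof (rule eq_matI)
    fix i j assume "i < dim_row (0\<^sub>m n n :: complex mat)" "j < dim_col (0\<^sub>m n n :: complex mat)"
    then have i: "i < n" and j: "j < n" by auto
    show "\<rho> $$ (i,j) = 0\<^sub>m n n $$ (i,j)"
      using index_mult_mat_sum[OF phi_dim mat_adjoint_carrier[OF phi_dim] i j] r0 i j by simp
  qed (insert phi_dim, auto)
  then have "trace_mat \<rho> = 0" unfolding trace_mat_def by simp
  then show False using tr by simp
qed

lemma mat_adjoint_mu: "mat_adjoint \<mu> = mat_adjoint phi * T"
  using mat_adjoint_mult[OF T_carrier phi_dim] T_herm by simp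

abbreviation K :: "complex mat" where "K \<equiv> mat_adjoint phi * (T * phi)"

lemma mat_adjoint_mu_mult_phi: "mat_adjoint \<mu> * phi = K"
  unfolding mat_adjoint_mu using assoc_mult_mat[of "mat_adjoint phi" r n T n phi r] phi_dim T_carrier by simp

lemma LSM0_eq: "LSM0 = T * \<rho> * T"
proof -
  have ap: "mat_adjoint phi \<in> carrier_mat r n" using phi_dim by simp
  have "LSM0 = (T * phi) * (mat_adjoint phi * T)" unfolding mat_adjoint_mu ..
  also have "\<dots> = T * (phi * (mat_adjoint phi * T))"
    using assoc_mult_mat[OF T_carrier phi_dim, of "mat_adjoint phi * T" n] ap T_carrier by simp
  also have "phi * (mat_adjoint phi * T) = \<rho> * T"
    using assoc_mult_mat[OF phi_dim ap T_carrier] by simp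
  also have "T * (\<rho> * T) = T * \<rho> * T"
    using assoc_mult_mat[OF T_carrier rho_carrier T_carrier] by simp
  finally show ?thesis .
qed

lemma LSM_measurement: "is_measurement n LSM"
proof -
  have LSM0_psd: "psd_mat LSM0" by (rule psd_mat_gram[OF mu_carrier])
  have "msum n LSM = twirl LSM0" unfolding LSM_eq_GU by (rule msum_conj_eq_twirl[OF LSM0_carrier])
  also have "\<dots> = T * G * T"
    unfolding LSM0_eq using T_carrier rho_carrier
    by (simp add: mult_twirl_commuting[OF T_carrier T_comm] twirl_mult_commuting[OF T_carrier T_comm])
  also have "\<dots> = 1\<^sub>m n" by (rule T_G_T)
  finally show ?thesis
    unfolding is_measurement_def LSM_eq_GU
    using conj_carrier_mat[OF Us_carrier LSM0_carrier] psd_mat_conj[OF LSM0_psd LSM0_carrier Us_carrier] by auto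
qed

lemma trace_S: "trace_mat S = of_nat m * trace_mat K"
proof -
  have "trace_mat S = trace_mat (twirl (T * \<rho>))"
    unfolding T_mult_G[symmetric] using T_carrier rho_carrier by (simp add: mult_twirl_commuting[OF T_carrier T_comm])
  also have "\<dots> = of_nat m * trace_mat (T * \<rho>)"
    using T_carrier rho_carrier by (simp add: trace_twirl)
  also have "trace_mat (T * \<rho>) = trace_mat K"
    using trace_mat_comm[of "T * phi" n r "mat_adjoint phi"] assoc_mult_mat[OF T_carrier phi_dim, of "mat_adjoint phi" n]
      T_carrier phi_dim by simp
  finally show ?thesis .
qed

lemma trace_rho_LSM0: assumes K: "K = \<alpha> \<cdot>\<^sub>m 1\<^sub>m r"
  shows "trace_mat (\<rho> * LSM0) = \<alpha> * trace_mat K"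
proof -
  have ap: "mat_adjoint phi \<in> carrier_mat r n" using phi_dim by simp
  have am: "mat_adjoint \<mu> \<in> carrier_mat r n" using mu_carrier by simp
  have "\<rho> * LSM0 = phi * (mat_adjoint phi * LSM0)"
    using assoc_mult_mat[OF phi_dim ap LSM0_carrier] by simp
  also have "mat_adjoint phi * LSM0 = (mat_adjoint phi * \<mu>) * mat_adjoint \<mu>"
    using assoc_mult_mat[OF ap mu_carrier am] by simp
  also have "mat_adjoint phi * \<mu> = \<alpha> \<cdot>\<^sub>m 1\<^sub>m r" using K by simp
  also have "(\<alpha> \<cdot>\<^sub>m 1\<^sub>m r) * mat_adjoint \<mu> = \<alpha> \<cdot>\<^sub>m mat_adjoint \<mu>"
    using am by (simp add: mult_smult_assoc_mat[of _ r r _ n] left_mult_one_mat[OF am])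
  also have "phi * (\<alpha> \<cdot>\<^sub>m mat_adjoint \<mu>) = \<alpha> \<cdot>\<^sub>m (phi * mat_adjoint \<mu>)"
    using am phi_dim by (simp add: mult_smult_distrib[of _ n r _ n])
  finally have "trace_mat (\<rho> * LSM0) = \<alpha> * trace_mat (phi * mat_adjoint \<mu>)"
    using trace_mat_smult[of "phi * mat_adjoint \<mu>" n] phi_dim am by simp
  also have "trace_mat (phi * mat_adjoint \<mu>) = trace_mat (mat_adjoint \<mu> * phi)" by (rule trace_mat_comm[OF phi_dim am])
  also have "\<dots> = trace_mat K" unfolding mat_adjoint_mu_mult_phi ..
  finally show ?thesis .
qed

lemma detect_prob_LSM: "detect_prob (equal_priors m) \<rho>s LSM = Re (trace_mat (\<rho> * LSM0))"
  unfolding LSM_eq_GU by (rule detect_prob_GU[OF rho_carrier LSM0_carrier])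

lemma alpha_nonneg_real: assumes K: "K = \<alpha> \<cdot>\<^sub>m 1\<^sub>m r"
  shows "\<alpha> = complex_of_real (Re \<alpha>) \<and> 0 \<le> Re \<alpha>"
proof -
  let ?e = "unit_vec r 0 :: complex vec"
  have e: "?e \<in> carrier_vec r" by simp
  have ce: "conjugate ?e = ?e" by (rule eq_vecI) auto
  have ee: "conjugate ?e \<bullet> ?e = 1" unfolding ce using r_pos e by simp
  have ap: "mat_adjoint phi \<in> carrier_mat r n" using phi_dim by simp
  let ?c = "phi *\<^sub>v ?e"
  have c: "?c \<in> carrier_vec n" using phi_dim by (rule mult_mat_vec_carrier_dim)
  have Tc: "T *\<^sub>v ?c \<in> carrier_vec n" using T_carrier by (rule mult_mat_vec_carrier_dim)
  have "conjugate ?c \<bullet> (T *\<^sub>v ?c) = conjugate ?e \<bullet> (mat_adjoint phi *\<^sub>v (T *\<^sub>v ?c))"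
    using sprod_mat_adjoint[OF ap e Tc] by simp
  also have "mat_adjoint phi *\<^sub>v (T *\<^sub>v ?c) = K *\<^sub>v ?e"
    using assoc_mult_mat_vec[OF ap mult_carrier_mat[OF T_carrier phi_dim] e]
      assoc_mult_mat_vec[OF T_carrier phi_dim e] by simp
  also have "\<dots> = \<alpha> \<cdot>\<^sub>v ?e" unfolding K by (rule smult_one_mat_vec[OF e])
  also have "conjugate ?e \<bullet> (\<alpha> \<cdot>\<^sub>v ?e) = \<alpha>" using ee e by simp
  finally have q: "conjugate ?c \<bullet> (T *\<^sub>v ?c) = \<alpha>" .
  have "cnj \<alpha> = \<alpha>" using cnj_quadratic_form_hermitian[OF T_carrier T_herm c] q by simp
  then have "\<alpha> = complex_of_real (Re \<alpha>)" by (metis complex_cnj_cancel_iff complex_is_Real_iff Reals_cnj_iff of_real_Re)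
  moreover have "0 \<le> Re \<alpha>" using psd_matD[OF T_psd T_carrier c] q by simp
  ultimately show ?thesis by simp
qed

text \<open>The four values of the sesquilinear form \<open>u\<^sup>* T w\<close> on \<open>S x\<close> and \<open>\<rho> x\<close>: Cauchy--Schwarz for
  this form gives \<open>\<rho> \<le> a S\<close> below.\<close>

lemma T_quadratic_forms:
  assumes K: "K = complex_of_real a \<cdot>\<^sub>m 1\<^sub>m r" and x: "x \<in> carrier_vec n"
  shows "conjugate (S *\<^sub>v x) \<bullet> (T *\<^sub>v (S *\<^sub>v x)) = conjugate x \<bullet> (S *\<^sub>v x)"
    and "conjugate (S *\<^sub>v x) \<bullet> (T *\<^sub>v (\<rho> *\<^sub>v x)) = conjugate x \<bullet> (\<rho> *\<^sub>v x)"
    and "conjugate (\<rho> *\<^sub>v x) \<bullet> (T *\<^sub>v (S *\<^sub>v x)) = conjugate x \<bullet> (\<rho> *\<^sub>v x)"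
    and "conjugate (\<rho> *\<^sub>v x) \<bullet> (T *\<^sub>v (\<rho> *\<^sub>v x)) = complex_of_real a * (conjugate x \<bullet> (\<rho> *\<^sub>v x))"
proof -
  have v: "S *\<^sub>v x \<in> carrier_vec n" by (rule mult_mat_vec_carrier_dim[OF S_carrier])
  have w: "\<rho> *\<^sub>v x \<in> carrier_vec n" by (rule mult_mat_vec_carrier_dim[OF rho_carrier])
  have Tv: "T *\<^sub>v (S *\<^sub>v x) = x"
    using assoc_mult_mat_vec[OF T_carrier S_carrier x, symmetric] TS x by simp
  have rho_herm: "mat_adjoint \<rho> = \<rho>" using rho_psd by (simp add: psd_mat_hermitian hermitian_matD)
  show "conjugate (S *\<^sub>v x) \<bullet> (T *\<^sub>v (S *\<^sub>v x)) = conjugate x \<bullet> (S *\<^sub>v x)"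
    unfolding Tv using cnj_conjugate_sprod[OF x v] cnj_quadratic_form_hermitian[OF S_carrier S_herm x] by simp
  show "conjugate (S *\<^sub>v x) \<bullet> (T *\<^sub>v (\<rho> *\<^sub>v x)) = conjugate x \<bullet> (\<rho> *\<^sub>v x)"
    using sprod_mat_adjoint[OF T_carrier v w] unfolding T_herm Tv .
  show "conjugate (\<rho> *\<^sub>v x) \<bullet> (T *\<^sub>v (S *\<^sub>v x)) = conjugate x \<bullet> (\<rho> *\<^sub>v x)"
    unfolding Tv using cnj_conjugate_sprod[OF x w] cnj_quadratic_form_hermitian[OF rho_carrier rho_herm x] by simp
  let ?y = "mat_adjoint phi *\<^sub>v x"
  have y: "?y \<in> carrier_vec r" using phi_dim by (rule mat_adjoint_mult_vec_carrier)
  have rx: "\<rho> *\<^sub>v x = phi *\<^sub>v ?y"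
    using assoc_mult_mat_vec[OF phi_dim mat_adjoint_carrier[OF phi_dim] x] by simp
  have Tw: "T *\<^sub>v (phi *\<^sub>v ?y) \<in> carrier_vec n" by (rule mult_mat_vec_carrier_dim[OF T_carrier])
  have "conjugate (phi *\<^sub>v ?y) \<bullet> (T *\<^sub>v (phi *\<^sub>v ?y)) = conjugate ?y \<bullet> (mat_adjoint phi *\<^sub>v (T *\<^sub>v (phi *\<^sub>v ?y)))"
    using sprod_mat_adjoint[OF mat_adjoint_carrier[OF phi_dim] y Tw] by simp
  also have "mat_adjoint phi *\<^sub>v (T *\<^sub>v (phi *\<^sub>v ?y)) = K *\<^sub>v ?y"
    using assoc_mult_mat_vec[OF mat_adjoint_carrier[OF phi_dim] mult_carrier_mat[OF T_carrier phi_dim] y]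
      assoc_mult_mat_vec[OF T_carrier phi_dim y] by simp
  also have "\<dots> = complex_of_real a \<cdot>\<^sub>v ?y" unfolding K by (rule smult_one_mat_vec[OF y])
  also have "conjugate ?y \<bullet> (complex_of_real a \<cdot>\<^sub>v ?y) = complex_of_real a * (conjugate x \<bullet> (\<rho> *\<^sub>v x))"
    using gram_quadratic_form[OF phi_dim x] y by simp
  finally show "conjugate (\<rho> *\<^sub>v x) \<bullet> (T *\<^sub>v (\<rho> *\<^sub>v x)) = complex_of_real a * (conjugate x \<bullet> (\<rho> *\<^sub>v x))"
    unfolding rx .
qed

lemma rho_le_S:
  assumes K: "K = complex_of_real a \<cdot>\<^sub>m 1\<^sub>m r" and a: "0 \<le> a" and x: "x \<in> carrier_vec n"
  shows "Re (conjugate x \<bullet> (\<rho> *\<^sub>v x)) \<le> a * Re (conjugate x \<bullet> (S *\<^sub>v x))"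
proof -
  define b where "b = (\<Sum>i<r. (cmod ((mat_adjoint phi *\<^sub>v x) $ i))\<^sup>2)"
  have b: "conjugate x \<bullet> (\<rho> *\<^sub>v x) = complex_of_real b"
    unfolding b_def using gram_quadratic_form[OF phi_dim x]
      conjugate_sprod_self[OF mat_adjoint_mult_vec_carrier[OF phi_dim]] by simp
  have b0: "0 \<le> b" unfolding b_def by (simp add: sum_nonneg)
  have v: "S *\<^sub>v x \<in> carrier_vec n" by (rule mult_mat_vec_carrier_dim[OF S_carrier])
  have w: "\<rho> *\<^sub>v x \<in> carrier_vec n" by (rule mult_mat_vec_carrier_dim[OF rho_carrier])
  have "0 \<le> Re (conjugate x \<bullet> (S *\<^sub>v x)) - 2 * t * b + t\<^sup>2 * a * b" for t :: real
  proof -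
    let ?z = "S *\<^sub>v x - complex_of_real t \<cdot>\<^sub>v (\<rho> *\<^sub>v x)"
    have "0 \<le> Re (conjugate ?z \<bullet> (T *\<^sub>v ?z))" using v w by (intro psd_matD[OF T_psd T_carrier]) auto
    also have "\<dots> = Re (conjugate x \<bullet> (S *\<^sub>v x)) - 2 * t * b + t\<^sup>2 * a * b"
      unfolding quadratic_form_diff[OF T_carrier v w] T_quadratic_forms[OF K x] b
      by (simp add: power2_eq_square algebra_simps)
    finally show ?thesis .
  qed
  then have "b \<le> a * Re (conjugate x \<bullet> (S *\<^sub>v x))" by (rule nonneg_quadratic_le[OF _ a b0])
  then show ?thesis using b by simp
qed

lemma rhos_nth: "k < m \<Longrightarrow> \<rho>s ! k = Us ! k * \<rho> * mat_adjoint (Us ! k)"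
  using len by simp

lemma rhos_carrier: "k < m \<Longrightarrow> \<rho>s ! k \<in> carrier_mat n n"
  unfolding rhos_nth by (rule conj_carrier_mat[OF Us_carrier[OF nth_mem_Us] rho_carrier])

lemma rhos_psd: "k < m \<Longrightarrow> psd_mat (\<rho>s ! k)"
  unfolding rhos_nth by (rule psd_mat_conj[OF rho_psd rho_carrier Us_carrier[OF nth_mem_Us]])

lemma psd_smult_S_minus_rhos: assumes K: "K = complex_of_real a \<cdot>\<^sub>m 1\<^sub>m r" and a: "0 \<le> a" and k: "k < m"
  shows "psd_mat (complex_of_real a \<cdot>\<^sub>m S - \<rho>s ! k)"
proof (rule psd_matI)
  let ?U = "Us ! k"
  have U: "?U \<in> set Us" by (rule nth_mem_Us[OF k])
  note Uc = Us_carrier[OF U]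
  have Sc: "complex_of_real a \<cdot>\<^sub>m S \<in> carrier_mat n n" using S_carrier by simp
  show "complex_of_real a \<cdot>\<^sub>m S - \<rho>s ! k \<in> carrier_mat n n" using rhos_carrier[OF k] by (rule minus_carrier_mat)
  have rh: "mat_adjoint (\<rho>s ! k) = \<rho>s ! k" using rhos_psd[OF k] by (simp add: psd_mat_hermitian hermitian_matD)
  show "mat_adjoint (complex_of_real a \<cdot>\<^sub>m S - \<rho>s ! k) = complex_of_real a \<cdot>\<^sub>m S - \<rho>s ! k"
    unfolding mat_adjoint_minus[OF Sc rhos_carrier[OF k]] rh using S_herm by simp
  fix x :: "complex vec" assume x: "x \<in> carrier_vec n"
  let ?y = "mat_adjoint ?U *\<^sub>v x"
  have y: "?y \<in> carrier_vec n" using Uc by (rule mat_adjoint_mult_vec_carrier)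
  have "conjugate x \<bullet> ((complex_of_real a \<cdot>\<^sub>m S - \<rho>s ! k) *\<^sub>v x) =
     complex_of_real a * (conjugate x \<bullet> (S *\<^sub>v x)) - conjugate x \<bullet> (\<rho>s ! k *\<^sub>v x)"
    by (rule quadratic_form_smult_minus[OF S_carrier rhos_carrier[OF k] x])
  also have "conjugate x \<bullet> (S *\<^sub>v x) = conjugate ?y \<bullet> (S *\<^sub>v ?y)"
    using quadratic_form_conj[OF Uc S_carrier x] S_conj[OF U] by simp
  also have "conjugate x \<bullet> (\<rho>s ! k *\<^sub>v x) = conjugate ?y \<bullet> (\<rho> *\<^sub>v ?y)"
    unfolding rhos_nth[OF k] by (rule quadratic_form_conj[OF Uc rho_carrier x])
  finally show "0 \<le> Re (conjugate x \<bullet> ((complex_of_real a \<cdot>\<^sub>m S - \<rho>s ! k) *\<^sub>v x))"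
    using rho_le_S[OF K a y] by simp
qed

lemma LSM_optimal_if_alpha: assumes K: "mat_adjoint \<mu> * phi = \<alpha> \<cdot>\<^sub>m 1\<^sub>m r"
  shows "optimal_measurement n (equal_priors m) \<rho>s LSM"
proof -
  have K': "K = \<alpha> \<cdot>\<^sub>m 1\<^sub>m r" using K mat_adjoint_mu_mult_phi by simp
  obtain a where aa: "\<alpha> = complex_of_real a" and a: "0 \<le> a" using alpha_nonneg_real[OF K'] by blast
  have K2: "K = complex_of_real a \<cdot>\<^sub>m 1\<^sub>m r" using K' aa by simp
  have trK: "trace_mat K = complex_of_real a * of_nat r"
    unfolding K2 trace_mat_smult[OF one_carrier_mat] trace_mat_one by simp
  have dS: "detect_prob (equal_priors m) \<rho>s LSM = a * a * real r"
    unfolding detect_prob_LSM trace_rho_LSM0[OF K'] trK aa by simp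
  show ?thesis unfolding optimal_measurement_def
  proof (intro conjI allI impI)
    show "length LSM = length \<rho>s" using LSM_len len by simp
    show "is_measurement n LSM" by (rule LSM_measurement)
    fix Qs assume "length Qs = length \<rho>s \<and> is_measurement n Qs"
    then have lQ: "length Qs = m" and Q: "is_measurement n Qs" using len by auto
    have "detect_prob (equal_priors m) \<rho>s Qs \<le> a * Re (trace_mat S) / real m"
      using psd_smult_S_minus_rhos[OF K2 a] rhos_carrier len
      by (intro detect_prob_le_dual[OF S_carrier _ _ _ Q lQ]) auto
    also have "\<dots> = a * a * real r" unfolding trace_S trK using m_pos by simp
    finally show "detect_prob (equal_priors m) \<rho>s Qs \<le> detect_prob (equal_priors m) \<rho>s LSM" unfolding dS .
  qed
qed

lemma LSM_optimal_if_rank_one: assumes r1: "r = 1"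
  shows "optimal_measurement n (equal_priors m) \<rho>s LSM"
proof -
  have c: "mat_adjoint \<mu> * phi \<in> carrier_mat r r" using mult_carrier_mat[OF mat_adjoint_carrier[OF mu_carrier] phi_dim] .
  have "mat_adjoint \<mu> * phi = (mat_adjoint \<mu> * phi) $$ (0,0) \<cdot>\<^sub>m 1\<^sub>m r"
    by (rule eq_matI, insert c r1, auto)
  then show ?thesis by (rule LSM_optimal_if_alpha)
qed
end

section \<open>Geometrically uniform optimal measurements\<close>

context unitary_group
begin

definition GU_average :: "complex mat list \<Rightarrow> complex mat" where
  "GU_average Qs = mat_sum n (\<lambda>k. complex_of_real (1 / real m) \<cdot>\<^sub>m (mat_adjoint (Us ! k) * Qs ! k * Us ! k)) {..<m}"

lemma GU_average_term:
  assumes Q: "is_measurement n Qs" and lQ: "length Qs = m" and k: "k < m"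
  defines "X \<equiv> mat_adjoint (Us ! k) * Qs ! k * Us ! k"
  shows "X \<in> carrier_mat n n" and "psd_mat (complex_of_real (1 / real m) \<cdot>\<^sub>m X)"
proof -
  have Qk: "Qs ! k \<in> carrier_mat n n" "psd_mat (Qs ! k)" using measurement_nth[OF Q] k lQ by auto
  have aU: "mat_adjoint (Us ! k) \<in> carrier_mat n n" by (rule adjoint_Us_carrier[OF nth_mem_Us[OF k]])
  show X: "X \<in> carrier_mat n n" unfolding X_def using conj_carrier_mat[OF aU Qk(1)] by simp
  have "psd_mat X" unfolding X_def using psd_mat_conj[OF Qk(2) Qk(1) aU] by simp
  then show "psd_mat (complex_of_real (1 / real m) \<cdot>\<^sub>m X)" by (rule psd_mat_smult[OF _ X]) simp
qed

lemma GU_average_feasible: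
  assumes Q: "is_measurement n Qs" and lQ: "length Qs = m"
  shows "GU_feasible n Us (GU_average Qs)"
proof -
  note avg_term = GU_average_term[OF Q lQ]
  have Qk: "\<And>k. k < m \<Longrightarrow> Qs ! k \<in> carrier_mat n n" using measurement_nth[OF Q] lQ by auto
  have c: "GU_average Qs \<in> carrier_mat n n" unfolding GU_average_def by simp
  have p: "psd_mat (GU_average Qs)" unfolding GU_average_def using avg_term by (intro psd_mat_sum) auto
  have "twirl (GU_average Qs) =
      mat_sum n (\<lambda>k. complex_of_real (1 / real m) \<cdot>\<^sub>m twirl (mat_adjoint (Us ! k) * Qs ! k * Us ! k)) {..<m}"
    unfolding GU_average_def using avg_term(1) by (subst twirl_mat_sum) (auto intro!: mat_sum_cong twirl_smult)
  also have "\<dots> = complex_of_real (1 / real m) \<cdot>\<^sub>m twirl (mat_sum n (\<lambda>k. Qs ! k) {..<m})"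
    using Qk twirl_carrier by (subst twirl_mat_sum) (auto simp: mat_sum_smult twirl_conj_right[OF nth_mem_Us] intro!: mat_sum_cong)
  also have "\<dots> = 1\<^sub>m n"
    using mat_sum_measurement[OF Q] lQ m_pos by (simp add: twirl_one smult_smult_mat)
  finally show ?thesis
    unfolding GU_feasible_def msum_conj_eq_twirl[OF c] using c p psd_mat_hermitian[OF p] by simp
qed

lemma detect_prob_GU_average:
  assumes R: "R \<in> carrier_mat n n" and Q: "is_measurement n Qs" and lQ: "length Qs = m"
  shows "detect_prob (equal_priors m) (map (\<lambda>U. U * R * mat_adjoint U) Us) Qs = Re (trace_mat (R * GU_average Qs))"
proof -
  note avg_term = GU_average_term[OF Q lQ]
  have tk: "trace_mat (R * (complex_of_real (1 / real m) \<cdot>\<^sub>m (mat_adjoint (Us ! k) * Qs ! k * Us ! k))) =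
      complex_of_real (1 / real m) * trace_mat (Us ! k * R * mat_adjoint (Us ! k) * Qs ! k)" if k: "k < m" for k
  proof -
    let ?U = "Us ! k"
    note c = Us_carrier[OF nth_mem_Us[OF k]] adjoint_Us_carrier[OF nth_mem_Us[OF k]] R
      measurement_nth[OF Q, of k, THEN conjunct1]
    have "trace_mat (R * (mat_adjoint ?U * Qs ! k * ?U)) = trace_mat ((R * mat_adjoint ?U * Qs ! k) * ?U)"
      using c k lQ by (simp add: assoc_mult_mat[of _ n n _ n _ n] mult_carrier_mat_square)
    also have "\<dots> = trace_mat (?U * (R * mat_adjoint ?U * Qs ! k))"
      using c k lQ by (intro trace_mat_comm[of _ n n]) auto
    also have "?U * (R * mat_adjoint ?U * Qs ! k) = ?U * R * mat_adjoint ?U * Qs ! k"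
      using c k lQ by (simp add: assoc_mult_mat[of _ n n _ n _ n] mult_carrier_mat_square)
    finally show ?thesis
      using avg_term(1)[OF k] R by (simp add: mult_smult_distrib[of _ n n _ n] trace_mat_smult[of _ n])
  qed
  have "R * GU_average Qs =
      mat_sum n (\<lambda>k. R * (complex_of_real (1 / real m) \<cdot>\<^sub>m (mat_adjoint (Us ! k) * Qs ! k * Us ! k))) {..<m}"
    unfolding GU_average_def using avg_term(1) by (intro mat_sum_mult_left[OF R]) auto
  then have "trace_mat (R * GU_average Qs) =
      (\<Sum>k<m. trace_mat (R * (complex_of_real (1 / real m) \<cdot>\<^sub>m (mat_adjoint (Us ! k) * Qs ! k * Us ! k))))"
    using avg_term(1) R by (simp only:) (rule trace_mat_sum, simp)
  also have "\<dots> = (\<Sum>k<m. complex_of_real (1 / real m) * trace_mat (Us ! k * R * mat_adjoint (Us ! k) * Qs ! k))"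
    using tk by (intro sum.cong) auto
  finally have "trace_mat (R * GU_average Qs) = \<dots>" .
  then show ?thesis
    using len by (simp add: detect_prob_equal_priors Re_sum)
qed

lemma GU_measurement_optimal:
  assumes R: "R \<in> carrier_mat n n" and P: "GU_maximizer n Us R P"
  shows "optimal_measurement n (equal_priors m) (map (\<lambda>U. U * R * mat_adjoint U) Us)
    (map (\<lambda>U. U * P * mat_adjoint U) Us)"
  unfolding optimal_measurement_def
proof (intro conjI allI impI)
  have Pc: "P \<in> carrier_mat n n" and Pp: "psd_mat P"
    and Psum: "msum n (map (\<lambda>U. U * P * mat_adjoint U) Us) = 1\<^sub>m n"
    using P unfolding GU_maximizer_def GU_feasible_def by auto
  show "is_measurement n (map (\<lambda>U. U * P * mat_adjoint U) Us)"
    unfolding is_measurement_def using Psum conj_carrier_mat[OF Us_carrier Pc] psd_mat_conj[OF Pp Pc Us_carrier]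
    by auto
  fix Qs assume "length Qs = length (map (\<lambda>U. U * R * mat_adjoint U) Us) \<and> is_measurement n Qs"
  then have lQ: "length Qs = m" and Q: "is_measurement n Qs" using len by auto
  have "Re (trace_mat (R * GU_average Qs)) \<le> Re (trace_mat (R * P))"
    using P GU_average_feasible[OF Q lQ] unfolding GU_maximizer_def by blast
  then show "detect_prob (equal_priors m) (map (\<lambda>U. U * R * mat_adjoint U) Us) Qs \<le>
      detect_prob (equal_priors m) (map (\<lambda>U. U * R * mat_adjoint U) Us) (map (\<lambda>U. U * P * mat_adjoint U) Us)"
    unfolding detect_prob_GU_average[OF R Q lQ] detect_prob_GU[OF R Pc] .
qed simp
end

section \<open>Existence of a GU maximizer\<close>

lemma continuous_on_coordinate[continuous_intros]: "continuous_on S (\<lambda>x::'a \<Rightarrow> 'b::topological_space. x i)"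
  by (rule continuous_on_subset[OF continuous_on_product_coordinates]) simp

lemma closed_Collect_imp_const: "closed {x. Q x} \<Longrightarrow> closed {x. c \<longrightarrow> Q x}"
  by (cases c) auto

lemma conjugate_unit_vec_sprod: "i < n \<Longrightarrow> w \<in> carrier_vec n \<Longrightarrow> conjugate (unit_vec n i) \<bullet> w = (w :: complex vec) $ i"
proof -
  assume i: "i < n" and w: "w \<in> carrier_vec n"
  have "conjugate (unit_vec n i :: complex vec) = unit_vec n i" by (rule eq_vecI) (auto simp: unit_vec_def)
  then show ?thesis using i w by simp
qed

lemma quadratic_form_unit_vec:
  "P \<in> carrier_mat n n \<Longrightarrow> a < n \<Longrightarrow> b < n \<Longrightarrow>
    conjugate (unit_vec n a) \<bullet> (P *\<^sub>v unit_vec n b) = (P :: complex mat) $$ (a,b)"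
  using conjugate_unit_vec_sprod[of a n "P *\<^sub>v unit_vec n b"] mult_mat_vec_carrier_dim[of P n n] by simp

context unitary_group
begin

lemma GU_feasible_quadratic_form_le: assumes F: "GU_feasible n Us P" and v: "v \<in> carrier_vec n"
  shows "Re (conjugate v \<bullet> (P *\<^sub>v v)) \<le> Re (conjugate v \<bullet> v)"
proof -
  have Pc: "P \<in> carrier_mat n n" and Pp: "psd_mat P" and tw: "twirl P = 1\<^sub>m n"
    using F msum_conj_eq_twirl unfolding GU_feasible_def by auto
  have Fc: "\<And>V. V \<in> set Us \<Longrightarrow> V * P * mat_adjoint V \<in> carrier_mat n n"
    using conj_carrier_mat[OF Us_carrier Pc] .
  have "conjugate v \<bullet> v = conjugate v \<bullet> (twirl P *\<^sub>v v)" unfolding tw using v by simp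
  also have "\<dots> = (\<Sum>V\<in>set Us. conjugate v \<bullet> ((V * P * mat_adjoint V) *\<^sub>v v))"
    unfolding twirl_def by (rule quadratic_form_mat_sum[OF Fc v finite_set])
  finally have e: "Re (conjugate v \<bullet> v) = (\<Sum>V\<in>set Us. Re (conjugate v \<bullet> ((V * P * mat_adjoint V) *\<^sub>v v)))"
    by (simp add: Re_sum)
  have one: "1\<^sub>m n \<in> set Us" using first nth_mem_Us[OF m_pos] by simp
  have "Re (conjugate v \<bullet> ((1\<^sub>m n * P * mat_adjoint (1\<^sub>m n)) *\<^sub>v v)) \<le> Re (conjugate v \<bullet> v)"
    unfolding e using psd_matD[OF psd_mat_conj[OF Pp Pc Us_carrier] Fc v]
    by (intro member_le_sum[OF one]) auto
  then show ?thesis using Pc by simp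
qed

lemma GU_feasible_diag_bound: assumes F: "GU_feasible n Us P" and a: "a < n"
  shows "0 \<le> Re (P $$ (a,a)) \<and> Re (P $$ (a,a)) \<le> 1"
proof -
  have Pc: "P \<in> carrier_mat n n" and Pp: "psd_mat P" using F unfolding GU_feasible_def by auto
  have ea: "unit_vec n a \<in> carrier_vec n" by simp
  show ?thesis
    using GU_feasible_quadratic_form_le[OF F ea] psd_matD[OF Pp Pc ea]
    unfolding quadratic_form_unit_vec[OF Pc a a] conjugate_unit_vec_sprod[OF a ea] using a by simp
qed

text \<open>For \<open>i \<noteq> j\<close> the test vector \<open>e\<^sub>i + c e\<^sub>j\<close> with \<open>c P\<^sub>i\<^sub>j = |P\<^sub>i\<^sub>j|\<close> gives
  \<open>P\<^sub>i\<^sub>i + P\<^sub>j\<^sub>j + 2 |P\<^sub>i\<^sub>j| \<le> 2\<close>.\<close>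

lemma GU_feasible_entry_bound: assumes F: "GU_feasible n Us P" and i: "i < n" and j: "j < n"
  shows "cmod (P $$ (i,j)) \<le> 1"
proof -
  have Pc: "P \<in> carrier_mat n n" and Pp: "psd_mat P" using F unfolding GU_feasible_def by auto
  have Ph: "mat_adjoint P = P" using Pp by (simp add: psd_mat_hermitian hermitian_matD)
  have Pji: "P $$ (j,i) = cnj (P $$ (i,j))" using Ph Pc i j by (metis index_mat_adjoint carrier_matD(1) carrier_matD(2))
  let ?ei = "unit_vec n i :: complex vec" and ?ej = "unit_vec n j :: complex vec"
  have ei: "?ei \<in> carrier_vec n" and ej: "?ej \<in> carrier_vec n" by auto
  note q = quadratic_form_unit_vec[OF Pc] and qd = GU_feasible_diag_bound[OF F]
  show ?thesis
  proof (cases "i = j")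
    case True
    have "cnj (P $$ (i,i)) = P $$ (i,i)" using Pji True by simp
    then have "P $$ (i,i) = complex_of_real (Re (P $$ (i,i)))"
      by (metis complex_cnj_cancel_iff complex_is_Real_iff Reals_cnj_iff of_real_Re)
    then have "cmod (P $$ (i,i)) = \<bar>Re (P $$ (i,i))\<bar>" by (metis norm_of_real)
    then show ?thesis using qd[OF i] True by simp
  next
    case False
    show ?thesis
    proof (cases "P $$ (i,j) = 0")
      case True then show ?thesis by simp
    next
      case nz: False
      define c where "c = cnj (P $$ (i,j)) / complex_of_real (cmod (P $$ (i,j)))"
      have cn: "cmod (P $$ (i,j)) \<noteq> 0" using nz by simp
      have c1: "c * P $$ (i,j) = complex_of_real (cmod (P $$ (i,j)))"
        unfolding c_def using cn by (simp add: field_simps complex_norm_square[symmetric] power2_eq_square mult.commute)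
      have c2: "cnj c * P $$ (j,i) = complex_of_real (cmod (P $$ (i,j)))"
        unfolding Pji using arg_cong[OF c1, of cnj] by simp
      have cc: "cnj c * c = 1"
        unfolding c_def using cn by (simp add: field_simps complex_norm_square[symmetric] power2_eq_square)
      let ?v = "?ei - (- c) \<cdot>\<^sub>v ?ej"
      have v: "?v \<in> carrier_vec n" by simp
      have qP: "conjugate ?v \<bullet> (P *\<^sub>v ?v) = P $$ (i,i) + P $$ (j,j) + 2 * complex_of_real (cmod (P $$ (i,j)))"
        unfolding quadratic_form_diff[OF Pc ei ej] q[OF i i] q[OF i j] q[OF j i] q[OF j j]
        using c1 c2 cc by (simp add: algebra_simps)
      have "conjugate ?v \<bullet> (1\<^sub>m n *\<^sub>v ?v) = 1\<^sub>m n $$ (i,i) + 1\<^sub>m n $$ (j,j) + (- c) * (- 1\<^sub>m n $$ (i,j)) + (- cnj c) * (- 1\<^sub>m n $$ (j,i))"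
        unfolding quadratic_form_diff[OF one_carrier_mat ei ej] conjugate_unit_vec_sprod[OF i mult_mat_vec_carrier_dim[OF one_carrier_mat]]
          conjugate_unit_vec_sprod[OF j mult_mat_vec_carrier_dim[OF one_carrier_mat]] using i j cc by (simp add: algebra_simps)
      also have "\<dots> = 2" using i j False by simp
      finally have q1: "conjugate ?v \<bullet> ?v = 2" using v by simp
      have "Re (conjugate ?v \<bullet> (P *\<^sub>v ?v)) \<le> Re (conjugate ?v \<bullet> ?v)" by (rule GU_feasible_quadratic_form_le[OF F v])
      then have "Re (P $$ (i,i)) + Re (P $$ (j,j)) + 2 * cmod (P $$ (i,j)) \<le> 2" unfolding qP q1 by simp
      then show ?thesis using qd[OF i] qd[OF j] by simp
    qed
  qed
qed
end

definition mat_entries :: "nat \<Rightarrow> complex mat \<Rightarrow> nat \<times> nat \<Rightarrow> complex" where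
  "mat_entries n P = (\<lambda>(i,j). if i < n \<and> j < n then P $$ (i,j) else 0)"

lemma mat_mat_entries: "P \<in> carrier_mat n n \<Longrightarrow> mat n n (mat_entries n P) = P"
  unfolding mat_entries_def by (rule eq_matI) auto

lemma quadratic_form_mat: "v \<in> carrier_vec n \<Longrightarrow>
  conjugate v \<bullet> (mat n n x *\<^sub>v v) = (\<Sum>i<n. cnj (v $ i) * (\<Sum>j<n. x (i,j) * v $ j))"
proof -
  assume v: "v \<in> carrier_vec n"
  have M: "mat n n x \<in> carrier_mat n n" by simp
  have c: "mat n n x *\<^sub>v v \<in> carrier_vec n" using M by (rule mult_mat_vec_carrier_dim)
  show ?thesis unfolding conjugate_sprod_sum[OF v c] using index_mult_mat_vec_sum[OF M v] by (intro sum.cong refl) simp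
qed

lemma hermitian_mat_iff: "hermitian_mat (mat n n x) \<longleftrightarrow> (\<forall>i j. i < n \<longrightarrow> j < n \<longrightarrow> x (j,i) = cnj (x (i,j)))"
proof
  assume h: "hermitian_mat (mat n n x)"
  then have a: "mat_adjoint (mat n n x) = mat n n x" by (rule hermitian_matD)
  show "\<forall>i j. i < n \<longrightarrow> j < n \<longrightarrow> x (j,i) = cnj (x (i,j))"
  proof (intro allI impI)
    fix i j assume i: "i < n" and j: "j < n"
    have "mat_adjoint (mat n n x) $$ (j,i) = mat n n x $$ (j,i)" using a by simp
    then show "x (j,i) = cnj (x (i,j))" using i j by simp
  qed
next
  assume h: "\<forall>i j. i < n \<longrightarrow> j < n \<longrightarrow> x (j,i) = cnj (x (i,j))"
  have "mat_adjoint (mat n n x) = mat n n x"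
  proof (rule eq_matI)
    fix i j assume "i < dim_row (mat n n x)" "j < dim_col (mat n n x)"
    then have i: "i < n" and j: "j < n" by auto
    have "x (i,j) = cnj (x (j,i))" using h j i by blast
    then show "mat_adjoint (mat n n x) $$ (i,j) = mat n n x $$ (i,j)" using i j by simp
  qed simp_all
  then show "hermitian_mat (mat n n x)" by (intro hermitian_matI[of _ n]) auto
qed

lemma psd_mat_iff: "psd_mat (mat n n x) \<longleftrightarrow> hermitian_mat (mat n n x) \<and>
   (\<forall>v. v \<in> carrier_vec n \<longrightarrow> 0 \<le> Re (\<Sum>i<n. cnj (v $ i) * (\<Sum>j<n. x (i,j) * v $ j)))"
  unfolding psd_mat_def using quadratic_form_mat by auto

lemma index_conj_mat: assumes U: "U \<in> carrier_mat n n" and M: "M \<in> carrier_mat n n" and a: "a < n" and b: "b < n"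
  shows "(U * M * mat_adjoint U) $$ (a,b) = (\<Sum>c<n. \<Sum>d<n. U $$ (a,c) * M $$ (c,d) * cnj (U $$ (b,d)))"
proof -
  have UM: "U * M \<in> carrier_mat n n" using U M by simp
  have aU: "mat_adjoint U \<in> carrier_mat n n" using U by simp
  have "(U * M * mat_adjoint U) $$ (a,b) = (\<Sum>d<n. (U * M) $$ (a,d) * mat_adjoint U $$ (d,b))"
    by (rule index_mult_mat_sum[OF UM aU a b])
  also have "\<dots> = (\<Sum>d<n. (\<Sum>c<n. U $$ (a,c) * M $$ (c,d)) * cnj (U $$ (b,d)))"
    using U b by (intro sum.cong refl) (simp add: index_mult_mat_sum[OF U M a])
  also have "\<dots> = (\<Sum>c<n. \<Sum>d<n. U $$ (a,c) * M $$ (c,d) * cnj (U $$ (b,d)))"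
    unfolding sum_distrib_right by (rule sum.swap)
  finally show ?thesis .
qed

lemma trace_mat_entries: assumes R: "R \<in> carrier_mat n n"
  shows "trace_mat (R * mat n n x) = (\<Sum>i<n. \<Sum>k<n. R $$ (i,k) * x (k,i))"
proof -
  have M: "mat n n x \<in> carrier_mat n n" by simp
  show ?thesis unfolding trace_mat_carrier[OF mult_carrier_mat[OF R M]]
    by (intro sum.cong refl) (simp add: index_mult_mat_sum[OF R M])
qed

lemma psd_one_mat: "psd_mat (1\<^sub>m n)"
  using psd_mat_gram[OF one_carrier_mat[of n]] by simp

definition complex_square :: "complex set" where
  "complex_square = (\<lambda>p::real \<times> real. complex_of_real (fst p) + \<i> * complex_of_real (snd p)) ` ({-1..1} \<times> {-1..1})"

lemma compact_complex_square: "compact complex_square"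
  unfolding complex_square_def
  by (intro compact_continuous_image compact_Times compact_Icc continuous_intros)

lemma complex_square_mem: "cmod z \<le> 1 \<Longrightarrow> z \<in> complex_square"
proof -
  assume z: "cmod z \<le> 1"
  have "\<bar>Re z\<bar> \<le> 1" using abs_Re_le_cmod[of z] z by simp
  moreover have "\<bar>Im z\<bar> \<le> 1" using abs_Im_le_cmod[of z] z by simp
  moreover have "z = complex_of_real (Re z) + \<i> * complex_of_real (Im z)" by (simp add: complex_eq_iff)
  ultimately show ?thesis unfolding complex_square_def by (intro image_eqI[of _ _ "(Re z, Im z)"]) auto
qed

context unitary_group
begin

abbreviation twirl_identity_entries :: "(nat \<times> nat \<Rightarrow> complex) \<Rightarrow> bool" where
  "twirl_identity_entries x \<equiv> (\<forall>a b. a < n \<longrightarrow> b < n \<longrightarrow>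
   (\<Sum>k<m. \<Sum>c<n. \<Sum>d<n. Us ! k $$ (a,c) * x (c,d) * cnj (Us ! k $$ (b,d))) = (if a = b then 1 else 0))"

lemma twirl_mat_eq_one_iff: "twirl (mat n n x) = 1\<^sub>m n \<longleftrightarrow> twirl_identity_entries x"
proof -
  have M: "mat n n x \<in> carrier_mat n n" by simp
  have e: "mat_sum n (\<lambda>k. Us ! k * mat n n x * mat_adjoint (Us ! k)) {..<m} $$ (a,b) =
     (\<Sum>k<m. \<Sum>c<n. \<Sum>d<n. Us ! k $$ (a,c) * x (c,d) * cnj (Us ! k $$ (b,d)))" if a: "a < n" and b: "b < n" for a b
  proof -
    have "mat_sum n (\<lambda>k. Us ! k * mat n n x * mat_adjoint (Us ! k)) {..<m} $$ (a,b) =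
       (\<Sum>k<m. (Us ! k * mat n n x * mat_adjoint (Us ! k)) $$ (a,b))" by (rule mat_sum_index[OF a b])
    also have "\<dots> = (\<Sum>k<m. \<Sum>c<n. \<Sum>d<n. Us ! k $$ (a,c) * mat n n x $$ (c,d) * cnj (Us ! k $$ (b,d)))"
      by (intro sum.cong refl) (simp add: index_conj_mat[OF Us_carrier[OF nth_mem_Us] M a b])
    also have "\<dots> = (\<Sum>k<m. \<Sum>c<n. \<Sum>d<n. Us ! k $$ (a,c) * x (c,d) * cnj (Us ! k $$ (b,d)))"
      by (intro sum.cong refl) simp
    finally show ?thesis .
  qed
  show ?thesis unfolding mat_sum_nth_eq_twirl[symmetric]
  proof
    assume h: "mat_sum n (\<lambda>k. Us ! k * mat n n x * mat_adjoint (Us ! k)) {..<m} = 1\<^sub>m n"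
    show "twirl_identity_entries x"
    proof (intro allI impI)
      fix a b assume a: "a < n" and b: "b < n"
      show "(\<Sum>k<m. \<Sum>c<n. \<Sum>d<n. Us ! k $$ (a,c) * x (c,d) * cnj (Us ! k $$ (b,d))) = (if a = b then 1 else 0)"
        using e[OF a b] h a b by simp
    qed
  next
    assume h: "twirl_identity_entries x"
    show "mat_sum n (\<lambda>k. Us ! k * mat n n x * mat_adjoint (Us ! k)) {..<m} = 1\<^sub>m n"
      by (rule eq_matI, insert e h, auto)
  qed
qed

lemma GU_feasible_uniform: "GU_feasible n Us (complex_of_real (1 / real m) \<cdot>\<^sub>m 1\<^sub>m n)"
proof -
  let ?P = "complex_of_real (1 / real m) \<cdot>\<^sub>m 1\<^sub>m n"
  have Pc: "?P \<in> carrier_mat n n" by simp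
  have Pp: "psd_mat ?P" by (rule psd_mat_smult[OF psd_one_mat one_carrier_mat]) simp
  have "twirl ?P = 1\<^sub>m n"
    using m_pos by (simp add: twirl_smult twirl_one smult_smult_mat)
  then show ?thesis
    unfolding GU_feasible_def msum_conj_eq_twirl[OF Pc] using Pc Pp psd_mat_hermitian[OF Pp] by simp
qed

text \<open>GU-feasible operators are encoded by their entries as points of the product space
  \<open>nat \<times> nat \<Rightarrow> complex\<close>, where the feasible set is closed and, by the entry bound above,
  bounded.\<close>

definition GU_feasible_entries :: "(nat \<times> nat \<Rightarrow> complex) set" where
  "GU_feasible_entries = {x :: nat \<times> nat \<Rightarrow> complex. (\<forall>i j. (n \<le> i \<or> n \<le> j) \<longrightarrow> x (i,j) = 0) \<and> GU_feasible n Us (mat n n x)}"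

lemma GU_feasible_entries_eq: "GU_feasible_entries = {x. \<forall>i j. (n \<le> i \<or> n \<le> j) \<longrightarrow> x (i,j) = 0} \<inter>
  {x. \<forall>i j. i < n \<longrightarrow> j < n \<longrightarrow> x (j,i) = cnj (x (i,j))} \<inter>
  {x. \<forall>v. v \<in> carrier_vec n \<longrightarrow> 0 \<le> Re (\<Sum>i<n. cnj (v $ i) * (\<Sum>j<n. x (i,j) * v $ j))} \<inter> {x. twirl_identity_entries x}"
  unfolding GU_feasible_entries_def GU_feasible_def psd_mat_iff hermitian_mat_iff msum_conj_eq_twirl[OF mat_carrier] twirl_mat_eq_one_iff by auto

lemma closed_GU_feasible_entries: "closed GU_feasible_entries"
  unfolding GU_feasible_entries_eq
proof (intro closed_Int)
  show "closed {x :: nat \<times> nat \<Rightarrow> complex. \<forall>i j. (n \<le> i \<or> n \<le> j) \<longrightarrow> x (i,j) = 0}"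
    by (intro closed_Collect_all closed_Collect_imp_const closed_Collect_eq continuous_intros)
  show "closed {x :: nat \<times> nat \<Rightarrow> complex. \<forall>i j. i < n \<longrightarrow> j < n \<longrightarrow> x (j,i) = cnj (x (i,j))}"
    by (intro closed_Collect_all closed_Collect_imp_const closed_Collect_eq continuous_intros)
  show "closed {x :: nat \<times> nat \<Rightarrow> complex. \<forall>v. v \<in> carrier_vec n \<longrightarrow> 0 \<le> Re (\<Sum>i<n. cnj (v $ i) * (\<Sum>j<n. x (i,j) * v $ j))}"
    by (intro closed_Collect_all closed_Collect_imp_const closed_Collect_le continuous_intros)
  show "closed {x :: nat \<times> nat \<Rightarrow> complex. twirl_identity_entries x}"
    by (intro closed_Collect_all closed_Collect_imp_const closed_Collect_eq continuous_intros)
qed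

lemma GU_feasible_entries_bounded: "GU_feasible_entries \<subseteq> PiE UNIV (\<lambda>_. complex_square)"
proof
  fix x assume x: "x \<in> GU_feasible_entries"
  then have z: "\<And>i j. (n \<le> i \<or> n \<le> j) \<Longrightarrow> x (i,j) = 0" and F: "GU_feasible n Us (mat n n x)"
    unfolding GU_feasible_entries_def by auto
  have "x p \<in> complex_square" for p
  proof (cases p)
    case (Pair i j)
    show ?thesis
    proof (cases "i < n \<and> j < n")
      case True
      then have "cmod (mat n n x $$ (i,j)) \<le> 1" by (intro GU_feasible_entry_bound[OF F]) auto
      then show ?thesis using True Pair by (simp add: complex_square_mem)
    next
      case False
      then show ?thesis using z Pair complex_square_mem[of 0] by auto
    qed
  qed
  then show "x \<in> PiE UNIV (\<lambda>_. complex_square)" by auto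
qed

lemma compact_GU_feasible_entries: "compact GU_feasible_entries"
proof -
  have "compactin (product_topology (\<lambda>_. euclidean) UNIV) (PiE UNIV (\<lambda>_::nat \<times> nat. complex_square))"
    by (simp add: compactin_PiE compact_complex_square)
  then have "compact (PiE UNIV (\<lambda>_::nat \<times> nat. complex_square))"
    by (simp add: euclidean_product_topology compactin_euclidean_iff)
  from compact_Int_closed[OF this closed_GU_feasible_entries] show ?thesis using GU_feasible_entries_bounded by (simp add: Int_absorb1)
qed

lemma mat_entries_GU_feasible: "GU_feasible n Us P \<Longrightarrow> mat_entries n P \<in> GU_feasible_entries"
  unfolding GU_feasible_entries_def using mat_mat_entries[of P n] by (auto simp: GU_feasible_def mat_entries_def)

lemma GU_maximizer_exists: assumes R: "R \<in> carrier_mat n n"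
  shows "\<exists>P. GU_maximizer n Us R P"
proof -
  let ?f = "\<lambda>x. Re (\<Sum>i<n. \<Sum>k<n. R $$ (i,k) * x (k,i))"
  have ne: "GU_feasible_entries \<noteq> {}" using mat_entries_GU_feasible[OF GU_feasible_uniform] by auto
  have cont: "continuous_on GU_feasible_entries ?f" by (intro continuous_intros)
  obtain x where x: "x \<in> GU_feasible_entries" and xm: "\<And>y. y \<in> GU_feasible_entries \<Longrightarrow> ?f y \<le> ?f x"
    using continuous_attains_sup[OF compact_GU_feasible_entries ne cont] by blast
  let ?P = "mat n n x"
  have Pf: "GU_feasible n Us ?P" using x unfolding GU_feasible_entries_def by simp
  have "GU_maximizer n Us R ?P" unfolding GU_maximizer_def
  proof (intro conjI allI impI)
    show "GU_feasible n Us ?P" by (rule Pf)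
    fix Q assume Q: "GU_feasible n Us Q"
    have Qc: "Q \<in> carrier_mat n n" using Q unfolding GU_feasible_def by simp
    have "Re (trace_mat (R * Q)) = ?f (mat_entries n Q)"
      using trace_mat_entries[OF R, of "mat_entries n Q"] mat_mat_entries[OF Qc] by simp
    also have "\<dots> \<le> ?f x" by (rule xm[OF mat_entries_GU_feasible[OF Q]])
    also have "\<dots> = Re (trace_mat (R * ?P))" using trace_mat_entries[OF R, of x] by simp
    finally show "Re (trace_mat (R * Q)) \<le> Re (trace_mat (R * ?P))" .
  qed
  then show ?thesis by blast
qed
end


theorem theorem2:
  fixes n m r :: nat and Us :: "complex mat list" and phi :: "complex mat"
  defines "rho \<equiv> phi * mat_adjoint phi"
  defines "rhos \<equiv> map (\<lambda>U. U * rho * mat_adjoint U) Us"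
  defines "phis \<equiv> map (\<lambda>U. U * phi) Us"
  defines "Phi \<equiv> block_cols n phis"
  defines "mu \<equiv> inv_sqrt (Phi * mat_adjoint Phi) * phi"
  defines "Sig \<equiv> lsm n (equal_priors m) phis"
  assumes len: "length Us = m" and m_pos: "0 < m"
    and dist: "distinct Us"
    and unit: "\<forall>U \<in> set Us. unitary_mat n U"
    and first: "Us ! 0 = 1\<^sub>m n"
    and mult_closed: "\<forall>U \<in> set Us. \<forall>V \<in> set Us. U * V \<in> set Us"
    and inv_closed: "\<forall>U \<in> set Us. mat_adjoint U \<in> set Us"
    and phi_dim: "phi \<in> carrier_mat n r"
    and tr: "trace_mat rho = 1"
    and spans: "vspan n (\<Union>i<m. eigvecs_nz n (rhos ! i)) = carrier_vec n"
  shows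
    "(length Sig = m \<and>
      (\<forall>i<m. Sig ! i = (Us ! i * mu) * mat_adjoint (Us ! i * mu))) \<and>
     (\<forall>i<m. Sig ! i = Us ! i * Sig ! 0 * mat_adjoint (Us ! i)) \<and>
     (\<forall>i<m. trace_mat (rhos ! i * Sig ! i) = trace_mat (rhos ! 0 * Sig ! 0)) \<and>
     ((\<exists>\<alpha>. mat_adjoint mu * phi = \<alpha> \<cdot>\<^sub>m 1\<^sub>m r) \<longrightarrow>
        optimal_measurement n (equal_priors m) rhos Sig) \<and>
     (r = 1 \<longrightarrow> optimal_measurement n (equal_priors m) rhos Sig) \<and>
     ((\<exists>P. GU_maximizer n Us rho P) \<and>
      (\<forall>P. GU_maximizer n Us rho P \<longrightarrow>
           optimal_measurement n (equal_priors m) rhos (map (\<lambda>U. U * P * mat_adjoint U) Us)))"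
proof -
  interpret gu_state_set n m Us r phi
    using len m_pos dist unit first mult_closed inv_closed phi_dim tr spans
    by unfold_locales (simp_all add: rho_def rhos_def)
  show ?thesis
    unfolding mu_def Sig_def rhos_def rho_def Phi_def phis_def Phi_mult_adjoint
  proof (intro conjI allI impI)
    fix i assume "i < m"
    then show "LSM ! i = Us ! i * (T * phi) * mat_adjoint (Us ! i * (T * phi))" by (rule LSM_nth)
  next
    fix i assume "i < m"
    then show "LSM ! i = Us ! i * LSM ! 0 * mat_adjoint (Us ! i)" unfolding LSM_nth_0 by (rule LSM_conj)
  next
    fix i assume "i < m"
    then show "trace_mat (\<rho>s ! i * LSM ! i) = trace_mat (\<rho>s ! 0 * LSM ! 0)"
      using trace_rhos_LSM m_pos by simp
  next
    assume "\<exists>\<alpha>. mat_adjoint (T * phi) * phi = \<alpha> \<cdot>\<^sub>m 1\<^sub>m r"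
    then show "optimal_measurement n (equal_priors m) \<rho>s LSM" using LSM_optimal_if_alpha by blast
  next
    fix P assume "GU_maximizer n Us \<rho> P"
    then show "optimal_measurement n (equal_priors m) \<rho>s (map (\<lambda>U. U * P * mat_adjoint U) Us)"
      by (rule GU_measurement_optimal[OF rho_carrier])
  qed (use LSM_len LSM_optimal_if_rank_one GU_maximizer_exists[OF rho_carrier] in auto)
qed
end
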